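(* Let $[\gamma]\in J$, $M=M_\gamma$, and $i=l(M)$, and let $L_M=K(\sqrt[p]{\delta}:[\delta]\in M)$. (1) If $i<p$ then $[\gamma]\in J_{p-1}$ and $\mathrm{Gal}(L_M/F)\cong B_{i,e([\gamma])}$ (as extensions of $G$ by $\mathrm{Gal}(L_M/K)\cong A/A_i$). (2) If $i=p$ then $\mathrm{Gal}(L_M/F)\cong B_{p,0}$.
   Context: $p$ odd prime; $F$ a field containing a primitive $p$th root of unity $\xi_p$; $K=F(\sqrt[p]{a})$, $a\in F^\times$, cyclic of degree $p$ over $F$; $G=\mathrm{Gal}(K/F)$ with generator $\sigma$ satisfying $\sigma(\sqrt[p]{a})=\xi_p\sqrt[p]{a}$; $\rho=\sigma-1$. $J=K^\times/K^{\times p}$ is an $\mathbb{F}_p[G]$-module written multiplicatively with exponential action; $[\gamma]$ is the class of $\gamma\in K^\times$. $J_i=\ker(\rho^i)$ on $J$. $M_\gamma$ is the $\mathbb{F}_p[G]$-submodule generated by $[\gamma]$, and $l(M)$ (the length) is the $\mathbb{F}_p$-dimension of a cyclic module $M$; if $M$ is generated by $m$, $l(M)$ is the least $i$ with $m^{\rho^i}$ trivial. Index: for $[\gamma]\in J_{p-1}$, $N_{K/F}(\gamma)$ is a $p$th power in $K$, and $e([\gamma])\in\mathbb{F}_p$ is defined by $\xi_p^{e([\gamma])}=\sigma(\delta)/\delta$ for any $\delta\in K$ with $\delta^p=N_{K/F}(\gamma)$; $e$ is a well-defined homomorphism $J_{p-1}\to\mathbb{F}_p$. $A$, $A_i$: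 $A$ is the free $\mathbb{F}_p[G]$-module on $\tau$ with $\sigma$ acting as multiplication by $\tau$, $A_i$ the span of $(\tau-1)^k$, $k\ge i$ ($A_p=0$). $B_{i,e}$ is the extension $1\to A/A_i\to B_{i,e}\to G\to 1$ in which a lift $\tilde\sigma$ of $\sigma$ acts on $A/A_i$ by multiplication by $\tau$ and $\tilde\sigma^p=e\,\overline{(\tau-1)}^{\,i-1}$. *)

theory Defs
  imports Main "HOL-Computational_Algebra.Primes" "HOL-Algebra.Group"
begin

definition is_subfield :: "'a::field set \<Rightarrow> bool" where
  "is_subfield S \<longleftrightarrow> 0 \<in> S \<and> 1 \<in> S \<and>
     (\<forall>x\<in>S. \<forall>y\<in>S. x + y \<in> S \<and> x - y \<in> S \<and> x * y \<in> S) \<and>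
     (\<forall>x\<in>S. x \<noteq> 0 \<longrightarrow> inverse x \<in> S)"

definition field_gen :: "'a::field set \<Rightarrow> 'a set" where
  "field_gen S = \<Inter>{T. is_subfield T \<and> S \<subseteq> T}"

definition is_aut_over :: "'a::field set \<Rightarrow> 'a set \<Rightarrow> ('a \<Rightarrow> 'a) \<Rightarrow> bool" where
  "is_aut_over L F f \<longleftrightarrow> bij_betw f L L \<and>
     (\<forall>x\<in>L. \<forall>y\<in>L. f (x + y) = f x + f y \<and> f (x * y) = f x * f y) \<and>
     (\<forall>x\<in>F. f x = x)"

definition Gal :: "'a::field set \<Rightarrow> 'a set \<Rightarrow> ('a \<Rightarrow> 'a) set" where
  "Gal L F = {f. is_aut_over L F f \<and> (\<forall>x. x \<notin> L \<longrightarrow> f x = x)}"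

definition Gal_group :: "'a::field set \<Rightarrow> 'a set \<Rightarrow> ('a \<Rightarrow> 'a) monoid" where
  "Gal_group L F = \<lparr>carrier = Gal L F, mult = (\<lambda>f g. f \<circ> g), one = id\<rparr>"

text \<open>gamma is a p-th power in K (i.e. its class in J = K^*/K^*p is trivial).\<close>
definition pth_power_in :: "nat \<Rightarrow> 'a::field set \<Rightarrow> 'a \<Rightarrow> bool" where
  "pth_power_in p K x \<longleftrightarrow> (\<exists>b\<in>K. b \<noteq> 0 \<and> x = b ^ p)"

text \<open>rho = sigma - 1, written multiplicatively: gamma^rho = sigma(gamma)/gamma.\<close>
definition rho_iter :: "('a::field \<Rightarrow> 'a) \<Rightarrow> nat \<Rightarrow> 'a \<Rightarrow> 'a" where
  "rho_iter \<sigma> n = ((\<lambda>x. \<sigma> x / x) ^^ n)"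

definition mod_length :: "nat \<Rightarrow> 'a::field set \<Rightarrow> ('a \<Rightarrow> 'a) \<Rightarrow> 'a \<Rightarrow> nat" where
  "mod_length p K \<sigma> \<gamma> = (LEAST i. pth_power_in p K (rho_iter \<sigma> i \<gamma>))"

definition in_J :: "nat \<Rightarrow> 'a::field set \<Rightarrow> ('a \<Rightarrow> 'a) \<Rightarrow> nat \<Rightarrow> 'a \<Rightarrow> bool" where
  "in_J p K \<sigma> i \<gamma> \<longleftrightarrow> pth_power_in p K (rho_iter \<sigma> i \<gamma>)"

text \<open>Representatives of the classes in M_gamma, the F_p[G]-submodule of J generated by [gamma].\<close>
definition Mset :: "nat \<Rightarrow> 'a::field set \<Rightarrow> ('a \<Rightarrow> 'a) \<Rightarrow> 'a \<Rightarrow> 'a set" where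
  "Mset p K \<sigma> \<gamma> = {\<delta>. \<exists>n::nat \<Rightarrow> nat. \<exists>b\<in>K. b \<noteq> 0 \<and>
       \<delta> = (\<Prod>k<p. ((\<sigma> ^^ k) \<gamma>) ^ n k) * b ^ p}"

definition L_M :: "nat \<Rightarrow> 'a::field set \<Rightarrow> ('a \<Rightarrow> 'a) \<Rightarrow> 'a \<Rightarrow> 'a set" where
  "L_M p K \<sigma> \<gamma> = field_gen (K \<union> {y. y ^ p \<in> Mset p K \<sigma> \<gamma>})"

definition norm_KF :: "nat \<Rightarrow> ('a::field \<Rightarrow> 'a) \<Rightarrow> 'a \<Rightarrow> 'a" where
  "norm_KF p \<sigma> \<gamma> = (\<Prod>k<p. (\<sigma> ^^ k) \<gamma>)"

text \<open>Index e([gamma]) in F_p, represented by a natural number < p: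
  xi^e = sigma(delta)/delta for delta in K with delta^p = N(gamma).\<close>
definition kummer_index :: "nat \<Rightarrow> 'a::field \<Rightarrow> 'a set \<Rightarrow> ('a \<Rightarrow> 'a) \<Rightarrow> 'a \<Rightarrow> nat" where
  "kummer_index p \<xi> K \<sigma> \<gamma> =
     (THE e. e < p \<and> (\<exists>\<delta>\<in>K. \<delta> \<noteq> 0 \<and> \<delta> ^ p = norm_KF p \<sigma> \<gamma> \<and> \<sigma> \<delta> = \<xi> ^ e * \<delta>))"

text \<open>A/A_i = F_p[t]/(t^i), t = tau - 1, elements as coefficient vectors w.r.t. 1, t, ..., t^(i-1),
  coefficients in {0..<p} (= F_p).\<close>
definition Avec :: "nat \<Rightarrow> nat \<Rightarrow> (nat \<Rightarrow> int) set" where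
  "Avec p i = {f. \<forall>j. 0 \<le> f j \<and> f j < int p \<and> (i \<le> j \<longrightarrow> f j = 0)}"

definition A_add :: "nat \<Rightarrow> (nat \<Rightarrow> int) \<Rightarrow> (nat \<Rightarrow> int) \<Rightarrow> nat \<Rightarrow> int" where
  "A_add p f g = (\<lambda>j. (f j + g j) mod int p)"

text \<open>Multiplication by tau = 1 + t on A/A_i.\<close>
definition tau_act :: "nat \<Rightarrow> nat \<Rightarrow> (nat \<Rightarrow> int) \<Rightarrow> nat \<Rightarrow> int" where
  "tau_act p i f = (\<lambda>j. if j < i then (f j + (if j = 0 then 0 else f (j - 1))) mod int p else 0)"

text \<open>The element e * (tau-1)^(i-1) of A/A_i.\<close>
definition A_top :: "nat \<Rightarrow> nat \<Rightarrow> nat \<Rightarrow> nat \<Rightarrow> int" where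
  "A_top p i e = (\<lambda>j. if 0 < i \<and> j = i - 1 then int e mod int p else 0)"

text \<open>B_{i,e}: pairs (m,k) standing for m * sigma~^k (k < p), with sigma~ acting on A/A_i by tau
  and sigma~^p = e (tau-1)^(i-1).  The projection to G = <sigma> is (m,k) |-> sigma^k.\<close>
definition B_grp :: "nat \<Rightarrow> nat \<Rightarrow> nat \<Rightarrow> ((nat \<Rightarrow> int) \<times> nat) monoid" where
  "B_grp p i e = \<lparr>carrier = Avec p i \<times> {..<p},
     mult = (\<lambda>(m1, k1) (m2, k2).
        (A_add p (A_add p m1 ((tau_act p i ^^ k1) m2))
                 (if p \<le> k1 + k2 then A_top p i e else (\<lambda>_. 0)),
         (k1 + k2) mod p)),
     one = ((\<lambda>_. 0), 0)\<rparr>"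

text \<open>Gal(L/F) is isomorphic to B as an extension of G: a group isomorphism compatible with the
  projections (restriction to K, resp. (m,k) |-> sigma^k).\<close>
definition iso_as_extension ::
  "'a::field set \<Rightarrow> 'a set \<Rightarrow> 'a set \<Rightarrow> ('a \<Rightarrow> 'a) \<Rightarrow> ((nat \<Rightarrow> int) \<times> nat) monoid \<Rightarrow> bool" where
  "iso_as_extension L K F \<sigma> B \<longleftrightarrow>
     (\<exists>\<phi>. \<phi> \<in> iso (Gal_group L F) B \<and>
          (\<forall>g\<in>Gal L F. \<forall>x\<in>K. g x = (\<sigma> ^^ snd (\<phi> g)) x))"

end

theory Submission
  imports Defs "HOL-Number_Theory.Number_Theory" "HOL-Computational_Algebra.Polynomial"
begin

(* Put \<sigma>' = \<sigma>^(p-1) = \<sigma>^-1, \<rho>' = \<sigma>' - 1 and \<gamma>_l = \<gamma>^(\<rho>'^l); the class of \<gamma>_l is a p-th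
   power exactly when l \<ge> i, and the classes of \<gamma>_0, ..., \<gamma>_(i-1) are independent modulo p-th powers.
   Hence L_M arises from K by adjoining p-th roots \<beta>_(i-1), ..., \<beta>_0 of \<gamma>_(i-1), ..., \<gamma>_0 one at a
   time, each step being a Kummer extension of degree p.  Automorphisms therefore extend freely along
   this tower: the kernel of Gal(L_M/F) \<rightarrow> G consists of the maps \<beta>_j \<mapsto> \<xi>^(v_j) \<beta>_j, and \<sigma>' lifts to
   \<mu> with \<mu>(\<beta>_j) = \<beta>_j \<beta>_(j+1), where \<beta>_l \<in> K for l \<ge> i is chosen with \<beta>_(l+1) = \<rho>'(\<beta>_l).
   Conjugation by \<mu> acts on the kernel as multiplication by \<tau> on A/A_i.  Finally \<mu>^p lies in the
   kernel; it acts trivially on \<beta>_j for j > 0, and on \<beta>_0 it acts through \<xi>^(e (p-1)), as one sees by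
   comparing \<Prod>_k \<mu>^k(\<beta>_0), a p-th root of N(\<gamma>), with the \<delta> defining e (for i = p the binomial
   expansion of \<mu>^p(\<beta>_0) shows that \<mu>^p = 1).  So \<sigma>~ = \<mu>^(p-1) lifts \<sigma> and satisfies the defining
   relations of B_(i,e). *)

context
  fixes S :: "'a::field set"
  assumes sf: "is_subfield S"
begin
lemma subfield_0: "0 \<in> S" using sf unfolding is_subfield_def by auto
lemma subfield_1: "1 \<in> S" using sf unfolding is_subfield_def by auto
lemma subfield_add: "x \<in> S \<Longrightarrow> y \<in> S \<Longrightarrow> x + y \<in> S"
  using sf unfolding is_subfield_def by auto
lemma subfield_diff: "x \<in> S \<Longrightarrow> y \<in> S \<Longrightarrow> x - y \<in> S"
  using sf unfolding is_subfield_def by auto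
lemma subfield_mult: "x \<in> S \<Longrightarrow> y \<in> S \<Longrightarrow> x * y \<in> S"
  using sf unfolding is_subfield_def by auto
lemma subfield_inverse: "x \<in> S \<Longrightarrow> inverse x \<in> S"
  using sf unfolding is_subfield_def by (cases "x = 0") auto
lemma subfield_uminus: "x \<in> S \<Longrightarrow> - x \<in> S" using subfield_diff[OF subfield_0] by simp
lemma subfield_divide: "x \<in> S \<Longrightarrow> y \<in> S \<Longrightarrow> x / y \<in> S"
  by (simp add: divide_inverse subfield_mult subfield_inverse)
lemma subfield_power: "x \<in> S \<Longrightarrow> x ^ n \<in> S"
  by (induction n) (auto intro: subfield_1 subfield_mult)
lemma subfield_sum: "(\<And>i. i \<in> A \<Longrightarrow> f i \<in> S) \<Longrightarrow> sum f A \<in> S"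
  by (induction A rule: infinite_finite_induct) (auto intro: subfield_0 subfield_add)
lemma subfield_prod: "(\<And>i. i \<in> A \<Longrightarrow> f i \<in> S) \<Longrightarrow> prod f A \<in> S"
  by (induction A rule: infinite_finite_induct) (auto intro: subfield_1 subfield_mult)
end

lemma field_gen_subfield: "is_subfield (field_gen S)"
  unfolding field_gen_def is_subfield_def by auto

lemma field_gen_subset: "S \<subseteq> field_gen S"
  unfolding field_gen_def by auto

lemma field_gen_minimal: "is_subfield T \<Longrightarrow> S \<subseteq> T \<Longrightarrow> field_gen S \<subseteq> T"
  unfolding field_gen_def by auto

lemma field_gen_mono: "S \<subseteq> T \<Longrightarrow> field_gen S \<subseteq> field_gen T"
  by (meson field_gen_minimal field_gen_subset field_gen_subfield order_trans)

definition field_hom_on :: "'a::field set \<Rightarrow> ('a \<Rightarrow> 'a) \<Rightarrow> bool" where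
  "field_hom_on E f \<longleftrightarrow> (\<forall>x\<in>E. \<forall>y\<in>E. f (x + y) = f x + f y \<and> f (x * y) = f x * f y) \<and> f 1 = 1"

context
  fixes E :: "'a::field set" and f :: "'a \<Rightarrow> 'a"
  assumes sfE: "is_subfield E" and hf: "field_hom_on E f"
begin
lemma field_hom_on_add: "x \<in> E \<Longrightarrow> y \<in> E \<Longrightarrow> f (x + y) = f x + f y"
  using hf unfolding field_hom_on_def by auto
lemma field_hom_on_mult: "x \<in> E \<Longrightarrow> y \<in> E \<Longrightarrow> f (x * y) = f x * f y"
  using hf unfolding field_hom_on_def by auto
lemma field_hom_on_1: "f 1 = 1" using hf unfolding field_hom_on_def by auto
lemma field_hom_on_0: "f 0 = 0"
proof -
  have "f (0 + 0) = f 0 + f 0" using field_hom_on_add subfield_0[OF sfE] by blast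
  then show ?thesis by (metis add_cancel_right_right add_0)
qed
lemma field_hom_on_uminus: "x \<in> E \<Longrightarrow> f (- x) = - f x"
proof -
  assume x: "x \<in> E"
  have "f (x + - x) = f x + f (- x)" using field_hom_on_add x subfield_uminus[OF sfE x] by blast
  then show ?thesis by (simp add: field_hom_on_0 eq_neg_iff_add_eq_0 add.commute)
qed
lemma field_hom_on_diff: "x \<in> E \<Longrightarrow> y \<in> E \<Longrightarrow> f (x - y) = f x - f y"
  using field_hom_on_add[of x "- y"] field_hom_on_uminus[of y] subfield_uminus[OF sfE, of y] by simp
lemma field_hom_on_inverse: "x \<in> E \<Longrightarrow> f (inverse x) = inverse (f x)"
proof (cases "x = 0")
  case True then show ?thesis by (simp add: field_hom_on_0)
next
  case False
  assume x: "x \<in> E"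
  have "f (x * inverse x) = f x * f (inverse x)" using field_hom_on_mult x subfield_inverse[OF sfE x] by blast
  then have "f x * f (inverse x) = 1" using False by (simp add: field_hom_on_1)
  then show ?thesis by (metis inverse_unique)
qed
lemma field_hom_on_divide: "x \<in> E \<Longrightarrow> y \<in> E \<Longrightarrow> f (x / y) = f x / f y"
  by (simp add: divide_inverse field_hom_on_mult field_hom_on_inverse subfield_inverse[OF sfE])
lemma field_hom_on_power: "x \<in> E \<Longrightarrow> f (x ^ n) = f x ^ n"
  by (induction n) (auto simp: field_hom_on_1 field_hom_on_mult subfield_power[OF sfE])
lemma field_hom_on_sum: "(\<And>i. i \<in> A \<Longrightarrow> g i \<in> E) \<Longrightarrow> f (sum g A) = (\<Sum>i\<in>A. f (g i))"
  by (induction A rule: infinite_finite_induct) (auto simp: field_hom_on_0 field_hom_on_add subfield_sum[OF sfE])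
lemma field_hom_on_prod: "(\<And>i. i \<in> A \<Longrightarrow> g i \<in> E) \<Longrightarrow> f (prod g A) = (\<Prod>i\<in>A. f (g i))"
  by (induction A rule: infinite_finite_induct) (auto simp: field_hom_on_1 field_hom_on_mult subfield_prod[OF sfE])
lemma field_hom_on_eq_0_iff: "x \<in> E \<Longrightarrow> f x = 0 \<longleftrightarrow> x = 0"
proof
  assume x: "x \<in> E" and fx: "f x = 0"
  show "x = 0"
  proof (rule ccontr)
    assume "x \<noteq> 0"
    then have "f (x * inverse x) = 1" by (simp add: field_hom_on_1)
    then show False using field_hom_on_mult[OF x subfield_inverse[OF sfE x]] fx by simp
  qed
qed (simp add: field_hom_on_0)
lemma field_hom_on_inj: "inj_on f E"
proof (rule inj_onI)
  fix x y assume "x \<in> E" "y \<in> E" "f x = f y"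
  then have "f (x - y) = 0" by (simp add: field_hom_on_diff)
  then show "x = y" using field_hom_on_eq_0_iff[OF subfield_diff[OF sfE \<open>x\<in>E\<close> \<open>y\<in>E\<close>]] by simp
qed
lemma subfield_image_field_hom_on: "is_subfield (f ` E)"
  unfolding is_subfield_def
proof (intro conjI ballI impI)
  show "0 \<in> f ` E" using field_hom_on_0 subfield_0[OF sfE] by force
  show "1 \<in> f ` E" using field_hom_on_1 subfield_1[OF sfE] by force
  fix x y assume "x \<in> f ` E" "y \<in> f ` E"
  then obtain x' y' where x': "x' \<in> E" "x = f x'" and y': "y' \<in> E" "y = f y'" by auto
  show "x + y \<in> f ` E" using x' y' field_hom_on_add subfield_add[OF sfE] by (metis image_eqI)
  show "x - y \<in> f ` E" using x' y' field_hom_on_diff subfield_diff[OF sfE] by (metis image_eqI)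
  show "x * y \<in> f ` E" using x' y' field_hom_on_mult subfield_mult[OF sfE] by (metis image_eqI)
next
  fix x assume "x \<in> f ` E"
  then obtain x' where x': "x' \<in> E" "x = f x'" by auto
  show "inverse x \<in> f ` E" using x' field_hom_on_inverse subfield_inverse[OF sfE] by (metis image_eqI)
qed
end

lemma field_hom_on_eq_on_field_gen:
  assumes sfE: "is_subfield E" and hf: "field_hom_on E f" and hg: "field_hom_on E g"
    and SE: "S \<subseteq> E" and agree: "\<And>x. x \<in> S \<Longrightarrow> f x = g x"
  shows "\<And>x. x \<in> field_gen S \<Longrightarrow> f x = g x"
proof -
  define A where "A = {x \<in> E. f x = g x}"
  have "is_subfield A"
    unfolding is_subfield_def
  proof (intro conjI ballI impI)
    show "0 \<in> A" unfolding A_def using subfield_0[OF sfE] field_hom_on_0[OF sfE hf] field_hom_on_0[OF sfE hg] by simp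
    show "1 \<in> A" unfolding A_def using subfield_1[OF sfE] field_hom_on_1[OF sfE hf] field_hom_on_1[OF sfE hg] by simp
    fix x y assume x: "x \<in> A" and y: "y \<in> A"
    then have xE: "x \<in> E" "f x = g x" and yE: "y \<in> E" "f y = g y" unfolding A_def by auto
    show "x + y \<in> A" unfolding A_def
      using subfield_add[OF sfE xE(1) yE(1)] field_hom_on_add[OF sfE hf xE(1) yE(1)] field_hom_on_add[OF sfE hg xE(1) yE(1)] xE yE by simp
    show "x - y \<in> A" unfolding A_def
      using subfield_diff[OF sfE xE(1) yE(1)] field_hom_on_diff[OF sfE hf xE(1) yE(1)] field_hom_on_diff[OF sfE hg xE(1) yE(1)] xE yE by simp
    show "x * y \<in> A" unfolding A_def
      using subfield_mult[OF sfE xE(1) yE(1)] field_hom_on_mult[OF sfE hf xE(1) yE(1)] field_hom_on_mult[OF sfE hg xE(1) yE(1)] xE yE by simp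
  next
    fix x assume x: "x \<in> A"
    then have xE: "x \<in> E" "f x = g x" unfolding A_def by auto
    show "inverse x \<in> A" unfolding A_def
      using subfield_inverse[OF sfE xE(1)] field_hom_on_inverse[OF sfE hf xE(1)] field_hom_on_inverse[OF sfE hg xE(1)] xE by simp
  qed
  moreover have "S \<subseteq> A" using SE agree A_def by auto
  ultimately have "field_gen S \<subseteq> A" by (rule field_gen_minimal)
  then show "\<And>x. x \<in> field_gen S \<Longrightarrow> f x = g x" unfolding A_def by auto
qed

lemma field_hom_on_comp:
  assumes "is_subfield E" "field_hom_on E f" "field_hom_on E g" "g ` E \<subseteq> E"
  shows "field_hom_on E (f \<circ> g)"
  using assms unfolding field_hom_on_def by (auto simp: image_subset_iff)

lemma field_hom_on_funpow:
  assumes "is_subfield E" "field_hom_on E f" "f ` E \<subseteq> E"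
  shows "field_hom_on E (f ^^ n) \<and> (f ^^ n) ` E \<subseteq> E"
proof (induction n)
  case 0 then show ?case by (simp add: field_hom_on_def)
next
  case (Suc n)
  then have "field_hom_on E (f \<circ> (f^^n))" using assms field_hom_on_comp[of E f "f^^n"] by auto
  then show ?case using Suc assms by (auto simp: image_subset_iff comp_def)
qed

lemma field_gen_Un_field_gen: "field_gen (field_gen S \<union> T) = field_gen (S \<union> T)"
proof
  show "field_gen (field_gen S \<union> T) \<subseteq> field_gen (S \<union> T)"
    by (rule field_gen_minimal[OF field_gen_subfield])
       (use field_gen_mono[of S "S \<union> T"] field_gen_subset[of "S \<union> T"] in auto)
  show "field_gen (S \<union> T) \<subseteq> field_gen (field_gen S \<union> T)"
    by (rule field_gen_mono) (use field_gen_subset[of S] in auto)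
qed

lemma field_gen_eq_subfield: "is_subfield K \<Longrightarrow> field_gen K = K"
  using field_gen_minimal[of K K] field_gen_subset[of K] by auto

context
  fixes p :: nat and \<xi> :: "'a::field"
  assumes pp: "prime p" and xp: "\<xi> ^ p = 1" and x1: "\<xi> \<noteq> 1"
begin

lemma prim_root_nonzero: "\<xi> \<noteq> 0"
proof
  assume "\<xi> = 0"
  moreover have "p > 0" using pp prime_gt_0_nat by blast
  ultimately have "\<xi> ^ p = 0" by simp
  then show False using xp by simp
qed

lemma prim_root_power_mod: "\<xi> ^ n = \<xi> ^ (n mod p)"
proof -
  have "\<xi> ^ n = \<xi> ^ (p * (n div p) + n mod p)" by (simp only: mult_div_mod_eq)
  also have "\<dots> = (\<xi> ^ p) ^ (n div p) * \<xi> ^ (n mod p)" by (simp only: power_add power_mult)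
  also have "\<dots> = \<xi> ^ (n mod p)" by (simp add: xp)
  finally show ?thesis .
qed

lemma prim_root_power_eq_1_iff: "\<xi> ^ n = 1 \<longleftrightarrow> p dvd n"
proof
  assume h: "\<xi> ^ n = 1"
  show "p dvd n"
  proof (rule ccontr)
    assume nd: "\<not> p dvd n"
    then have "coprime n p" using pp prime_imp_coprime coprime_commute by blast
    then obtain u where u: "[n * u = Suc 0] (mod p)" using cong_solve_coprime_nat by blast
    have p_gt_1: "p > 1" using pp prime_gt_1_nat by blast
    then have "(n * u) mod p = 1" using u unfolding cong_def by simp
    then have "\<xi> ^ (n * u) = \<xi>" using prim_root_power_mod[of "n*u"] by simp
    moreover have "\<xi> ^ (n * u) = 1" by (simp add: power_mult h)
    ultimately show False using x1 by simp
  qed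
next
  assume "p dvd n"
  then obtain q where "n = p * q" by blast
  then show "\<xi> ^ n = 1" by (simp add: power_mult xp)
qed

lemma prim_root_power_inj: assumes "s < p" "t < p" "\<xi> ^ s = \<xi> ^ t" shows "s = t"
proof (rule ccontr)
  assume ne: "s \<noteq> t"
  { fix a b assume ab: "a < b" "b < p" "\<xi> ^ a = \<xi> ^ b"
    have "\<xi> ^ b = \<xi> ^ a * \<xi> ^ (b - a)" using ab by (metis ab(1) le_add_diff_inverse less_imp_le power_add)
    then have "\<xi> ^ (b - a) = 1" using ab prim_root_nonzero by simp
    then have "p dvd (b - a)" using prim_root_power_eq_1_iff by blast
    then have False using ab by (meson diff_le_self dvd_imp_le le_less_trans less_irrefl zero_less_diff)
  }
  then show False using assms ne by (metis linorder_neqE_nat)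
qed

lemma prim_root_power_eq_iff: "\<xi> ^ s = \<xi> ^ t \<longleftrightarrow> s mod p = t mod p"
proof -
  have p_gt_0: "p > 0" using pp prime_gt_0_nat by blast
  have "\<xi> ^ s = \<xi> ^ t \<longleftrightarrow> \<xi> ^ (s mod p) = \<xi> ^ (t mod p)" using prim_root_power_mod by metis
  also have "\<dots> \<longleftrightarrow> s mod p = t mod p" using prim_root_power_inj p_gt_0 by auto
  finally show ?thesis .
qed

lemma root_of_unity_eq_prim_root_power: assumes z: "z ^ p = 1" shows "\<exists>s<p. z = \<xi> ^ s"
proof (rule ccontr)
  assume nz: "\<not> (\<exists>s<p. z = \<xi> ^ s)"
  have p_gt_0: "p > 0" using pp prime_gt_0_nat by blast
  define q :: "'a poly" where "q = monom 1 p + [:-1:]"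
  have pq: "poly q x = x ^ p - 1" for x by (simp add: q_def poly_monom)
  have dq: "degree q = p" using p_gt_0 unfolding q_def by (subst degree_add_eq_left) (auto simp: degree_monom_eq)
  have q0: "q \<noteq> 0" using dq p_gt_0 by auto
  define R where "R = (\<lambda>s. \<xi> ^ s) ` {..<p}"
  have cR: "card R = p" unfolding R_def
    by (subst card_image) (auto intro!: inj_onI prim_root_power_inj)
  have "insert z R \<subseteq> {x. poly q x = 0}"
    using z unfolding R_def pq by (auto simp: power_mult[symmetric] mult.commute[of _ p] power_mult xp)
  then have "card (insert z R) \<le> card {x. poly q x = 0}"
    by (intro card_mono poly_roots_finite q0)
  also have "\<dots> \<le> p" using card_poly_roots_bound[OF q0] dq by simp
  finally have "card (insert z R) \<le> p" .
  moreover have "z \<notin> R" using nz unfolding R_def by auto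
  then have "card (insert z R) = Suc p" using cR unfolding R_def by simp
  ultimately show False by simp
qed

end

lemma degree_diff_monom_mult_less:
  fixes f g :: "'a::field poly"
  assumes g: "lead_coeff g = 1" and "0 < degree g" "degree g \<le> degree f"
  shows "degree (f - monom (lead_coeff f) (degree f - degree g) * g) < degree f"
proof (rule degree_lessI)
  define k where "k = degree f - degree g"
  show "f - monom (lead_coeff f) k * g \<noteq> 0 \<or> 0 < degree f" using assms by auto
  show "\<forall>n\<ge>degree f. coeff (f - monom (lead_coeff f) k * g) n = 0"
  proof (intro allI impI)
    fix n assume n: "degree f \<le> n"
    then have mg: "coeff (monom (lead_coeff f) k * g) n = lead_coeff f * coeff g (n - k)"
      unfolding coeff_monom_mult k_def using assms by auto
    show "coeff (f - monom (lead_coeff f) k * g) n = 0"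
    proof (cases "n = degree f")
      case True
      then have "n - k = degree g" using assms k_def by auto
      then show ?thesis using mg True g by simp
    next
      case False
      then have "degree f < n" "degree g < n - k" using n assms k_def by auto
      then show ?thesis using mg by (simp add: coeff_eq_0)
    qed
  qed
qed

definition coeffs_in :: "'a::field set \<Rightarrow> 'a poly \<Rightarrow> bool" where
  "coeffs_in E h \<longleftrightarrow> (\<forall>n. coeff h n \<in> E)"

context
  fixes E :: "'a::field set"
  assumes sfE: "is_subfield E"
begin

lemma coeffs_in_0: "coeffs_in E 0" by (simp add: coeffs_in_def subfield_0[OF sfE])
lemma coeffs_in_const: "c \<in> E \<Longrightarrow> coeffs_in E [:c:]"
  by (simp add: coeffs_in_def coeff_pCons subfield_0[OF sfE] split: nat.split)
lemma coeffs_in_1: "coeffs_in E 1" by (simp add: coeffs_in_def subfield_0[OF sfE] subfield_1[OF sfE])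
lemma coeffs_in_add: "coeffs_in E f \<Longrightarrow> coeffs_in E g \<Longrightarrow> coeffs_in E (f + g)"
  by (simp add: coeffs_in_def subfield_add[OF sfE])
lemma coeffs_in_diff: "coeffs_in E f \<Longrightarrow> coeffs_in E g \<Longrightarrow> coeffs_in E (f - g)"
  by (simp add: coeffs_in_def subfield_diff[OF sfE])
lemma coeffs_in_mult: "coeffs_in E f \<Longrightarrow> coeffs_in E g \<Longrightarrow> coeffs_in E (f * g)"
  unfolding coeffs_in_def
  by (intro allI coeff_mult_semiring_closed[of E]) (auto simp: subfield_0[OF sfE] subfield_add[OF sfE] subfield_mult[OF sfE])
lemma coeffs_in_smult: "c \<in> E \<Longrightarrow> coeffs_in E f \<Longrightarrow> coeffs_in E (smult c f)"
  by (simp add: coeffs_in_def subfield_mult[OF sfE])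
lemma coeffs_in_monom: "c \<in> E \<Longrightarrow> coeffs_in E (monom c n)"
  by (simp add: coeffs_in_def coeff_monom subfield_0[OF sfE])
lemma coeffs_in_power: "coeffs_in E f \<Longrightarrow> coeffs_in E (f ^ n)"
  by (induction n) (auto simp: coeffs_in_1 coeffs_in_mult)
lemma coeffs_in_prod: "(\<And>i. i \<in> A \<Longrightarrow> coeffs_in E (f i)) \<Longrightarrow> coeffs_in E (prod f A)"
  by (induction A rule: infinite_finite_induct) (auto simp: coeffs_in_1 coeffs_in_mult)
lemma coeffs_in_pcompose_linear: "a \<in> E \<Longrightarrow> coeffs_in E f \<Longrightarrow> coeffs_in E (pcompose f [:0, a:])"
  by (simp add: coeffs_in_def coeff_pcompose_linear subfield_mult[OF sfE] subfield_power[OF sfE])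
lemma coeffs_in_poly_0: "coeffs_in E f \<Longrightarrow> poly f 0 \<in> E"
  by (simp add: coeffs_in_def poly_0_coeff_0)
lemma coeffs_in_coeff: "coeffs_in E f \<Longrightarrow> coeff f n \<in> E"
  by (simp add: coeffs_in_def)

lemma coeffs_in_div_monic:
  assumes g: "coeffs_in E g" "lead_coeff g = 1" and f: "coeffs_in E f"
  shows "\<exists>q r. coeffs_in E q \<and> coeffs_in E r \<and> f = q * g + r \<and> (r = 0 \<or> degree r < degree g)"
proof (cases "degree g = 0")
  case True
  then have "g = 1" using g(2) by (metis degree_0_id one_pCons)
  then show ?thesis using f by (intro exI[of _ f] exI[of _ 0]) (auto simp: coeffs_in_0)
next
  case deg_g: False
  show ?thesis
    using f
  proof (induction "degree f" arbitrary: f rule: less_induct)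
    case (less f)
    show ?case
    proof (cases "degree f < degree g")
      case True
      then show ?thesis using less.prems by (intro exI[of _ 0] exI[of _ f]) (auto simp: coeffs_in_0)
    next
      case False
      define m where "m = monom (lead_coeff f) (degree f - degree g)"
      have m: "coeffs_in E m"
        unfolding m_def by (intro coeffs_in_monom coeffs_in_coeff less.prems)
      have "degree (f - m * g) < degree f"
        unfolding m_def using degree_diff_monom_mult_less[OF g(2)] deg_g False by simp
      moreover have "coeffs_in E (f - m * g)" by (intro coeffs_in_diff coeffs_in_mult less.prems m g(1))
      ultimately obtain q r where qr: "coeffs_in E q" "coeffs_in E r" "f - m * g = q * g + r"
          "r = 0 \<or> degree r < degree g"
        using less.hyps by blast
      then have "f = (q + m) * g + r" by (simp add: algebra_simps eq_diff_eq)
      then show ?thesis using qr m by (intro exI[of _ "q + m"] exI[of _ r]) (auto simp: coeffs_in_add)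
    qed
  qed
qed

end

lemma prod_linear_factors_dvd:
  fixes f :: "'a::field poly"
  assumes "finite T" "\<And>z. z \<in> T \<Longrightarrow> poly f z = 0"
  shows "(\<Prod>z\<in>T. [:-z, 1:]) dvd f"
  using assms
proof (induction T rule: finite_induct)
  case empty then show ?case by simp
next
  case (insert z T)
  then have "(\<Prod>z\<in>T. [:-z, 1:]) dvd f" by auto
  then obtain s where s: "f = (\<Prod>z\<in>T. [:-z, 1:]) * s" by (elim dvdE)
  have "poly (\<Prod>w\<in>T. [:-w, 1:]) z \<noteq> 0"
    using insert.hyps by (auto simp: poly_prod)
  moreover have "poly f z = 0" using insert.prems by auto
  ultimately have "poly s z = 0" using s by simp
  then have "[:-z, 1:] dvd s" by (simp add: poly_eq_0_iff_dvd)
  then have "[:-z, 1:] * (\<Prod>z\<in>T. [:-z, 1:]) dvd s * (\<Prod>z\<in>T. [:-z, 1:])"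
    by (rule mult_dvd_mono) simp
  then show ?case using s by (simp only: prod.insert[OF insert.hyps] mult.commute[of s])
qed

lemma monic_dvd_prod_linear_factors:
  fixes r :: "'a::field poly"
  assumes "finite T" "lead_coeff r = 1" "r dvd (\<Prod>z\<in>T. [:-z, 1:])"
  shows "\<exists>S\<subseteq>T. r = (\<Prod>z\<in>S. [:-z, 1:])"
  using assms
proof (induction T arbitrary: r rule: finite_induct)
  case empty
  then obtain c where "r = [:c:]" by (auto simp: is_unit_poly_iff)
  then have "r = 1" using empty.prems by (simp add: one_pCons)
  then show ?case by auto
next
  case (insert z T)
  have P: "(\<Prod>w\<in>insert z T. [:-w, 1:]) = [:-z, 1:] * (\<Prod>w\<in>T. [:-w, 1:])"
    using insert.hyps by simp
  show ?case
  proof (cases "poly r z = 0")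
    case True
    then obtain r' where r': "r = [:-z, 1:] * r'" by (auto simp: poly_eq_0_iff_dvd elim: dvdE)
    have "lead_coeff ([:-z, 1:] * r') = 1" using insert.prems(1) by (simp only: r'[symmetric])
    then have "lead_coeff r' = 1" by (simp only: lead_coeff_mult) simp
    moreover have "r' dvd (\<Prod>w\<in>T. [:-w, 1:])"
    proof -
      have "[:-z, 1:] * r' dvd [:-z, 1:] * (\<Prod>w\<in>T. [:-w, 1:])"
        using insert.prems(2) by (simp only: r'[symmetric] P[symmetric])
      then show ?thesis by (subst (asm) dvd_mult_cancel_left) auto
    qed
    ultimately obtain S where "S \<subseteq> T" "r' = (\<Prod>w\<in>S. [:-w, 1:])" using insert.IH by blast
    moreover have "z \<notin> S" using \<open>S \<subseteq> T\<close> insert.hyps by auto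
    ultimately show ?thesis using r' by (intro exI[of _ "insert z S"]) (auto simp: finite_subset[OF _ insert.hyps(1)])
  next
    case False
    obtain s where s: "[:-z, 1:] * (\<Prod>w\<in>T. [:-w, 1:]) = r * s" using insert.prems(2) P by (auto elim: dvdE)
    have "poly (r * s) z = 0" using s[symmetric] by simp
    then have "poly s z = 0" using False by simp
    then obtain s' where s': "s = [:-z, 1:] * s'" by (auto simp: poly_eq_0_iff_dvd elim: dvdE)
    have "[:-z, 1:] * (\<Prod>w\<in>T. [:-w, 1:]) = [:-z, 1:] * (r * s')" using s s' by (simp add: algebra_simps)
    then have "(\<Prod>w\<in>T. [:-w, 1:]) = r * s'"
      by (subst (asm) mult_cancel_left) auto
    then have "r dvd (\<Prod>w\<in>T. [:-w, 1:])" by auto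
    then obtain S where "S \<subseteq> T" "r = (\<Prod>w\<in>S. [:-w, 1:])" using insert.IH insert.prems(1) by blast
    then show ?thesis by auto
  qed
qed

lemma poly_in_subfield:
  assumes "is_subfield T" "coeffs_in T f" "z \<in> T"
  shows "poly f z \<in> T"
  unfolding poly_altdef
  by (intro subfield_sum[OF assms(1)] subfield_mult[OF assms(1)] subfield_power[OF assms(1)] coeffs_in_coeff[OF assms(1) assms(2)] assms(3))

context
  fixes E :: "'a::field set" and \<tau> :: "'a \<Rightarrow> 'a"
  assumes sfE: "is_subfield E" and ht: "field_hom_on E \<tau>"
begin

lemma coeff_map_poly_hom: "coeff (map_poly \<tau> f) n = \<tau> (coeff f n)"
  by (simp add: coeff_map_poly field_hom_on_0[OF sfE ht])

lemma map_poly_hom_add: "coeffs_in E f \<Longrightarrow> coeffs_in E g \<Longrightarrow> map_poly \<tau> (f + g) = map_poly \<tau> f + map_poly \<tau> g"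
  by (rule poly_eqI) (simp add: coeff_map_poly_hom field_hom_on_add[OF sfE ht] coeffs_in_coeff[OF sfE])

lemma map_poly_hom_diff: "coeffs_in E f \<Longrightarrow> coeffs_in E g \<Longrightarrow> map_poly \<tau> (f - g) = map_poly \<tau> f - map_poly \<tau> g"
  by (rule poly_eqI) (simp add: coeff_map_poly_hom field_hom_on_diff[OF sfE ht] coeffs_in_coeff[OF sfE])

lemma map_poly_hom_mult: "coeffs_in E f \<Longrightarrow> coeffs_in E g \<Longrightarrow> map_poly \<tau> (f * g) = map_poly \<tau> f * map_poly \<tau> g"
proof (rule poly_eqI)
  fix n assume f: "coeffs_in E f" and g: "coeffs_in E g"
  have "coeff (map_poly \<tau> (f * g)) n = \<tau> (\<Sum>i\<le>n. coeff f i * coeff g (n - i))"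
    by (simp add: coeff_map_poly_hom coeff_mult)
  also have "\<dots> = (\<Sum>i\<le>n. \<tau> (coeff f i * coeff g (n - i)))"
    by (rule field_hom_on_sum[OF sfE ht]) (intro subfield_mult[OF sfE] coeffs_in_coeff[OF sfE] f g)
  also have "\<dots> = (\<Sum>i\<le>n. \<tau> (coeff f i) * \<tau> (coeff g (n - i)))"
    by (intro sum.cong refl field_hom_on_mult[OF sfE ht] coeffs_in_coeff[OF sfE] f g)
  also have "\<dots> = coeff (map_poly \<tau> f * map_poly \<tau> g) n"
    by (simp add: coeff_map_poly_hom coeff_mult)
  finally show "coeff (map_poly \<tau> (f * g)) n = coeff (map_poly \<tau> f * map_poly \<tau> g) n" .
qed

lemma map_poly_hom_const: "map_poly \<tau> [:c:] = [:\<tau> c:]"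
  by (rule poly_eqI) (simp add: coeff_map_poly_hom coeff_pCons field_hom_on_0[OF sfE ht] split: nat.split)

lemma map_poly_hom_monom: "map_poly \<tau> (monom c n) = monom (\<tau> c) n"
  by (rule poly_eqI) (simp add: coeff_map_poly_hom coeff_monom field_hom_on_0[OF sfE ht])

lemma map_poly_hom_X: "map_poly \<tau> [:0, 1:] = [:0, 1:]"
  by (rule poly_eqI) (simp add: coeff_map_poly_hom coeff_pCons field_hom_on_0[OF sfE ht] field_hom_on_1[OF sfE ht] split: nat.split)

lemma coeffs_in_map_poly_hom: "coeffs_in E f \<Longrightarrow> \<tau> ` E \<subseteq> T \<Longrightarrow> coeffs_in T (map_poly \<tau> f)"
  by (auto simp: coeffs_in_def coeff_map_poly_hom)

end

section \<open>Adjoining a p-th root\<close>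

definition adjoin :: "'a::field set \<Rightarrow> 'a \<Rightarrow> 'a set" where
  "adjoin E \<beta> = {poly h \<beta> | h. coeffs_in E h}"

locale kummer_step =
  fixes p :: nat and \<xi> :: "'a::field" and E :: "'a set" and b \<beta> :: 'a
  assumes pp: "prime p" and xp: "\<xi> ^ p = 1" and x1: "\<xi> \<noteq> 1"
    and sfE: "is_subfield E" and xiE: "\<xi> \<in> E" and bE: "b \<in> E" and bb: "\<beta> ^ p = b"
    and npow: "\<not> (\<exists>y\<in>E. y ^ p = b)"
begin

definition kummer_poly :: "'a poly" where "kummer_poly = monom 1 p + [:- b:]"

lemma p_gt_0: "p > 0" using pp prime_gt_0_nat by blast
lemma p_gt_1: "p > 1" using pp prime_gt_1_nat by blast

lemma b_nonzero: "b \<noteq> 0"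
  using npow subfield_0[OF sfE] p_gt_0 by (metis zero_power)

lemma beta_nonzero: "\<beta> \<noteq> 0" using b_nonzero bb p_gt_0 by auto

lemma xi_nonzero: "\<xi> \<noteq> 0" using prim_root_nonzero[OF pp xp x1] .

lemma coeffs_in_kummer_poly: "coeffs_in E kummer_poly"
  unfolding kummer_poly_def
    by (intro coeffs_in_add[OF sfE] coeffs_in_monom[OF sfE] coeffs_in_const[OF sfE] subfield_1[OF sfE] subfield_uminus[OF sfE] bE)

lemma poly_kummer_poly: "poly kummer_poly x = x ^ p - b"
  by (simp add: kummer_poly_def poly_monom)

lemma degree_kummer_poly: "degree kummer_poly = p"
  unfolding kummer_poly_def using p_gt_0 by (subst degree_add_eq_left) (auto simp: degree_monom_eq)

lemma lead_coeff_kummer_poly: "lead_coeff kummer_poly = 1"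
  using degree_kummer_poly p_gt_0 by (simp add: kummer_poly_def coeff_monom coeff_pCons split: nat.split)

definition kummer_roots :: "'a set" where "kummer_roots = (\<lambda>k. \<xi> ^ k * \<beta>) ` {..<p}"

lemma card_kummer_roots: "card kummer_roots = p"
  unfolding kummer_roots_def
proof (subst card_image)
  show "inj_on (\<lambda>k. \<xi> ^ k * \<beta>) {..<p}"
    by (rule inj_onI) (use beta_nonzero prim_root_power_inj[OF pp xp x1] in auto)
qed simp

lemma kummer_roots_power: "z \<in> kummer_roots \<Longrightarrow> z ^ p = b"
  unfolding kummer_roots_def using bb xp
    by (auto simp: power_mult_distrib power_mult[symmetric] mult.commute[of _ p] power_mult)

lemma kummer_poly_eq_prod: "kummer_poly = (\<Prod>z\<in>kummer_roots. [:- z, 1:])"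
proof -
  have fin: "finite kummer_roots" unfolding kummer_roots_def by simp
  have "(\<Prod>z\<in>kummer_roots. [:- z, 1:]) dvd kummer_poly"
    by (rule prod_linear_factors_dvd[OF fin]) (simp add: poly_kummer_poly kummer_roots_power)
  then obtain s where s: "kummer_poly = (\<Prod>z\<in>kummer_roots. [:- z, 1:]) * s" by (elim dvdE)
  have XP0: "kummer_poly \<noteq> 0" using degree_kummer_poly p_gt_0 by auto
  then have s0: "s \<noteq> 0" using s by auto
  have dP: "degree (\<Prod>z\<in>kummer_roots. [:- z, 1:]) = p"
    by (subst degree_prod_sum_eq) (auto simp: card_kummer_roots)
  have lP: "lead_coeff (\<Prod>z\<in>kummer_roots. [:- z, 1:]) = 1" by (simp add: lead_coeff_prod)
  have P0: "(\<Prod>z\<in>kummer_roots. [:- z, 1:]) \<noteq> 0" using lP by auto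
  have "degree kummer_poly = degree (\<Prod>z\<in>kummer_roots. [:- z, 1:]) + degree s"
    using s degree_mult_eq[OF P0 s0] by simp
  then have "degree s = 0" using dP degree_kummer_poly by simp
  moreover have "lead_coeff s = 1" using s lead_coeff_kummer_poly lP by (metis lead_coeff_mult mult_1)
  ultimately have "s = 1" by (metis degree_0_id one_pCons)
  then show ?thesis using s by simp
qed

lemma beta_power_notin_E:
  assumes d: "0 < d" "d < p"
  shows "\<beta> ^ d \<notin> E"
proof
  assume bd: "\<beta> ^ d \<in> E"
  have "coprime d p" using d pp prime_imp_coprime coprime_commute by (metis dvd_imp_le not_le)
  then obtain u where "[d * u = Suc 0] (mod p)" using cong_solve_coprime_nat by blast
  then have "(d * u) mod p = 1" using p_gt_1 unfolding cong_def by simp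
  then have du: "d * u = p * (d * u div p) + 1" by (metis mult_div_mod_eq)
  have "(\<beta> ^ d) ^ u = b ^ (d * u div p) * \<beta>"
    by (subst power_mult[symmetric], subst du) (simp add: power_add power_mult bb)
  then have "\<beta> = (\<beta> ^ d) ^ u / b ^ (d * u div p)" using b_nonzero by (simp add: field_simps)
  then have "\<beta> \<in> E" using subfield_divide[OF sfE] subfield_power[OF sfE] bd bE by metis
  then show False using npow bb by blast
qed

text \<open>The constant coefficient of a product of linear factors over conjugates of \<beta> is, up to powers
  of \<xi>, a power of \<beta>.\<close>

lemma beta_power_card_in_E:
  assumes S: "S \<subseteq> kummer_roots" and r: "coeffs_in E (\<Prod>z\<in>S. [:- z, 1:])"
  shows "\<beta> ^ card S \<in> E"
proof -
  have fin: "finite S" using S finite_subset unfolding kummer_roots_def by auto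
  have zE: "- z / \<beta> \<in> E" and z0: "z \<noteq> 0" if z: "z \<in> S" for z
  proof -
    obtain k where "z = \<xi> ^ k * \<beta>" using z S unfolding kummer_roots_def by auto
    then show "- z / \<beta> \<in> E" "z \<noteq> 0"
      using beta_nonzero xi_nonzero subfield_uminus[OF sfE] subfield_power[OF sfE xiE] by auto
  qed
  have "poly (\<Prod>z\<in>S. [:- z, 1:]) 0 = (\<Prod>z\<in>S. (- z / \<beta>) * \<beta>)"
    by (simp add: poly_prod beta_nonzero)
  also have "\<dots> = (\<Prod>z\<in>S. - z / \<beta>) * \<beta> ^ card S" by (simp only: prod.distrib prod_constant)
  finally have "\<beta> ^ card S = poly (\<Prod>z\<in>S. [:- z, 1:]) 0 / (\<Prod>z\<in>S. - z / \<beta>)"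
    using fin z0 beta_nonzero by (simp add: field_simps)
  moreover have "poly (\<Prod>z\<in>S. [:- z, 1:]) 0 \<in> E" by (rule coeffs_in_poly_0[OF sfE r])
  moreover have "(\<Prod>z\<in>S. - z / \<beta>) \<in> E" by (rule subfield_prod[OF sfE]) (rule zE)
  ultimately show ?thesis using subfield_divide[OF sfE] by simp
qed

text \<open>A monic polynomial over E of least degree vanishing at \<beta> divides the Kummer polynomial, so it is
  a product of linear factors over conjugates of \<beta>; its constant coefficient then forbids degree < p.\<close>

lemma low_degree_root_eq_0:
  assumes h: "coeffs_in E h" "degree h < p" "poly h \<beta> = 0"
  shows "h = 0"
proof (rule ccontr)
  assume "h \<noteq> 0"
  define P where "P = (\<lambda>r. coeffs_in E r \<and> r \<noteq> 0 \<and> poly r \<beta> = 0)"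
  obtain r0 where r0: "P r0" and min: "\<And>r. P r \<Longrightarrow> degree r0 \<le> degree r"
    using ex_has_least_nat[of P h degree] h \<open>h \<noteq> 0\<close> unfolding P_def by blast
  have lc0: "lead_coeff r0 \<noteq> 0" using r0 unfolding P_def by simp
  define r where "r = smult (inverse (lead_coeff r0)) r0"
  have r: "coeffs_in E r" "lead_coeff r = 1" "poly r \<beta> = 0" "degree r = degree r0"
    using r0 lc0 unfolding r_def P_def
    by (auto intro: coeffs_in_smult[OF sfE] subfield_inverse[OF sfE] coeffs_in_coeff[OF sfE])
  obtain q s where qs: "coeffs_in E s" "kummer_poly = q * r + s" "s = 0 \<or> degree s < degree r"
    using coeffs_in_div_monic[OF sfE r(1) r(2) coeffs_in_kummer_poly] by blast
  have "poly s \<beta> = 0" using qs(2) r(3)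
    by (metis add_0 poly_kummer_poly bb diff_self mult_zero_right poly_add poly_mult)
  then have "s = 0" using qs min[of s] r(4) unfolding P_def by fastforce
  then obtain S where S: "S \<subseteq> kummer_roots" "r = (\<Prod>z\<in>S. [:- z, 1:])"
    using monic_dvd_prod_linear_factors[of kummer_roots r] r(2) qs(2) kummer_poly_eq_prod
    unfolding kummer_roots_def by auto
  have "card S = degree r0"
    using r(4) S finite_subset[OF S(1)] unfolding kummer_roots_def by (simp add: degree_prod_sum_eq)
  moreover have "0 < degree r0"
    using r0 unfolding P_def by (metis degree_eq_zeroE gr0I pCons_0_0 poly_pCons poly_0 mult_zero_right add_0_right)
  moreover have "degree r0 < p" using min[of h] h \<open>h \<noteq> 0\<close> unfolding P_def by simp
  ultimately show False using beta_power_card_in_E[OF S(1)] r(1) S(2) beta_power_notin_E by metis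
qed

lemma reduce_mod_kummer_poly:
  assumes "coeffs_in E h"
  shows "\<exists>h'. coeffs_in E h' \<and> degree h' < p \<and> (\<forall>z. z ^ p = b \<longrightarrow> poly h' z = poly h z)"
proof -
  obtain q r where qr: "coeffs_in E q" "coeffs_in E r" "h = q * kummer_poly + r" "r = 0 \<or> degree r < degree kummer_poly"
    using coeffs_in_div_monic[OF sfE coeffs_in_kummer_poly lead_coeff_kummer_poly assms] by blast
  have "degree r < p" using qr(4) degree_kummer_poly p_gt_0 by auto
  moreover have "\<forall>z. z ^ p = b \<longrightarrow> poly r z = poly h z" using qr(3) by (simp add: poly_kummer_poly)
  ultimately show ?thesis using qr(2) by blast
qed

lemma poly_map_poly_at_root:
  assumes ht: "field_hom_on E \<tau>" and h: "coeffs_in E h" "poly h \<beta> = 0" and z: "z ^ p = \<tau> b"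
  shows "poly (map_poly \<tau> h) z = 0"
proof -
  obtain q r where qr: "coeffs_in E q" "coeffs_in E r" "h = q * kummer_poly + r" "r = 0 \<or> degree r < degree kummer_poly"
    using coeffs_in_div_monic[OF sfE coeffs_in_kummer_poly lead_coeff_kummer_poly h(1)] by blast
  have "poly r \<beta> = 0" using qr(3) h(2) by (simp add: poly_kummer_poly bb)
  moreover have "degree r < p" using qr(4) degree_kummer_poly p_gt_0 by auto
  ultimately have r0: "r = 0" using low_degree_root_eq_0 qr(2) by blast
  have "map_poly \<tau> h = map_poly \<tau> q * map_poly \<tau> kummer_poly"
    using qr(3) r0 map_poly_hom_mult[OF sfE ht qr(1) coeffs_in_kummer_poly] by simp
  moreover have "map_poly \<tau> kummer_poly = monom 1 p + [:- \<tau> b:]"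
    unfolding kummer_poly_def
    by (simp add: map_poly_hom_add[OF sfE ht] coeffs_in_monom[OF sfE] subfield_1[OF sfE] coeffs_in_const[OF sfE] subfield_uminus[OF sfE] bE
        map_poly_hom_monom[OF sfE ht] map_poly_hom_const[OF sfE ht] field_hom_on_1[OF sfE ht] field_hom_on_uminus[OF sfE ht])
  ultimately show ?thesis using z by (simp add: poly_monom)
qed

lemma poly_at_all_roots:
  assumes h: "coeffs_in E h" "poly h \<beta> = 0" and z: "z ^ p = b"
  shows "poly h z = 0"
proof -
  have "field_hom_on E id" by (simp add: field_hom_on_def)
  from poly_map_poly_at_root[OF this h] z show ?thesis by (simp add: map_poly_idI)
qed

abbreviation "E\<beta> \<equiv> adjoin E \<beta>"

lemma adjoinI: "coeffs_in E h \<Longrightarrow> poly h \<beta> \<in> E\<beta>" unfolding adjoin_def by blast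

lemma adjoinE_reduced:
  assumes "x \<in> E\<beta>"
  obtains h where "coeffs_in E h" "degree h < p" "x = poly h \<beta>"
proof -
  obtain h0 where "coeffs_in E h0" "x = poly h0 \<beta>" using assms unfolding adjoin_def by blast
  then show ?thesis using reduce_mod_kummer_poly[of h0] bb that by metis
qed

lemma E_subset_adjoin: "E \<subseteq> E\<beta>"
proof
  fix x assume "x \<in> E"
  then have "poly [:x:] \<beta> \<in> E\<beta>" by (intro adjoinI coeffs_in_const[OF sfE])
  then show "x \<in> E\<beta>" by simp
qed

lemma beta_in_adjoin: "\<beta> \<in> E\<beta>"
proof -
  have "poly [:0, 1:] \<beta> \<in> E\<beta>"
    by (intro adjoinI) (simp add: coeffs_in_def coeff_pCons subfield_0[OF sfE] subfield_1[OF sfE] split: nat.split)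
  then show ?thesis by simp
qed

lemma adjoin_add: assumes "x \<in> E\<beta>" "y \<in> E\<beta>" shows "x + y \<in> E\<beta>"
proof -
  obtain hx hy where "coeffs_in E hx" "x = poly hx \<beta>" "coeffs_in E hy" "y = poly hy \<beta>"
    using assms unfolding adjoin_def by blast
  then show ?thesis using adjoinI[of "hx + hy"] coeffs_in_add[OF sfE] by simp
qed
lemma adjoin_diff: assumes "x \<in> E\<beta>" "y \<in> E\<beta>" shows "x - y \<in> E\<beta>"
proof -
  obtain hx hy where "coeffs_in E hx" "x = poly hx \<beta>" "coeffs_in E hy" "y = poly hy \<beta>"
    using assms unfolding adjoin_def by blast
  then show ?thesis using adjoinI[of "hx - hy"] coeffs_in_diff[OF sfE] by simp
qed
lemma adjoin_mult: assumes "x \<in> E\<beta>" "y \<in> E\<beta>" shows "x * y \<in> E\<beta>"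
proof -
  obtain hx hy where "coeffs_in E hx" "x = poly hx \<beta>" "coeffs_in E hy" "y = poly hy \<beta>"
    using assms unfolding adjoin_def by blast
  then show ?thesis using adjoinI[of "hx * hy"] coeffs_in_mult[OF sfE] by simp
qed

lemma degree_pcompose_xi_power: "degree (pcompose h [:0, \<xi> ^ t:]) = degree h"
  using xi_nonzero by (simp add: degree_pcompose)

lemma poly_at_conjugate_nonzero:
  assumes h: "coeffs_in E h" "degree h < p" "poly h \<beta> \<noteq> 0"
  shows "poly h (\<xi> ^ t * \<beta>) \<noteq> 0"
proof
  assume "poly h (\<xi> ^ t * \<beta>) = 0"
  then have "poly (pcompose h [:0, \<xi> ^ t:]) \<beta> = 0" by (simp add: poly_pcompose mult.commute)
  then have "pcompose h [:0, \<xi> ^ t:] = 0"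
    using low_degree_root_eq_0 coeffs_in_pcompose_linear[OF sfE subfield_power[OF sfE xiE] h(1)]
      degree_pcompose_xi_power h(2) by metis
  then have "h = 0" using xi_nonzero by (simp add: pcompose_eq_0_iff)
  then show False using h(3) by simp
qed

lemma conjugation_eigen_monom:
  assumes h: "coeffs_in E h" "degree h < p" and s: "s < p"
    and eigen: "poly h (\<xi> * \<beta>) = \<xi> ^ s * poly h \<beta>"
  shows "h = monom (coeff h s) s"
proof -
  have z: "poly (pcompose h [:0, \<xi>:] - smult (\<xi> ^ s) h) \<beta> = 0"
    using eigen by (simp add: poly_pcompose mult.commute)
  have c: "coeffs_in E (pcompose h [:0, \<xi>:] - smult (\<xi> ^ s) h)"
    by (intro coeffs_in_diff[OF sfE] coeffs_in_pcompose_linear[OF sfE xiE] coeffs_in_smult[OF sfE]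
        subfield_power[OF sfE xiE] h(1))
  have d: "degree (pcompose h [:0, \<xi>:] - smult (\<xi> ^ s) h) < p"
    using degree_pcompose_xi_power[of h 1] h(2)
    by (intro degree_diff_less) (auto simp: degree_smult_le le_less_trans)
  have eq: "pcompose h [:0, \<xi>:] = smult (\<xi> ^ s) h" using low_degree_root_eq_0[OF c d z] by simp
  have "coeff h n = 0" if "n \<noteq> s" for n
  proof (cases "n < p")
    case True
    have "\<xi> ^ n * coeff h n = \<xi> ^ s * coeff h n"
      using arg_cong[OF eq, of "\<lambda>f. coeff f n"] by (simp add: coeff_pcompose_linear)
    moreover have "\<xi> ^ n \<noteq> \<xi> ^ s" using prim_root_power_inj[OF pp xp x1 True s] that by auto
    ultimately show ?thesis by simp
  next
    case False
    then show ?thesis using h(2) by (simp add: coeff_eq_0)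
  qed
  then show ?thesis by (intro poly_eqI) (simp add: coeff_monom)
qed

text \<open>The product is invariant under \<beta> \<mapsto> \<xi> \<beta>.\<close>

lemma prod_conjugates_in_E:
  assumes h: "coeffs_in E h"
  shows "(\<Prod>t<p. poly h (\<xi> ^ t * \<beta>)) \<in> E"
proof -
  define f where "f = (\<lambda>t. poly h (\<xi> ^ t * \<beta>))"
  define hh where "hh = (\<lambda>t. pcompose h [:0, \<xi> ^ t:])"
  have "coeffs_in E (\<Prod>t<p. hh t)"
    unfolding hh_def by (intro coeffs_in_prod[OF sfE] coeffs_in_pcompose_linear[OF sfE] subfield_power[OF sfE xiE] h)
  then obtain H where H: "coeffs_in E H" "degree H < p"
    and H_eq: "\<And>z. z ^ p = b \<Longrightarrow> poly H z = poly (\<Prod>t<p. hh t) z"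
    using reduce_mod_kummer_poly by blast
  have Hb: "poly H \<beta> = (\<Prod>t<p. f t)"
    using H_eq[of \<beta>] bb by (simp add: f_def hh_def poly_prod poly_pcompose mult.commute)
  have "poly H (\<xi> * \<beta>) = (\<Prod>t<p. f (Suc t))"
    using H_eq[of "\<xi> * \<beta>"] xp bb by (simp add: power_mult_distrib f_def hh_def poly_prod poly_pcompose mult_ac)
  also have "\<dots> = (\<Prod>t<p. f t)"
  proof -
    obtain m where m: "p = Suc m" using p_gt_0 by (cases p) auto
    have "(\<Prod>t<p. f (Suc t)) = (\<Prod>t<m. f (Suc t)) * f (Suc m)" unfolding m by (rule prod.lessThan_Suc)
    also have "f (Suc m) = f 0" using m xp unfolding f_def by (metis power_0)
    also have "(\<Prod>t<m. f (Suc t)) * f 0 = (\<Prod>t<Suc m. f t)"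
      by (subst prod.lessThan_Suc_shift) (simp only: mult.commute)
    finally show ?thesis unfolding m .
  qed
  finally have "poly H (\<xi> * \<beta>) = \<xi> ^ 0 * poly H \<beta>" using Hb by simp
  then have "H = monom (coeff H 0) 0" using conjugation_eigen_monom[OF H p_gt_0] by simp
  then have "poly H \<beta> = coeff H 0" by (metis poly_monom power_0 mult_1_right)
  then show ?thesis using Hb coeffs_in_coeff[OF sfE H(1)] unfolding f_def by simp
qed

lemma adjoin_inverse:
  assumes x: "x \<in> E\<beta>"
  shows "inverse x \<in> E\<beta>"
proof (cases "x = 0")
  case True
  then show ?thesis using E_subset_adjoin subfield_0[OF sfE] by auto
next
  case False
  obtain h where h: "coeffs_in E h" "degree h < p" "x = poly h \<beta>" using adjoinE_reduced[OF x] by blast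
  define f where "f = (\<lambda>t. poly h (\<xi> ^ t * \<beta>))"
  define N where "N = (\<Prod>t<p. f t)"
  have NE: "N \<in> E" unfolding N_def f_def by (rule prod_conjugates_in_E[OF h(1)])
  have "f t \<noteq> 0" for t unfolding f_def using poly_at_conjugate_nonzero[OF h(1) h(2)] h(3) False by simp
  then have N0: "N \<noteq> 0" unfolding N_def by simp
  have "N = x * (\<Prod>t<p - 1. f (Suc t))"
  proof -
    have "N = (\<Prod>t<Suc (p - 1). f t)" unfolding N_def using p_gt_0 by simp
    also have "\<dots> = f 0 * (\<Prod>t<p - 1. f (Suc t))" by (rule prod.lessThan_Suc_shift)
    finally show ?thesis using h(3) by (simp add: f_def)
  qed
  then have "inverse x = (\<Prod>t<p - 1. f (Suc t)) * inverse N" using N0 False by (simp add: field_simps)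
  moreover have "(\<Prod>t<p - 1. f (Suc t)) \<in> E\<beta>"
  proof -
    have "coeffs_in E (\<Prod>t<p - 1. pcompose h [:0, \<xi> ^ Suc t:])"
      by (intro coeffs_in_prod[OF sfE] coeffs_in_pcompose_linear[OF sfE] subfield_power[OF sfE xiE] h(1))
    from adjoinI[OF this] show ?thesis by (simp add: f_def poly_prod poly_pcompose mult.commute)
  qed
  moreover have "inverse N \<in> E\<beta>" using E_subset_adjoin subfield_inverse[OF sfE NE] by auto
  ultimately show ?thesis using adjoin_mult by simp
qed

lemma subfield_adjoin: "is_subfield E\<beta>"
  unfolding is_subfield_def
proof (intro conjI ballI impI)
  show "0 \<in> E\<beta>" using E_subset_adjoin subfield_0[OF sfE] by (rule subsetD)
  show "1 \<in> E\<beta>" using E_subset_adjoin subfield_1[OF sfE] by (rule subsetD)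
qed (simp_all add: adjoin_add adjoin_diff adjoin_mult adjoin_inverse)

lemma adjoin_minimal: assumes "is_subfield T" "E \<subseteq> T" "\<beta> \<in> T" shows "E\<beta> \<subseteq> T"
proof
  fix x assume "x \<in> E\<beta>"
  then obtain h where h: "coeffs_in E h" "x = poly h \<beta>" unfolding adjoin_def by blast
  then have "coeffs_in T h" using assms(2) by (auto simp: coeffs_in_def)
  then show "x \<in> T" using poly_in_subfield[OF assms(1) _ assms(3)] h(2) by simp
qed

lemma adjoin_eq_field_gen: "E\<beta> = field_gen (E \<union> {\<beta>})"
proof
  show "E\<beta> \<subseteq> field_gen (E \<union> {\<beta>})"
    by (rule adjoin_minimal[OF field_gen_subfield]) (use field_gen_subset[of "E \<union> {\<beta>}"] in auto)
  show "field_gen (E \<union> {\<beta>}) \<subseteq> E\<beta>"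
    by (rule field_gen_minimal[OF subfield_adjoin]) (use E_subset_adjoin beta_in_adjoin in auto)
qed

definition extend_hom :: "('a \<Rightarrow> 'a) \<Rightarrow> 'a \<Rightarrow> 'a \<Rightarrow> 'a" where
  "extend_hom \<tau> \<beta>' x = poly (map_poly \<tau> (SOME h. coeffs_in E h \<and> poly h \<beta> = x)) \<beta>'"

context
  fixes \<tau> \<beta>'
  assumes ht: "field_hom_on E \<tau>" and b': "\<beta>' ^ p = \<tau> b"
begin

lemma extend_hom_poly: assumes h: "coeffs_in E h" shows "extend_hom \<tau> \<beta>' (poly h \<beta>) = poly (map_poly \<tau> h) \<beta>'"
proof -
  define h0 where "h0 = (SOME h0. coeffs_in E h0 \<and> poly h0 \<beta> = poly h \<beta>)"
  have "coeffs_in E h0 \<and> poly h0 \<beta> = poly h \<beta>" unfolding h0_def by (rule someI[of _ h]) (simp add: h)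
  then have h0: "coeffs_in E h0" "poly h0 \<beta> = poly h \<beta>" by auto
  have "poly (map_poly \<tau> (h0 - h)) \<beta>' = 0"
    by (rule poly_map_poly_at_root[OF ht]) (use h0 h coeffs_in_diff[OF sfE] b' in auto)
  then have "poly (map_poly \<tau> h0) \<beta>' = poly (map_poly \<tau> h) \<beta>'"
    by (simp add: map_poly_hom_diff[OF sfE ht h0(1) h])
  then show ?thesis unfolding extend_hom_def h0_def by simp
qed

lemma field_hom_on_extend_hom: "field_hom_on E\<beta> (extend_hom \<tau> \<beta>')"
  unfolding field_hom_on_def
proof (intro conjI ballI)
  fix x y assume "x \<in> E\<beta>" "y \<in> E\<beta>"
  then obtain hx hy where hx: "coeffs_in E hx" "x = poly hx \<beta>" and hy: "coeffs_in E hy" "y = poly hy \<beta>"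
    unfolding adjoin_def by blast
  have "extend_hom \<tau> \<beta>' (x + y) = poly (map_poly \<tau> (hx + hy)) \<beta>'"
    using extend_hom_poly[OF coeffs_in_add[OF sfE hx(1) hy(1)]] hx(2) hy(2) by simp
  also have "\<dots> = extend_hom \<tau> \<beta>' x + extend_hom \<tau> \<beta>' y"
    using hx hy by (simp add: extend_hom_poly map_poly_hom_add[OF sfE ht])
  finally show "extend_hom \<tau> \<beta>' (x + y) = extend_hom \<tau> \<beta>' x + extend_hom \<tau> \<beta>' y" .
  have "extend_hom \<tau> \<beta>' (x * y) = poly (map_poly \<tau> (hx * hy)) \<beta>'"
    using extend_hom_poly[OF coeffs_in_mult[OF sfE hx(1) hy(1)]] hx(2) hy(2) by simp
  also have "\<dots> = extend_hom \<tau> \<beta>' x * extend_hom \<tau> \<beta>' y"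
    using hx hy by (simp add: extend_hom_poly map_poly_hom_mult[OF sfE ht])
  finally show "extend_hom \<tau> \<beta>' (x * y) = extend_hom \<tau> \<beta>' x * extend_hom \<tau> \<beta>' y" .
next
  have "extend_hom \<tau> \<beta>' (poly [:1:] \<beta>) = poly (map_poly \<tau> [:1:]) \<beta>'"
    by (rule extend_hom_poly) (rule coeffs_in_const[OF sfE subfield_1[OF sfE]])
  then show "extend_hom \<tau> \<beta>' 1 = 1" by (simp add: map_poly_hom_const[OF sfE ht] field_hom_on_1[OF sfE ht])
qed

lemma extend_hom_on_E: "x \<in> E \<Longrightarrow> extend_hom \<tau> \<beta>' x = \<tau> x"
  using extend_hom_poly[OF coeffs_in_const[OF sfE], of x] by (simp add: map_poly_hom_const[OF sfE ht])

lemma extend_hom_beta: "extend_hom \<tau> \<beta>' \<beta> = \<beta>'"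
proof -
  have "coeffs_in E [:0, 1:]" by (simp add: coeffs_in_def coeff_pCons subfield_0[OF sfE] subfield_1[OF sfE] split: nat.split)
  from extend_hom_poly[OF this] show ?thesis by (simp add: map_poly_hom_X[OF sfE ht])
qed

lemma extend_hom_into:
  assumes T: "is_subfield T" "\<tau> ` E \<subseteq> T" "\<beta>' \<in> T" and x: "x \<in> E\<beta>"
  shows "extend_hom \<tau> \<beta>' x \<in> T"
proof -
  obtain h where h: "coeffs_in E h" "x = poly h \<beta>" using x unfolding adjoin_def by blast
  show ?thesis using h extend_hom_poly poly_in_subfield[OF T(1) coeffs_in_map_poly_hom[OF sfE ht h(1) T(2)] T(3)] by simp
qed

end

text \<open>Kummer's lemma: for y = h(\<beta>), the quotient h(\<xi> \<beta>) / h(\<beta>) is a p-th root of unity, so h is an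
  eigenvector of \<beta> \<mapsto> \<xi> \<beta>.\<close>

lemma adjoin_pth_root:
  assumes y: "y \<in> E\<beta>" and yp: "y ^ p \<in> E"
  shows "\<exists>c\<in>E. \<exists>k<p. y = c * \<beta> ^ k"
proof (cases "y = 0")
  case True
  then show ?thesis using subfield_0[OF sfE] p_gt_0 by (intro bexI[of _ 0] exI[of _ 0]) auto
next
  case False
  obtain h where h: "coeffs_in E h" "degree h < p" "y = poly h \<beta>" using adjoinE_reduced[OF y] by blast
  have "(\<xi> * \<beta>) ^ p = b" using xp bb by (simp add: power_mult_distrib)
  moreover have "coeffs_in E (h ^ p - [:y ^ p:])"
    by (intro coeffs_in_diff[OF sfE] coeffs_in_power[OF sfE h(1)] coeffs_in_const[OF sfE yp])
  moreover have "poly (h ^ p - [:y ^ p:]) \<beta> = 0" using h(3) by simp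
  ultimately have "poly (h ^ p - [:y ^ p:]) (\<xi> * \<beta>) = 0" using poly_at_all_roots by blast
  then have "(poly h (\<xi> * \<beta>) / y) ^ p = 1" using False by (simp add: power_divide)
  then obtain s where s: "s < p" "poly h (\<xi> * \<beta>) / y = \<xi> ^ s"
    using root_of_unity_eq_prim_root_power[OF pp xp x1] by blast
  then have "poly h (\<xi> * \<beta>) = \<xi> ^ s * poly h \<beta>" using False h(3) by (simp add: field_simps)
  then have "h = monom (coeff h s) s" using conjugation_eigen_monom[OF h(1) h(2) s(1)] by simp
  then have "y = coeff h s * \<beta> ^ s" using h(3) by (metis poly_monom)
  then show ?thesis using s(1) coeffs_in_coeff[OF sfE h(1)] by blast
qed

end


lemma funpow_mult_hom:
  assumes hm: "\<And>x y. x \<in> S \<Longrightarrow> y \<in> S \<Longrightarrow> h (x * y) = h x * h y"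
    and hS: "\<And>x. x \<in> S \<Longrightarrow> h x \<in> S"
  shows "x \<in> S \<Longrightarrow> y \<in> S \<Longrightarrow> (h ^^ k) (x * y) = (h ^^ k) x * (h ^^ k) y \<and> (h ^^ k) x \<in> S"
proof (induction k arbitrary: x y)
  case 0 then show ?case by simp
next
  case (Suc k)
  then show ?case using hm hS by (simp add: funpow_Suc_right del: funpow.simps)
qed

lemma funpow_binomial_prod:
  fixes h :: "'a::comm_ring_1 \<Rightarrow> 'a"
  assumes hm: "\<And>x y. x \<in> S \<Longrightarrow> y \<in> S \<Longrightarrow> h (x * y) = h x * h y"
    and hS: "\<And>x. x \<in> S \<Longrightarrow> h x \<in> S"
    and XS: "\<And>l. X l \<in> S"
    and hX: "\<And>l. h (X l) = X l * X (Suc l)"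
  shows "(h ^^ k) (X j) = (\<Prod>l\<le>k. X (j + l) ^ (k choose l))"
proof (induction k arbitrary: j)
  case 0 then show ?case by simp
next
  case (Suc k)
  have "(h ^^ Suc k) (X j) = (h ^^ k) (X j * X (Suc j))"
    by (simp add: funpow_Suc_right hX del: funpow.simps)
  also have "\<dots> = (h ^^ k) (X j) * (h ^^ k) (X (Suc j))"
    using funpow_mult_hom[OF hm hS, of "X j" "X (Suc j)" k] XS by auto
  also have "\<dots> = (\<Prod>l\<le>k. X (j + l) ^ (k choose l)) * (\<Prod>l\<le>k. X (Suc j + l) ^ (k choose l))"
    using Suc.IH by simp
  also have "(\<Prod>l\<le>k. X (j + l) ^ (k choose l)) = X j * (\<Prod>l\<le>k. X (Suc j + l) ^ (k choose Suc l))"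
  proof -
    have "(\<Prod>l\<le>Suc k. X (j + l) ^ (k choose l)) = X j * (\<Prod>l\<le>k. X (Suc j + l) ^ (k choose Suc l))"
      by (subst prod.atMost_Suc_shift) simp
    moreover have "(\<Prod>l\<le>Suc k. X (j + l) ^ (k choose l)) = (\<Prod>l\<le>k. X (j + l) ^ (k choose l))"
      by (simp add: binomial_eq_0)
    ultimately show ?thesis by simp
  qed
  also have "X j * (\<Prod>l\<le>k. X (Suc j + l) ^ (k choose Suc l)) * (\<Prod>l\<le>k. X (Suc j + l) ^ (k choose l))
      = X j * (\<Prod>l\<le>k. X (Suc j + l) ^ (Suc k choose Suc l))"
    by (simp add: power_add prod.distrib mult_ac)
  also have "\<dots> = (\<Prod>l\<le>Suc k. X (j + l) ^ (Suc k choose l))"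
    by (subst prod.atMost_Suc_shift) simp
  finally show ?case .
qed


definition mult_hom_on :: "'a::field set \<Rightarrow> ('a \<Rightarrow> 'a) \<Rightarrow> bool" where
  "mult_hom_on K h \<longleftrightarrow> (\<forall>x\<in>K. \<forall>y\<in>K. h (x * y) = h x * h y) \<and> h 1 = 1 \<and> h 0 = 0 \<and> (\<forall>x\<in>K. h x \<in> K)"

context
  fixes K :: "'a::field set" and h
  assumes subfield_K: "is_subfield K" and mhh: "mult_hom_on K h"
begin
lemma mult_hom_on_mult: "x \<in> K \<Longrightarrow> y \<in> K \<Longrightarrow> h (x * y) = h x * h y"
  using mhh unfolding mult_hom_on_def by blast
lemma mult_hom_on_1: "h 1 = 1" using mhh unfolding mult_hom_on_def by blast
lemma mult_hom_on_0: "h 0 = 0" using mhh unfolding mult_hom_on_def by blast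
lemma mult_hom_on_in: "x \<in> K \<Longrightarrow> h x \<in> K" using mhh unfolding mult_hom_on_def by blast
lemma mult_hom_on_power: "x \<in> K \<Longrightarrow> h (x ^ n) = h x ^ n"
  by (induction n) (auto simp: mult_hom_on_1 mult_hom_on_mult subfield_power[OF subfield_K])
lemma mult_hom_on_prod: "(\<And>i. i \<in> A \<Longrightarrow> g i \<in> K) \<Longrightarrow> h (prod g A) = (\<Prod>i\<in>A. h (g i))"
  by (induction A rule: infinite_finite_induct) (auto simp: mult_hom_on_1 mult_hom_on_mult subfield_prod[OF subfield_K])
lemma mult_hom_on_inverse: "x \<in> K \<Longrightarrow> h (inverse x) = inverse (h x)"
proof (cases "x = 0")
  case True then show ?thesis by (simp add: mult_hom_on_0)
next
  case False
  assume x: "x \<in> K"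
  have "h (x * inverse x) = h x * h (inverse x)" using mult_hom_on_mult x subfield_inverse[OF subfield_K x] by blast
  then have "h x * h (inverse x) = 1" using False by (simp add: mult_hom_on_1)
  then show ?thesis by (metis inverse_unique)
qed
lemma mult_hom_on_nonzero: "x \<in> K \<Longrightarrow> x \<noteq> 0 \<Longrightarrow> h x \<noteq> 0"
proof
  assume x: "x \<in> K" "x \<noteq> 0" "h x = 0"
  have "h (x * inverse x) = h x * h (inverse x)" using mult_hom_on_mult x subfield_inverse[OF subfield_K x(1)] by blast
  then show False using x by (simp add: mult_hom_on_1)
qed
lemma mult_hom_on_funpow: "mult_hom_on K (h ^^ n)"
proof (induction n)
  case 0 then show ?case by (simp add: mult_hom_on_def)
next
  case (Suc n) then show ?case unfolding mult_hom_on_def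
    using mult_hom_on_mult mult_hom_on_1 mult_hom_on_0 mult_hom_on_in by auto
qed
end

lemma field_hom_on_imp_mult_hom_on: "is_subfield K \<Longrightarrow> field_hom_on K h \<Longrightarrow> (\<forall>x\<in>K. h x \<in> K) \<Longrightarrow> mult_hom_on K h"
  unfolding mult_hom_on_def using field_hom_on_mult field_hom_on_1 field_hom_on_0 by blast

lemma mult_hom_on_quotient:
  assumes K: "is_subfield K" and hf: "field_hom_on K h" and hK: "\<And>x. x \<in> K \<Longrightarrow> h x \<in> K"
  shows "mult_hom_on K (\<lambda>y. h y / y)"
  unfolding mult_hom_on_def
  using field_hom_on_mult[OF K hf] field_hom_on_1[OF K hf] field_hom_on_0[OF K hf] hK subfield_divide[OF K]
  by (auto simp: times_divide_times_eq)

lemma funpow_eq_binomial_prod: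
  assumes K: "is_subfield K" and hf: "field_hom_on K h" and hK: "\<And>x. x \<in> K \<Longrightarrow> h x \<in> K"
    and x: "x \<in> K" "x \<noteq> 0"
  shows "(h ^^ k) x = (\<Prod>l\<le>k. (((\<lambda>y. h y / y) ^^ l) x) ^ (k choose l))"
proof -
  define r where "r = (\<lambda>y. h y / y)"
  have mr: "mult_hom_on K (r ^^ l)" for l
    unfolding r_def by (intro mult_hom_on_funpow[OF K] mult_hom_on_quotient[OF K hf hK])
  define S where "S = {y \<in> K. y \<noteq> 0}"
  have XS: "(r ^^ l) x \<in> S" for l
    unfolding S_def using mult_hom_on_in[OF K mr] mult_hom_on_nonzero[OF K mr] x by auto
  have "(h ^^ k) ((r ^^ 0) x) = (\<Prod>l\<le>k. ((r ^^ (0 + l)) x) ^ (k choose l))"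
  proof (rule funpow_binomial_prod[where S = S])
    show "\<And>x y. x \<in> S \<Longrightarrow> y \<in> S \<Longrightarrow> h (x * y) = h x * h y"
      unfolding S_def using field_hom_on_mult[OF K hf] by auto
    show "\<And>x. x \<in> S \<Longrightarrow> h x \<in> S" unfolding S_def using hK field_hom_on_eq_0_iff[OF K hf] by auto
    show "\<And>l. (r ^^ l) x \<in> S" by (rule XS)
    show "\<And>l. h ((r ^^ l) x) = (r ^^ l) x * (r ^^ Suc l) x"
      using XS unfolding S_def by (simp add: r_def)
  qed
  then show ?thesis unfolding r_def by simp
qed

lemma prod_atMost_split_ends: "0 < (n::nat) \<Longrightarrow> (\<Prod>l\<le>n. f l) = f 0 * f n * (\<Prod>l\<in>{1..<n}. f l)"
proof -
  assume n: "0 < n"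
  then have "{..n} = insert 0 (insert n {1..<n})" by (auto simp: le_less)
  then show ?thesis using n by (simp add: mult.assoc)
qed

lemma prime_choose_eq: "prime p \<Longrightarrow> 0 < l \<Longrightarrow> l < p \<Longrightarrow> p choose l = p * ((p choose l) div p)"
  using dvd_choose_prime[of l p] by simp

text \<open>With \<rho> = h - 1 and h^p = 1, the relation (1 + \<rho>)^p = 1 expresses \<rho>^p through the \<rho>^l with
  0 < l < p, whose binomial coefficients are all divisible by p.\<close>

lemma quotient_pow_p_eq_power:
  assumes K: "is_subfield K" and p: "prime p"
    and hf: "field_hom_on K h" and hK: "\<And>x. x \<in> K \<Longrightarrow> h x \<in> K" and hp: "\<And>x. x \<in> K \<Longrightarrow> (h ^^ p) x = x"
    and x: "x \<in> K" "x \<noteq> 0"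
  shows "((\<lambda>y. h y / y) ^^ p) x
    = (inverse (\<Prod>l\<in>{1..<p}. (((\<lambda>y. h y / y) ^^ l) x) ^ ((p choose l) div p))) ^ p"
proof -
  define r where "r = (\<lambda>y. h y / y)"
  have p0: "0 < p" using p prime_gt_0_nat by blast
  have "x = (\<Prod>l\<le>p. ((r ^^ l) x) ^ (p choose l))"
    using funpow_eq_binomial_prod[OF K hf hK x, of p] hp[OF x(1)] unfolding r_def by simp
  also have "\<dots> = x * (r ^^ p) x * (\<Prod>l\<in>{1..<p}. ((r ^^ l) x) ^ (p choose l))"
    by (subst prod_atMost_split_ends[OF p0]) simp
  finally have "1 = (r ^^ p) x * (\<Prod>l\<in>{1..<p}. ((r ^^ l) x) ^ (p choose l))"
    using x(2) by (simp add: mult.assoc)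
  then have "(r ^^ p) x = inverse (\<Prod>l\<in>{1..<p}. ((r ^^ l) x) ^ (p choose l))"
    by (metis inverse_unique mult.commute)
  also have "(\<Prod>l\<in>{1..<p}. ((r ^^ l) x) ^ (p choose l)) = (\<Prod>l\<in>{1..<p}. ((r ^^ l) x) ^ ((p choose l) div p)) ^ p"
  proof -
    have "(\<Prod>l\<in>{1..<p}. ((r ^^ l) x) ^ (p choose l)) = (\<Prod>l\<in>{1..<p}. (((r ^^ l) x) ^ ((p choose l) div p)) ^ p)"
    proof (intro prod.cong refl)
      fix l assume "l \<in> {1..<p}"
      then have "p choose l = p * ((p choose l) div p)" by (intro prime_choose_eq[OF p]) auto
      then show "((r ^^ l) x) ^ (p choose l) = (((r ^^ l) x) ^ ((p choose l) div p)) ^ p"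
        by (metis power_mult mult.commute)
    qed
    then show ?thesis by (simp only: prod_power_distrib)
  qed
  finally show ?thesis unfolding r_def by (simp add: power_inverse)
qed

lemma nat_mod_add: "0 \<le> a \<Longrightarrow> 0 \<le> b \<Longrightarrow> nat ((a + b) mod int p) mod p = (nat a + nat b) mod p"
  by (simp add: nat_mod_distrib nat_add_distrib)

lemma funpow_apply_add: "(f ^^ m) ((f ^^ n) x) = (f ^^ (m + n)) x"
  by (simp add: funpow_add)

locale cyclic_kummer =
  fixes p :: nat and F K :: "'a::field set" and \<xi> a \<alpha> \<gamma> :: 'a and \<sigma> :: "'a \<Rightarrow> 'a"
  assumes pp: "prime p"
    and sfF: "is_subfield F"
    and xiF: "\<xi> \<in> F" and xp: "\<xi> ^ p = 1" and x1: "\<xi> \<noteq> 1"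
    and aF: "a \<in> F" and a0: "a \<noteq> 0" and aa: "\<alpha> ^ p = a"
    and K_def: "K = field_gen (F \<union> {\<alpha>})"
    and sig: "is_aut_over K F \<sigma>" and sa: "\<sigma> \<alpha> = \<xi> * \<alpha>"
    and roots: "\<forall>x\<in>K. \<exists>y. y ^ p = x"
    and gK: "\<gamma> \<in> K" and g0: "\<gamma> \<noteq> 0"
begin

lemma p_gt_0: "p > 0" using pp prime_gt_0_nat by blast
lemma p_gt_1: "p > 1" using pp prime_gt_1_nat by blast
lemma subfield_K: "is_subfield K" unfolding K_def by (rule field_gen_subfield)
lemma F_subset_K: "F \<subseteq> K" unfolding K_def using field_gen_subset by blast
lemma alpha_in_K: "\<alpha> \<in> K" unfolding K_def using field_gen_subset by blast
lemma xi_in_K: "\<xi> \<in> K" using F_subset_K xiF by blast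
lemma alpha_nonzero: "\<alpha> \<noteq> 0" using aa a0 p_gt_0 by auto
lemma xi_nonzero: "\<xi> \<noteq> 0" using prim_root_nonzero[OF pp xp x1] .

lemma sigma_F: "x \<in> F \<Longrightarrow> \<sigma> x = x" using sig unfolding is_aut_over_def by blast
lemma sigma_bij: "bij_betw \<sigma> K K" using sig unfolding is_aut_over_def by blast
lemma sigma_K: "x \<in> K \<Longrightarrow> \<sigma> x \<in> K" using sigma_bij by (meson bij_betwE)
lemma field_hom_on_sigma: "field_hom_on K \<sigma>"
  unfolding field_hom_on_def using sig sigma_F[OF subfield_1[OF sfF]] unfolding is_aut_over_def by blast

lemma field_hom_on_sigma_pow: "field_hom_on K (\<sigma> ^^ n)" and sigma_pow_K: "x \<in> K \<Longrightarrow> (\<sigma> ^^ n) x \<in> K"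
  using field_hom_on_funpow[OF subfield_K field_hom_on_sigma] sigma_K by (auto simp: image_subset_iff)

lemma sigma_pow_F: "x \<in> F \<Longrightarrow> (\<sigma> ^^ n) x = x"
  by (induction n) (auto simp: sigma_F)

lemma sigma_pow_alpha: "(\<sigma> ^^ n) \<alpha> = \<xi> ^ n * \<alpha>"
proof (induction n)
  case 0 then show ?case by simp
next
  case (Suc n)
  have "(\<sigma> ^^ Suc n) \<alpha> = \<sigma> (\<xi> ^ n * \<alpha>)" using Suc by simp
  also have "\<dots> = \<sigma> (\<xi> ^ n) * \<sigma> \<alpha>"
    using field_hom_on_mult[OF subfield_K field_hom_on_sigma] subfield_power[OF subfield_K xi_in_K] alpha_in_K by blast
  also have "\<dots> = \<xi> ^ Suc n * \<alpha>" using sigma_F[OF subfield_power[OF sfF xiF]] sa by simp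
  finally show ?case .
qed

lemma sigma_pow_p: "x \<in> K \<Longrightarrow> (\<sigma> ^^ p) x = x"
proof -
  assume x: "x \<in> K"
  have "field_hom_on K id" by (simp add: field_hom_on_def)
  have "\<And>y. y \<in> field_gen (F \<union> {\<alpha>}) \<Longrightarrow> (\<sigma> ^^ p) y = id y"
    by (rule field_hom_on_eq_on_field_gen[OF subfield_K field_hom_on_sigma_pow \<open>field_hom_on K id\<close>]) (use F_subset_K alpha_in_K sigma_pow_F sigma_pow_alpha xp in auto)
  then show ?thesis using x K_def by simp
qed

lemma sigma_pow_mult_p: "x \<in> K \<Longrightarrow> (\<sigma> ^^ (p * q)) x = x"
proof (induction q)
  case 0 then show ?case by simp
next
  case (Suc q)
  have "(\<sigma> ^^ (p * Suc q)) x = (\<sigma> ^^ p) ((\<sigma> ^^ (p * q)) x)" by (simp add: funpow_add)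
  then show ?case using Suc sigma_pow_p by simp
qed

lemma sigma_pow_mod: "x \<in> K \<Longrightarrow> (\<sigma> ^^ n) x = (\<sigma> ^^ (n mod p)) x"
proof -
  assume x: "x \<in> K"
  have "(\<sigma> ^^ (n mod p)) ((\<sigma> ^^ (p * (n div p))) x) = (\<sigma> ^^ (n mod p + p * (n div p))) x"
    by (rule funpow_apply_add)
  then have "(\<sigma> ^^ n) x = (\<sigma> ^^ (n mod p)) ((\<sigma> ^^ (p * (n div p))) x)" by simp
  also have "\<dots> = (\<sigma> ^^ (n mod p)) x" using sigma_pow_mult_p x by simp
  finally show ?thesis .
qed

lemma mult_hom_on_sigma_pow: "mult_hom_on K (\<sigma> ^^ n)"
  by (rule field_hom_on_imp_mult_hom_on[OF subfield_K field_hom_on_sigma_pow]) (use sigma_pow_K in blast)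

lemma sigma_pow_surj: "y \<in> K \<Longrightarrow> \<exists>x\<in>K. (\<sigma> ^^ n) x = y"
proof -
  assume y: "y \<in> K"
  have e: "n + (p - 1) * n = p * n" using p_gt_0 by (cases p) auto
  have "(\<sigma> ^^ n) ((\<sigma> ^^ ((p - 1) * n)) y) = (\<sigma> ^^ (p * n)) y"
    by (simp only: funpow_apply_add e)
  also have "\<dots> = y" using sigma_pow_mult_p y by (simp add: mult.commute)
  finally show ?thesis using sigma_pow_K y by blast
qed

abbreviation pth :: "'a \<Rightarrow> bool" where "pth x \<equiv> pth_power_in p K x"

lemma pth_mult_hom_on: "mult_hom_on K h \<Longrightarrow> pth x \<Longrightarrow> pth (h x)"
  unfolding pth_power_in_def
    using mult_hom_on_power[OF subfield_K] mult_hom_on_in[OF subfield_K] mult_hom_on_nonzero[OF subfield_K] by metis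

lemma pth_mult: "pth x \<Longrightarrow> pth y \<Longrightarrow> pth (x * y)"
  unfolding pth_power_in_def
  by (metis mult_eq_0_iff power_mult_distrib subfield_mult[OF subfield_K])

lemma pth_inverse: "pth x \<Longrightarrow> pth (inverse x)"
  unfolding pth_power_in_def
  by (metis inverse_nonzero_iff_nonzero power_inverse subfield_inverse[OF subfield_K])

lemma pth_powI: "b \<in> K \<Longrightarrow> b \<noteq> 0 \<Longrightarrow> pth (b ^ p)"
  unfolding pth_power_in_def by blast

lemma pth_1: "pth 1" using pth_powI[OF subfield_1[OF subfield_K]] by simp

lemma pth_power: "pth x \<Longrightarrow> pth (x ^ n)"
  by (induction n) (auto simp: pth_1 pth_mult)

lemma pth_prod: "(\<And>l. l \<in> A \<Longrightarrow> pth (f l)) \<Longrightarrow> pth (prod f A)"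
  by (induction A rule: infinite_finite_induct) (auto simp: pth_1 pth_mult)

definition rho :: "'a \<Rightarrow> 'a" where "rho x = \<sigma> x / x"
definition sig_inv :: "'a \<Rightarrow> 'a" where "sig_inv = \<sigma> ^^ (p - 1)"
definition rho_inv :: "'a \<Rightarrow> 'a" where "rho_inv x = sig_inv x / x"

lemma sig_inv_pow: "sig_inv ^^ n = \<sigma> ^^ ((p - 1) * n)"
  unfolding sig_inv_def by (simp add: funpow_mult mult.commute)

lemma field_hom_on_sig_inv: "field_hom_on K sig_inv" and sig_inv_K: "x \<in> K \<Longrightarrow> sig_inv x \<in> K"
  unfolding sig_inv_def using field_hom_on_sigma_pow sigma_pow_K by auto

lemma mult_hom_on_sig_inv_pow: "mult_hom_on K (sig_inv ^^ n)" unfolding sig_inv_pow by (rule mult_hom_on_sigma_pow)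
lemma sig_inv_pow_K: "x \<in> K \<Longrightarrow> (sig_inv ^^ n) x \<in> K" unfolding sig_inv_pow by (rule sigma_pow_K)

lemma mult_hom_on_rho: "mult_hom_on K rho"
  using mult_hom_on_quotient[OF subfield_K field_hom_on_sigma sigma_K] unfolding rho_def[abs_def] .

lemma mult_hom_on_rho_inv: "mult_hom_on K rho_inv"
  using mult_hom_on_quotient[OF subfield_K field_hom_on_sig_inv sig_inv_K] unfolding rho_inv_def[abs_def] .

lemma rho_iter_eq: "rho_iter \<sigma> n = rho ^^ n"
  unfolding rho_iter_def rho_def by (simp add: fun_eq_iff)

lemma mult_hom_on_rho_pow: "mult_hom_on K (rho ^^ n)" by (rule mult_hom_on_funpow[OF subfield_K mult_hom_on_rho])
lemma mult_hom_on_rho_inv_pow: "mult_hom_on K (rho_inv ^^ n)" by (rule mult_hom_on_funpow[OF subfield_K mult_hom_on_rho_inv])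

lemma sigma_pow_binomial: "x \<in> K \<Longrightarrow> x \<noteq> 0 \<Longrightarrow> (\<sigma> ^^ k) x = (\<Prod>l\<le>k. ((rho ^^ l) x) ^ (k choose l))"
  using funpow_eq_binomial_prod[OF subfield_K field_hom_on_sigma sigma_K] unfolding rho_def
    by (simp add: fun_eq_iff[symmetric])

lemma sig_inv_pow_binomial: "x \<in> K \<Longrightarrow> x \<noteq> 0 \<Longrightarrow> (sig_inv ^^ k) x = (\<Prod>l\<le>k. ((rho_inv ^^ l) x) ^ (k choose l))"
  using funpow_eq_binomial_prod[OF subfield_K field_hom_on_sig_inv sig_inv_K] unfolding rho_inv_def
    by (simp add: fun_eq_iff[symmetric])

lemma rho_pow_K: "x \<in> K \<Longrightarrow> (rho ^^ n) x \<in> K" using mult_hom_on_in[OF subfield_K mult_hom_on_rho_pow] .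
lemma rho_inv_pow_K: "x \<in> K \<Longrightarrow> (rho_inv ^^ n) x \<in> K"
  using mult_hom_on_in[OF subfield_K mult_hom_on_rho_inv_pow] .
lemma rho_pow_nonzero: "x \<in> K \<Longrightarrow> x \<noteq> 0 \<Longrightarrow> (rho ^^ n) x \<noteq> 0"
  using mult_hom_on_nonzero[OF subfield_K mult_hom_on_rho_pow] .
lemma rho_inv_pow_nonzero: "x \<in> K \<Longrightarrow> x \<noteq> 0 \<Longrightarrow> (rho_inv ^^ n) x \<noteq> 0"
  using mult_hom_on_nonzero[OF subfield_K mult_hom_on_rho_inv_pow] .

lemma pth_rho_pow_p: "x \<in> K \<Longrightarrow> x \<noteq> 0 \<Longrightarrow> pth ((rho ^^ p) x)"
proof -
  assume x: "x \<in> K" "x \<noteq> 0"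
  have e: "(rho ^^ p) x = (inverse (\<Prod>l\<in>{1..<p}. ((rho ^^ l) x) ^ ((p choose l) div p))) ^ p"
    using quotient_pow_p_eq_power[OF subfield_K pp field_hom_on_sigma sigma_K sigma_pow_p x]
      unfolding rho_def[abs_def] by simp
  have "(\<Prod>l\<in>{1..<p}. ((rho ^^ l) x) ^ ((p choose l) div p)) \<in> K"
    by (intro subfield_prod[OF subfield_K] subfield_power[OF subfield_K] rho_pow_K x)
  moreover have "(\<Prod>l\<in>{1..<p}. ((rho ^^ l) x) ^ ((p choose l) div p)) \<noteq> 0"
    using rho_pow_nonzero[OF x] by simp
  ultimately show ?thesis unfolding e by (intro pth_powI) (auto intro: subfield_inverse[OF subfield_K])
qed

definition i :: nat where "i = mod_length p K \<sigma> \<gamma>"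

lemma i_eq_Least: "i = (LEAST n. pth ((rho ^^ n) \<gamma>))"
  unfolding i_def mod_length_def rho_iter_eq ..

lemma i_le_p: "i \<le> p"
  unfolding i_eq_Least by (rule Least_le) (rule pth_rho_pow_p[OF gK g0])

lemma pth_i: "pth ((rho ^^ i) \<gamma>)"
  unfolding i_eq_Least by (rule LeastI) (rule pth_rho_pow_p[OF gK g0])

lemma not_pth_rho_pow_less: "n < i \<Longrightarrow> \<not> pth ((rho ^^ n) \<gamma>)"
  unfolding i_eq_Least by (rule not_less_Least)

lemma pth_rho_pow_ge: "i \<le> n \<Longrightarrow> pth ((rho ^^ n) \<gamma>)"
proof -
  assume "i \<le> n"
  then have "(rho ^^ n) \<gamma> = (rho ^^ (n - i)) ((rho ^^ i) \<gamma>)"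
    by (simp add: funpow_apply_add)
  then show ?thesis using pth_mult_hom_on[OF mult_hom_on_rho_pow pth_i] by simp
qed

lemma pth_rho_pow_iff: "pth ((rho ^^ n) \<gamma>) \<longleftrightarrow> i \<le> n"
  using pth_rho_pow_ge not_pth_rho_pow_less by (meson not_le)

lemma sigma_sig_inv_pow_commute: "\<sigma> ((sig_inv ^^ n) y) = (sig_inv ^^ n) (\<sigma> y)"
  unfolding sig_inv_pow by (metis funpow_swap1)

lemma rho_sig_inv_pow: "y \<in> K \<Longrightarrow> rho ((sig_inv ^^ n) y) = (sig_inv ^^ n) (rho y)"
  unfolding rho_def sigma_sig_inv_pow_commute
  using field_hom_on_divide[OF subfield_K, of "sig_inv ^^ n"] mult_hom_on_sig_inv_pow sigma_K
  by (metis field_hom_on_funpow[OF subfield_K field_hom_on_sig_inv] image_subset_iff sig_inv_K)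

lemma rho_inv_eq: "y \<in> K \<Longrightarrow> rho_inv y = inverse (sig_inv (rho y))"
proof -
  assume y: "y \<in> K"
  have "sig_inv (\<sigma> y) = (\<sigma> ^^ p) y" unfolding sig_inv_def using p_gt_0
    by (metis Suc_diff_1 funpow_Suc_right o_apply)
  then have "sig_inv (\<sigma> y) = y" using sigma_pow_p y by simp
  have "sig_inv (rho y) = sig_inv (\<sigma> y) / sig_inv y" unfolding rho_def
    by (rule field_hom_on_divide[OF subfield_K field_hom_on_sig_inv sigma_K[OF y] y])
  then have "sig_inv (rho y) = y / sig_inv y" using \<open>sig_inv (\<sigma> y) = y\<close> by simp
  then show ?thesis unfolding rho_inv_def by simp
qed

lemma rho_inv_pow_eq:
  "x \<in> K \<Longrightarrow> (rho_inv ^^ n) x = (if even n then (sig_inv ^^ n) ((rho ^^ n) x) else inverse ((sig_inv ^^ n) ((rho ^^ n) x)))"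
proof (induction n)
  case 0 then show ?case by simp
next
  case (Suc n)
  have rK: "(rho ^^ n) x \<in> K" using rho_pow_K Suc.prems by blast
  have sK: "(sig_inv ^^ n) ((rho ^^ n) x) \<in> K" using sig_inv_pow_K rK by blast
  have "(rho_inv ^^ Suc n) x = rho_inv ((rho_inv ^^ n) x)" by simp
  also have "\<dots> = inverse (sig_inv (rho ((rho_inv ^^ n) x)))" using rho_inv_eq rho_inv_pow_K Suc.prems by blast
  also have "\<dots> = (if even (Suc n) then (sig_inv ^^ Suc n) ((rho ^^ Suc n) x) else inverse ((sig_inv ^^ Suc n) ((rho ^^ Suc n) x)))"
  proof (cases "even n")
    case True
    then have "(rho_inv ^^ n) x = (sig_inv ^^ n) ((rho ^^ n) x)" using Suc by simp
    then show ?thesis using True rho_sig_inv_pow[OF rK, of n] by (simp add: funpow_swap1)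
  next
    case False
    then have "(rho_inv ^^ n) x = inverse ((sig_inv ^^ n) ((rho ^^ n) x))" using Suc by simp
    then have "rho ((rho_inv ^^ n) x) = inverse ((sig_inv ^^ n) ((rho ^^ Suc n) x))"
      using mult_hom_on_inverse[OF subfield_K mult_hom_on_rho sK] rho_sig_inv_pow[OF rK, of n] by simp
    moreover have "(rho ^^ Suc n) x \<in> K" using rho_pow_K Suc.prems by blast
    ultimately have "sig_inv (rho ((rho_inv ^^ n) x)) = inverse ((sig_inv ^^ Suc n) ((rho ^^ Suc n) x))"
      using mult_hom_on_inverse[OF subfield_K mult_hom_on_sig_inv_pow[of 1]] sig_inv_pow_K by (simp add: funpow_swap1)
    then show ?thesis using False by simp
  qed
  finally show ?case .
qed

lemma pth_sig_inv_pow_iff: "y \<in> K \<Longrightarrow> pth ((sig_inv ^^ n) y) \<longleftrightarrow> pth y"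
proof
  assume y: "y \<in> K" and h: "pth ((sig_inv ^^ n) y)"
  have e: "n + (p - 1) * n = p * n" using p_gt_0 by (cases p) auto
  have "(\<sigma> ^^ n) ((sig_inv ^^ n) y) = (\<sigma> ^^ (p * n)) y"
    unfolding sig_inv_pow by (simp only: funpow_apply_add e)
  also have "\<dots> = y" using sigma_pow_mult_p y by simp
  finally show "pth y" using pth_mult_hom_on[OF mult_hom_on_sigma_pow h] by metis
next
  assume "pth y" then show "pth ((sig_inv ^^ n) y)" using pth_mult_hom_on[OF mult_hom_on_sig_inv_pow] by blast
qed

lemma pth_inverse_iff: "pth (inverse y) \<longleftrightarrow> pth y"
  using pth_inverse by fastforce

definition gamma_seq :: "nat \<Rightarrow> 'a" where "gamma_seq l = (rho_inv ^^ l) \<gamma>"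

lemma gamma_seq_K: "gamma_seq l \<in> K" unfolding gamma_seq_def using rho_inv_pow_K gK by blast
lemma gamma_seq_nonzero: "gamma_seq l \<noteq> 0" unfolding gamma_seq_def using rho_inv_pow_nonzero gK g0 by blast

lemma pth_gamma_seq_iff: "pth (gamma_seq l) \<longleftrightarrow> i \<le> l"
proof -
  have "pth (gamma_seq l) \<longleftrightarrow> pth ((sig_inv ^^ l) ((rho ^^ l) \<gamma>))"
    unfolding gamma_seq_def rho_inv_pow_eq[OF gK] by (simp add: pth_inverse_iff)
  also have "\<dots> \<longleftrightarrow> pth ((rho ^^ l) \<gamma>)" using pth_sig_inv_pow_iff rho_pow_K gK by blast
  finally show ?thesis using pth_rho_pow_iff by simp
qed

lemma gamma_seq_Suc: "gamma_seq (Suc l) = rho_inv (gamma_seq l)" unfolding gamma_seq_def by simp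

lemma sig_inv_pow_p: "x \<in> K \<Longrightarrow> (sig_inv ^^ p) x = x"
  unfolding sig_inv_pow using sigma_pow_mult_p[of x "p - 1"] by (simp add: mult.commute)

text \<open>For i = p the p-th root of \<gamma>_i is the one given by quotient_pow_p_eq_power: with this choice
  \<mu>^p fixes \<beta>_0 (mu_p_exp_0_eq_p).\<close>

definition top_root :: 'a where
  "top_root = (if i = p then inverse (\<Prod>l\<in>{1..<p}. gamma_seq l ^ ((p choose l) div p))
         else (SOME c. c \<in> K \<and> c \<noteq> 0 \<and> c ^ p = gamma_seq i))"

lemma top_root: "top_root \<in> K \<and> top_root \<noteq> 0 \<and> top_root ^ p = gamma_seq i"
proof (cases "i = p")
  case True
  have e: "gamma_seq p = (inverse (\<Prod>l\<in>{1..<p}. gamma_seq l ^ ((p choose l) div p))) ^ p"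
    using quotient_pow_p_eq_power[OF subfield_K pp field_hom_on_sig_inv sig_inv_K sig_inv_pow_p gK g0]
      unfolding gamma_seq_def rho_inv_def[abs_def] by simp
  have "(\<Prod>l\<in>{1..<p}. gamma_seq l ^ ((p choose l) div p)) \<in> K"
    by (intro subfield_prod[OF subfield_K] subfield_power[OF subfield_K] gamma_seq_K)
  moreover have "(\<Prod>l\<in>{1..<p}. gamma_seq l ^ ((p choose l) div p)) \<noteq> 0" using gamma_seq_nonzero by simp
  ultimately show ?thesis using True e unfolding top_root_def by (auto intro: subfield_inverse[OF subfield_K])
next
  case False
  have "pth (gamma_seq i)" using pth_gamma_seq_iff by simp
  then have "\<exists>c. c \<in> K \<and> c \<noteq> 0 \<and> c ^ p = gamma_seq i" unfolding pth_power_in_def by auto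
  moreover have "top_root = (SOME c. c \<in> K \<and> c \<noteq> 0 \<and> c ^ p = gamma_seq i)"
    using False unfolding top_root_def by simp
  ultimately show ?thesis using someI_ex[of "\<lambda>c. c \<in> K \<and> c \<noteq> 0 \<and> c ^ p = gamma_seq i"] by simp
qed

definition beta_seq :: "nat \<Rightarrow> 'a" where
  "beta_seq l = (if l < i then (SOME y. y ^ p = gamma_seq l) else (rho_inv ^^ (l - i)) top_root)"

lemma beta_seq_power: "beta_seq l ^ p = gamma_seq l"
proof (cases "l < i")
  case True
  have "\<exists>y. y ^ p = gamma_seq l" using roots gamma_seq_K by blast
  moreover have "beta_seq l = (SOME y. y ^ p = gamma_seq l)" using True unfolding beta_seq_def by simp
  ultimately show ?thesis using someI_ex[of "\<lambda>y. y ^ p = gamma_seq l"] by simp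
next
  case False
  have "(rho_inv ^^ (l - i)) (top_root ^ p) = ((rho_inv ^^ (l - i)) top_root) ^ p"
    using top_root mult_hom_on_power[OF subfield_K mult_hom_on_rho_inv_pow, of top_root "l - i" p] by simp
  then have "beta_seq l ^ p = (rho_inv ^^ (l - i)) (top_root ^ p)"
    using False unfolding beta_seq_def by simp
  also have "\<dots> = gamma_seq l" using top_root False unfolding gamma_seq_def by (simp add: funpow_apply_add)
  finally show ?thesis .
qed

lemma beta_seq_nonzero: "beta_seq l \<noteq> 0" using beta_seq_power gamma_seq_nonzero p_gt_0 by (metis zero_power)

lemma beta_seq_K: "i \<le> l \<Longrightarrow> beta_seq l \<in> K"
  unfolding beta_seq_def using rho_inv_pow_K top_root by auto

lemma rho_inv_beta_seq: "i \<le> l \<Longrightarrow> rho_inv (beta_seq l) = beta_seq (Suc l)"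
  unfolding beta_seq_def by (simp add: Suc_diff_le)

lemma beta_seq_i: "beta_seq i = top_root" unfolding beta_seq_def by simp

text \<open>Applying \<rho>'^(i-1-j) to such a relation would make \<gamma>_(i-1) a p-th power.\<close>

lemma gamma_seq_independent:
  assumes j: "j < i"
  shows "\<not> (\<exists>d\<in>K. d \<noteq> 0 \<and> (\<exists>m. gamma_seq j = d ^ p * (\<Prod>l\<in>{Suc j..<i}. gamma_seq l ^ m l)))"
proof
  assume "\<exists>d\<in>K. d \<noteq> 0 \<and> (\<exists>m. gamma_seq j = d ^ p * (\<Prod>l\<in>{Suc j..<i}. gamma_seq l ^ m l))"
  then obtain d m where d: "d \<in> K" "d \<noteq> 0" and eq: "gamma_seq j = d ^ p * (\<Prod>l\<in>{Suc j..<i}. gamma_seq l ^ m l)" by blast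
  define r where "r = i - 1 - j"
  have m1: "mult_hom_on K (rho_inv ^^ r)" by (rule mult_hom_on_rho_inv_pow)
  have "(rho_inv ^^ r) (gamma_seq j) = gamma_seq (i - 1)" unfolding gamma_seq_def r_def using j
    by (simp add: funpow_apply_add)
  also have "(rho_inv ^^ r) (gamma_seq j) = (rho_inv ^^ r) (d ^ p) * (\<Prod>l\<in>{Suc j..<i}. (rho_inv ^^ r) (gamma_seq l ^ m l))"
    unfolding eq using d gamma_seq_K
    by (simp add: mult_hom_on_mult[OF subfield_K m1] mult_hom_on_prod[OF subfield_K m1] subfield_power[OF subfield_K] subfield_prod[OF subfield_K])
  finally have e2: "gamma_seq (i - 1) = (rho_inv ^^ r) (d ^ p) * (\<Prod>l\<in>{Suc j..<i}. (rho_inv ^^ r) (gamma_seq l ^ m l))" ..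
  have "pth ((rho_inv ^^ r) (d ^ p))" by (rule pth_mult_hom_on[OF m1 pth_powI[OF d]])
  moreover have "pth ((rho_inv ^^ r) (gamma_seq l ^ m l))" if "l \<in> {Suc j..<i}" for l
  proof -
    have "(rho_inv ^^ r) (gamma_seq l ^ m l) = gamma_seq (r + l) ^ m l"
      using mult_hom_on_power[OF subfield_K m1 gamma_seq_K] unfolding gamma_seq_def by (simp add: funpow_apply_add)
    moreover have "i \<le> r + l" using that j unfolding r_def by auto
    ultimately show ?thesis using pth_power pth_gamma_seq_iff by simp
  qed
  ultimately have "pth (gamma_seq (i - 1))" unfolding e2 by (intro pth_mult pth_prod) auto
  then show False using pth_gamma_seq_iff j by simp
qed

section \<open>A tower of Kummer extensions\<close>

primrec tower :: "nat \<Rightarrow> 'a set" where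
  "tower 0 = K"
| "tower (Suc t) = adjoin (tower t) (beta_seq (i - 1 - t))"

definition radicals_from :: "nat \<Rightarrow> 'a set \<Rightarrow> bool" where
  "radicals_from n E \<longleftrightarrow> (\<forall>w\<in>K. w \<noteq> 0 \<longrightarrow> (\<exists>y\<in>E. y ^ p = w) \<longrightarrow>
     (\<exists>d\<in>K. d \<noteq> 0 \<and> (\<exists>m. w = d ^ p * (\<Prod>l\<in>{n..<i}. gamma_seq l ^ m l))))"

lemma radicals_fromD:
  assumes "radicals_from n E" "w \<in> K" "w \<noteq> 0" "y \<in> E" "y ^ p = w"
  obtains d m where "d \<in> K" "d \<noteq> 0" "w = d ^ p * (\<Prod>l\<in>{n..<i}. gamma_seq l ^ m l)"
  using assms unfolding radicals_from_def by blast

lemma radicals_from_adjoin: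
  assumes step: "kummer_step p \<xi> E (gamma_seq j) (beta_seq j)" and KE: "K \<subseteq> E"
    and rad: "radicals_from (Suc j) E" and j: "j < i"
  shows "radicals_from j (adjoin E (beta_seq j))"
  unfolding radicals_from_def
proof (intro ballI impI)
  interpret kummer_step p \<xi> E "gamma_seq j" "beta_seq j" by (rule step)
  fix w assume w: "w \<in> K" "w \<noteq> 0" and "\<exists>y\<in>adjoin E (beta_seq j). y ^ p = w"
  then obtain y where y: "y \<in> adjoin E (beta_seq j)" "y ^ p = w" by blast
  then obtain c k where ck: "c \<in> E" "y = c * beta_seq j ^ k"
    using adjoin_pth_root w KE by blast
  have "w = c ^ p * (beta_seq j ^ p) ^ k"
    using y(2) ck(2) by (simp add: power_mult_distrib power_mult[symmetric] mult.commute[of k p])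
  then have cp: "c ^ p = w / gamma_seq j ^ k" using beta_seq_power gamma_seq_nonzero by (simp add: field_simps)
  have "w / gamma_seq j ^ k \<in> K"
    using w gamma_seq_K subfield_divide[OF subfield_K] subfield_power[OF subfield_K] by blast
  moreover have "w / gamma_seq j ^ k \<noteq> 0" using w gamma_seq_nonzero by simp
  ultimately obtain d m where dm: "d \<in> K" "d \<noteq> 0"
      "w / gamma_seq j ^ k = d ^ p * (\<Prod>l\<in>{Suc j..<i}. gamma_seq l ^ m l)"
    using radicals_fromD[OF rad _ _ ck(1) cp] by blast
  have "(\<Prod>l\<in>{j..<i}. gamma_seq l ^ (m(j := k)) l) = gamma_seq j ^ k * (\<Prod>l\<in>{Suc j..<i}. gamma_seq l ^ m l)"
  proof -
    have "{j..<i} = insert j {Suc j..<i}" using j by auto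
    then show ?thesis by (simp add: prod.insert)
  qed
  then have "w = d ^ p * (\<Prod>l\<in>{j..<i}. gamma_seq l ^ (m(j := k)) l)"
    using dm(3) gamma_seq_nonzero by (simp add: field_simps)
  then show "\<exists>d\<in>K. d \<noteq> 0 \<and> (\<exists>m. w = d ^ p * (\<Prod>l\<in>{j..<i}. gamma_seq l ^ m l))"
    using dm by blast
qed

definition tower_inv :: "nat \<Rightarrow> bool" where
  "tower_inv t \<longleftrightarrow> is_subfield (tower t) \<and> K \<subseteq> tower t
     \<and> tower t = field_gen (K \<union> beta_seq ` {i - t..<i}) \<and> radicals_from (i - t) (tower t)"

lemma kummer_step_tower:
  assumes I: "tower_inv t" and t: "t < i"
  shows "kummer_step p \<xi> (tower t) (gamma_seq (i - 1 - t)) (beta_seq (i - 1 - t))"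
proof -
  have sf: "is_subfield (tower t)" and KE: "K \<subseteq> tower t" using I unfolding tower_inv_def by auto
  have "radicals_from (i - t) (tower t)" using I unfolding tower_inv_def by blast
  moreover have "i - t = Suc (i - 1 - t)" using t by simp
  ultimately have rad: "radicals_from (Suc (i - 1 - t)) (tower t)" by simp
  have "\<not> (\<exists>y\<in>tower t. y ^ p = gamma_seq (i - 1 - t))"
  proof
    assume "\<exists>y\<in>tower t. y ^ p = gamma_seq (i - 1 - t)"
    then obtain y where "y \<in> tower t" "y ^ p = gamma_seq (i - 1 - t)" by blast
    then obtain d m where "d \<in> K" "d \<noteq> 0"
        "gamma_seq (i - 1 - t) = d ^ p * (\<Prod>l\<in>{Suc (i - 1 - t)..<i}. gamma_seq l ^ m l)"
      using radicals_fromD[OF rad gamma_seq_K gamma_seq_nonzero] by blast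
    then show False using gamma_seq_independent[of "i - 1 - t"] t by auto
  qed
  then show ?thesis
    by unfold_locales (use pp xp x1 sf KE xi_in_K gamma_seq_K beta_seq_power in auto)
qed

lemma tower_inv_holds: "t \<le> i \<Longrightarrow> tower_inv t"
proof (induction t)
  case 0
  have "radicals_from i K"
    unfolding radicals_from_def
  proof (intro ballI impI)
    fix w assume "w \<in> K" "w \<noteq> 0" "\<exists>y\<in>K. y ^ p = w"
    then obtain y where "y \<in> K" "y \<noteq> 0" "w = y ^ p" by auto
    then show "\<exists>d\<in>K. d \<noteq> 0 \<and> (\<exists>m. w = d ^ p * (\<Prod>l\<in>{i..<i}. gamma_seq l ^ m l))" by auto
  qed
  then show ?case unfolding tower_inv_def using field_gen_eq_subfield[OF subfield_K] subfield_K by simp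
next
  case (Suc t)
  then have I: "tower_inv t" and t: "t < i" by auto
  define j where "j = i - 1 - t"
  have step: "kummer_step p \<xi> (tower t) (gamma_seq j) (beta_seq j)"
    using kummer_step_tower[OF I t] unfolding j_def .
  interpret ks: kummer_step p \<xi> "tower t" "gamma_seq j" "beta_seq j" by (rule step)
  have tS: "tower (Suc t) = adjoin (tower t) (beta_seq j)" unfolding j_def by simp
  have ij: "i - t = Suc j" "i - Suc t = j" using t unfolding j_def by auto
  have KE: "K \<subseteq> tower t" and fgt: "tower t = field_gen (K \<union> beta_seq ` {Suc j..<i})"
    and radt: "radicals_from (Suc j) (tower t)"
    using I[unfolded tower_inv_def ij(1)] by blast+
  have "tower (Suc t) = field_gen (tower t \<union> {beta_seq j})" unfolding tS by (rule ks.adjoin_eq_field_gen)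
  also have "\<dots> = field_gen (field_gen (K \<union> beta_seq ` {Suc j..<i}) \<union> {beta_seq j})"
    by (subst fgt) (rule refl)
  also have "\<dots> = field_gen (K \<union> beta_seq ` {j..<i})"
  proof -
    have "{j..<i} = insert j {Suc j..<i}" using t unfolding j_def by auto
    then show ?thesis unfolding field_gen_Un_field_gen by (intro arg_cong[where f = field_gen]) auto
  qed
  finally have fg: "tower (Suc t) = field_gen (K \<union> beta_seq ` {j..<i})" .
  have rad: "radicals_from j (tower (Suc t))"
    unfolding tS by (rule radicals_from_adjoin[OF step KE radt]) (use t j_def in simp)
  show ?case
    unfolding tower_inv_def ij(2)
  proof (intro conjI)
    show "is_subfield (tower (Suc t))" unfolding tS by (rule ks.subfield_adjoin)
    show "K \<subseteq> tower (Suc t)" unfolding tS using KE ks.E_subset_adjoin by blast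
  qed (fact fg rad)+
qed

definition L :: "'a set" where "L = tower i"

lemma subfield_L: "is_subfield L" and K_subset_L: "K \<subseteq> L" and L_eq_field_gen: "L = field_gen (K \<union> beta_seq ` {..<i})"
  using tower_inv_holds[of i] unfolding tower_inv_def L_def by (auto simp: atLeast0LessThan)

lemma beta_seq_L: "beta_seq l \<in> L"
proof (cases "l < i")
  case True
  then have "beta_seq l \<in> K \<union> beta_seq ` {..<i}" by auto
  then show ?thesis using L_eq_field_gen field_gen_subset[of "K \<union> beta_seq ` {..<i}"] by auto
next
  case False then show ?thesis using beta_seq_K K_subset_L by auto
qed

lemma xi_in_L: "\<xi> \<in> L" using K_subset_L xi_in_K by auto


abbreviation Ms :: "'a set" where "Ms \<equiv> Mset p K \<sigma> \<gamma>"

lemma sigma_pow_gamma_K: "(\<sigma> ^^ k) \<gamma> \<in> K" using sigma_pow_K gK by blast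
lemma sigma_pow_gamma_nonzero: "(\<sigma> ^^ k) \<gamma> \<noteq> 0"
  using field_hom_on_eq_0_iff[OF subfield_K field_hom_on_sigma_pow gK] g0 by blast

lemma Mset_intro: "b \<in> K \<Longrightarrow> b \<noteq> 0 \<Longrightarrow> (\<Prod>k<p. ((\<sigma> ^^ k) \<gamma>) ^ n k) * b ^ p \<in> Ms"
  unfolding Mset_def by blast

lemma MsetE:
  assumes "x \<in> Ms"
  obtains n b where "b \<in> K" "b \<noteq> 0" "x = (\<Prod>k<p. ((\<sigma> ^^ k) \<gamma>) ^ n k) * b ^ p"
  using assms unfolding Mset_def by blast

lemma Mset_K: "x \<in> Ms \<Longrightarrow> x \<in> K \<and> x \<noteq> 0"
proof -
  assume "x \<in> Ms"
  then obtain n b where b: "b \<in> K" "b \<noteq> 0" and x: "x = (\<Prod>k<p. ((\<sigma> ^^ k) \<gamma>) ^ n k) * b ^ p"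
    by (rule MsetE)
  have "(\<Prod>k<p. ((\<sigma> ^^ k) \<gamma>) ^ n k) \<in> K"
    by (intro subfield_prod[OF subfield_K] subfield_power[OF subfield_K] sigma_pow_gamma_K)
  then have "x \<in> K" unfolding x using subfield_mult[OF subfield_K] subfield_power[OF subfield_K b(1)] by blast
  moreover have "(\<Prod>k<p. ((\<sigma> ^^ k) \<gamma>) ^ n k) \<noteq> 0" using sigma_pow_gamma_nonzero by simp
  then have "x \<noteq> 0" unfolding x using b(2) by simp
  ultimately show ?thesis by simp
qed

lemma gamma_in_Mset: "\<gamma> \<in> Ms"
proof -
  obtain m where m: "p = Suc m" using p_gt_0 by (cases p) auto
  have "(\<Prod>k<p. ((\<sigma> ^^ k) \<gamma>) ^ (if k = 0 then 1 else 0)) = \<gamma>"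
    unfolding m by (subst prod.lessThan_Suc_shift) simp
  then show ?thesis using Mset_intro[OF subfield_1[OF subfield_K], of "\<lambda>k. if k = 0 then 1 else 0"] by simp
qed

lemma Mset_mult: "x \<in> Ms \<Longrightarrow> y \<in> Ms \<Longrightarrow> x * y \<in> Ms"
proof -
  assume x: "x \<in> Ms" and y: "y \<in> Ms"
  obtain n1 b1 where 1: "b1 \<in> K" "b1 \<noteq> 0" "x = (\<Prod>k<p. ((\<sigma> ^^ k) \<gamma>) ^ n1 k) * b1 ^ p"
    using x by (rule MsetE)
  obtain n2 b2 where 2: "b2 \<in> K" "b2 \<noteq> 0" "y = (\<Prod>k<p. ((\<sigma> ^^ k) \<gamma>) ^ n2 k) * b2 ^ p"
    using y by (rule MsetE)
  have "x * y = (\<Prod>k<p. ((\<sigma> ^^ k) \<gamma>) ^ (n1 k + n2 k)) * (b1 * b2) ^ p"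
    unfolding 1 2 by (simp add: power_add prod.distrib power_mult_distrib mult_ac)
  then show ?thesis using Mset_intro[of "b1 * b2"] 1 2 subfield_mult[OF subfield_K] by simp
qed

lemma Mset_mult_pth_power: "x \<in> Ms \<Longrightarrow> b \<in> K \<Longrightarrow> b \<noteq> 0 \<Longrightarrow> x * b ^ p \<in> Ms"
proof -
  assume x: "x \<in> Ms" and b: "b \<in> K" "b \<noteq> 0"
  obtain n b1 where 1: "b1 \<in> K" "b1 \<noteq> 0" "x = (\<Prod>k<p. ((\<sigma> ^^ k) \<gamma>) ^ n k) * b1 ^ p"
    using x by (rule MsetE)
  have eq: "x * b ^ p = (\<Prod>k<p. ((\<sigma> ^^ k) \<gamma>) ^ n k) * (b1 * b) ^ p"
    unfolding 1 by (simp add: power_mult_distrib mult_ac)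
  have "(\<Prod>k<p. ((\<sigma> ^^ k) \<gamma>) ^ n k) * (b1 * b) ^ p \<in> Ms"
    by (rule Mset_intro) (use subfield_mult[OF subfield_K 1(1) b(1)] 1(2) b(2) in auto)
  then show ?thesis unfolding eq .
qed

lemma Mset_sigma: "x \<in> Ms \<Longrightarrow> \<sigma> x \<in> Ms"
proof -
  assume "x \<in> Ms"
  then obtain n b where b: "b \<in> K" "b \<noteq> 0" and x: "x = (\<Prod>k<p. ((\<sigma> ^^ k) \<gamma>) ^ n k) * b ^ p"
    by (rule MsetE)
  obtain m where m: "p = Suc m" using p_gt_0 by (cases p) auto
  have "\<sigma> x = (\<Prod>k<p. (\<sigma> ((\<sigma> ^^ k) \<gamma>)) ^ n k) * (\<sigma> b) ^ p"
    unfolding x using b sigma_pow_gamma_K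
    by (simp add: field_hom_on_mult[OF subfield_K field_hom_on_sigma] field_hom_on_prod[OF subfield_K field_hom_on_sigma] field_hom_on_power[OF subfield_K field_hom_on_sigma]
        subfield_prod[OF subfield_K] subfield_power[OF subfield_K])
  also have "(\<Prod>k<p. (\<sigma> ((\<sigma> ^^ k) \<gamma>)) ^ n k) = (\<Prod>k<p. ((\<sigma> ^^ k) \<gamma>) ^ (if k = 0 then n m else n (k - 1)))"
  proof -
    have "(\<Prod>k<p. (\<sigma> ((\<sigma> ^^ k) \<gamma>)) ^ n k) = (\<Prod>k<m. ((\<sigma> ^^ Suc k) \<gamma>) ^ n k) * ((\<sigma> ^^ p) \<gamma>) ^ n m"
      unfolding m by (simp add: prod.lessThan_Suc)
    also have "(\<sigma> ^^ p) \<gamma> = \<gamma>" using sigma_pow_p gK by simp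
    also have "(\<Prod>k<m. ((\<sigma> ^^ Suc k) \<gamma>) ^ n k) * \<gamma> ^ n m
        = (\<Prod>k<Suc m. ((\<sigma> ^^ k) \<gamma>) ^ (if k = 0 then n m else n (k - 1)))"
      by (subst prod.lessThan_Suc_shift) (simp add: mult.commute)
    finally show ?thesis unfolding m .
  qed
  finally show ?thesis
    using Mset_intro[of "\<sigma> b"] sigma_K[OF b(1)] field_hom_on_eq_0_iff[OF subfield_K field_hom_on_sigma b(1)] b(2) by simp
qed

lemma Mset_sigma_pow: "x \<in> Ms \<Longrightarrow> (\<sigma> ^^ n) x \<in> Ms"
  by (induction n) (auto intro: Mset_sigma)

lemma Mset_power: "x \<in> Ms \<Longrightarrow> x ^ Suc n \<in> Ms"
  by (induction n) (auto intro: Mset_mult)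

lemma Mset_inverse: "x \<in> Ms \<Longrightarrow> inverse x \<in> Ms"
proof -
  assume x: "x \<in> Ms"
  obtain m where m: "p = Suc (Suc m)" using p_gt_1 by (cases p; cases "p - 1") auto
  have xK: "x \<in> K" "x \<noteq> 0" using Mset_K x by auto
  have e: "inverse x = x ^ Suc m * (inverse x) ^ p"
    using xK(2) unfolding m by (simp add: field_simps)
  have "x ^ Suc m * (inverse x) ^ p \<in> Ms"
    by (rule Mset_mult_pth_power[OF Mset_power[OF x] subfield_inverse[OF subfield_K xK(1)]]) (simp add: xK(2))
  then show ?thesis by (simp only: e[symmetric])
qed

lemma Mset_rho_inv: "x \<in> Ms \<Longrightarrow> rho_inv x \<in> Ms"
  unfolding rho_inv_def sig_inv_def divide_inverse by (intro Mset_mult Mset_sigma_pow Mset_inverse)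

lemma gamma_seq_in_Mset: "gamma_seq l \<in> Ms"
  by (induction l) (auto simp: gamma_seq_def gamma_in_Mset Mset_rho_inv)

lemma p_minus_1_squared: "(p - 1) * (p - 1) = p * (p - 2) + 1"
  using p_gt_1 by (cases p; cases "p - 1") (auto simp: algebra_simps)

lemma sigma_pow_eq_sig_inv_pow: "k < p \<Longrightarrow> (\<sigma> ^^ k) \<gamma> = (sig_inv ^^ ((p - 1) * k)) \<gamma>"
proof -
  assume k: "k < p"
  have "(sig_inv ^^ ((p - 1) * k)) \<gamma> = (\<sigma> ^^ ((p - 1) * ((p - 1) * k))) \<gamma>" unfolding sig_inv_pow ..
  also have "\<dots> = (\<sigma> ^^ (((p - 1) * ((p - 1) * k)) mod p)) \<gamma>" using sigma_pow_mod gK by blast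
  also have "((p - 1) * ((p - 1) * k)) mod p = k"
  proof -
    have "(p - 1) * ((p - 1) * k) = k + p * ((p - 2) * k)" using p_minus_1_squared
      by (metis (no_types, lifting) add.commute mult.assoc mult_Suc Suc_eq_plus1 add.left_commute)
    then show ?thesis using k by simp
  qed
  finally show ?thesis by simp
qed

lemma sigma_pow_gamma_pth_power_in_L:
  assumes k: "k < p"
  shows "\<exists>z\<in>L. (\<sigma> ^^ k) \<gamma> = z ^ p"
proof
  define z where "z = (\<Prod>l\<le>(p - 1) * k. beta_seq l ^ ((p - 1) * k choose l))"
  show "z \<in> L" unfolding z_def by (intro subfield_prod[OF subfield_L] subfield_power[OF subfield_L] beta_seq_L)
  have "(\<sigma> ^^ k) \<gamma> = (\<Prod>l\<le>(p - 1) * k. gamma_seq l ^ ((p - 1) * k choose l))"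
    unfolding sigma_pow_eq_sig_inv_pow[OF k] sig_inv_pow_binomial[OF gK g0] gamma_seq_def ..
  also have "\<dots> = z ^ p" unfolding z_def
    by (simp add: beta_seq_power[symmetric] prod_power_distrib power_mult[symmetric] mult.commute)
  finally show "(\<sigma> ^^ k) \<gamma> = z ^ p" .
qed

lemma pth_root_of_Mset_in_L:
  assumes y: "y ^ p \<in> Ms"
  shows "y \<in> L"
proof -
  obtain n b where b: "b \<in> K" "b \<noteq> 0" and yp: "y ^ p = (\<Prod>k<p. ((\<sigma> ^^ k) \<gamma>) ^ n k) * b ^ p"
    using y by (rule MsetE)
  obtain z where z: "\<And>k. k < p \<Longrightarrow> z k \<in> L \<and> (\<sigma> ^^ k) \<gamma> = z k ^ p"
    using sigma_pow_gamma_pth_power_in_L by metis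
  define Z where "Z = (\<Prod>k<p. z k ^ n k) * b"
  have ZL: "Z \<in> L"
    unfolding Z_def using z K_subset_L b(1)
    by (intro subfield_mult[OF subfield_L] subfield_prod[OF subfield_L] subfield_power[OF subfield_L]) auto
  have "y ^ p = (\<Prod>k<p. (z k ^ p) ^ n k) * b ^ p" unfolding yp using z by simp
  also have "\<dots> = Z ^ p" unfolding Z_def
    by (simp add: power_mult_distrib prod_power_distrib power_mult[symmetric] mult.commute)
  finally have yZ: "y ^ p = Z ^ p" .
  have "y ^ p \<noteq> 0" using y Mset_K by blast
  then have Z0: "Z \<noteq> 0" using yZ p_gt_0 by (auto simp: zero_power)
  then have "(y / Z) ^ p = 1" using yZ by (simp add: power_divide)
  then obtain s where "y / Z = \<xi> ^ s" using root_of_unity_eq_prim_root_power[OF pp xp x1] by blast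
  then have "y = \<xi> ^ s * Z" using Z0 by (simp add: field_simps)
  then show "y \<in> L" using subfield_mult[OF subfield_L subfield_power[OF subfield_L xi_in_L] ZL] by simp
qed

lemma L_M_eq_L: "L_M p K \<sigma> \<gamma> = L"
proof
  show "L_M p K \<sigma> \<gamma> \<subseteq> L"
    unfolding L_M_def by (rule field_gen_minimal[OF subfield_L]) (use K_subset_L pth_root_of_Mset_in_L in auto)
  show "L \<subseteq> L_M p K \<sigma> \<gamma>"
    unfolding L_M_def L_eq_field_gen
    by (rule field_gen_mono) (use beta_seq_power gamma_seq_in_Mset in auto)
qed

abbreviation N :: 'a where "N \<equiv> norm_KF p \<sigma> \<gamma>"

lemma sigma_N: "\<sigma> N = N"
proof -
  obtain m where m: "p = Suc m" using p_gt_0 by (cases p) auto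
  have "\<sigma> N = (\<Prod>k<p. (\<sigma> ^^ Suc k) \<gamma>)"
    unfolding norm_KF_def using sigma_pow_gamma_K by (simp add: field_hom_on_prod[OF subfield_K field_hom_on_sigma])
  also have "\<dots> = (\<Prod>k<m. (\<sigma> ^^ Suc k) \<gamma>) * (\<sigma> ^^ p) \<gamma>" unfolding m
    by (rule prod.lessThan_Suc)
  also have "(\<sigma> ^^ p) \<gamma> = \<gamma>" using sigma_pow_p gK by simp
  also have "(\<Prod>k<m. (\<sigma> ^^ Suc k) \<gamma>) * \<gamma> = N"
    unfolding norm_KF_def m by (subst prod.lessThan_Suc_shift) (simp add: mult.commute)
  finally show ?thesis .
qed

lemma pth_N: assumes ip: "i < p" shows "pth N"
proof -
  define f where "f = (\<lambda>l. (rho ^^ l) \<gamma>)"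
  have "N = (\<Prod>k<p. \<Prod>l<p. f l ^ (k choose l))"
    unfolding norm_KF_def
  proof (intro prod.cong refl)
    fix k assume "k \<in> {..<p}"
    then have k: "k < p" by simp
    have "(\<sigma> ^^ k) \<gamma> = (\<Prod>l\<le>k. f l ^ (k choose l))" unfolding f_def
      by (rule sigma_pow_binomial[OF gK g0])
    also have "\<dots> = (\<Prod>l<p. f l ^ (k choose l))"
      by (rule prod.mono_neutral_left) (use k in \<open>auto simp: binomial_eq_0\<close>)
    finally show "(\<sigma> ^^ k) \<gamma> = (\<Prod>l<p. f l ^ (k choose l))" .
  qed
  also have "\<dots> = (\<Prod>l<p. \<Prod>k<p. f l ^ (k choose l))" by (rule prod.swap)
  also have "\<dots> = (\<Prod>l<p. f l ^ (p choose Suc l))"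
  proof (intro prod.cong refl)
    fix l
    have "(\<Sum>k<p. k choose l) = (\<Sum>k\<le>p - 1. k choose l)"
      using p_gt_0 by (intro sum.cong) auto
    also have "\<dots> = p choose Suc l" using sum_choose_upper[where n="p - 1" and m=l] p_gt_0 by simp
    finally show "(\<Prod>k<p. f l ^ (k choose l)) = f l ^ (p choose Suc l)"
      by (simp add: power_sum[symmetric])
  qed
  finally have N: "N = (\<Prod>l<p. f l ^ (p choose Suc l))" .
  have "pth (f l ^ (p choose Suc l))" if "l < p" for l
  proof (cases "Suc l < p")
    case True
    have "f l ^ (p choose Suc l) = (f l ^ ((p choose Suc l) div p)) ^ p"
      using prime_choose_eq[OF pp, of "Suc l"] True by (metis power_mult mult.commute zero_less_Suc)
    moreover have "f l \<in> K" "f l \<noteq> 0" unfolding f_def using rho_pow_K rho_pow_nonzero gK g0 by auto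
    ultimately show ?thesis using pth_powI subfield_power[OF subfield_K] by (metis power_not_zero)
  next
    case False
    then have "l = p - 1" using that by simp
    then have "pth (f l)" unfolding f_def using pth_rho_pow_ge ip by simp
    then show ?thesis using False that by (simp add: \<open>l = p - 1\<close>)
  qed
  then show ?thesis unfolding N by (intro pth_prod) auto
qed

lemma kummer_index_spec:
  assumes ip: "i < p"
  shows "kummer_index p \<xi> K \<sigma> \<gamma> < p \<and>
    (\<exists>\<delta>\<in>K. \<delta> \<noteq> 0 \<and> \<delta> ^ p = N \<and> \<sigma> \<delta> = \<xi> ^ kummer_index p \<xi> K \<sigma> \<gamma> * \<delta>)"
proof -
  define P where "P = (\<lambda>e. e < p \<and> (\<exists>\<delta>\<in>K. \<delta> \<noteq> 0 \<and> \<delta> ^ p = N \<and> \<sigma> \<delta> = \<xi> ^ e * \<delta>))"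
  obtain \<delta> where d: "\<delta> \<in> K" "\<delta> \<noteq> 0" "N = \<delta> ^ p"
    using pth_N[OF ip] unfolding pth_power_in_def by blast
  have "(\<sigma> \<delta>) ^ p = \<delta> ^ p"
    using field_hom_on_power[OF subfield_K field_hom_on_sigma d(1)] sigma_N d(3) by simp
  then have "(\<sigma> \<delta> / \<delta>) ^ p = 1" using d(2) by (simp add: power_divide)
  then obtain e where e: "e < p" "\<sigma> \<delta> / \<delta> = \<xi> ^ e"
    using root_of_unity_eq_prim_root_power[OF pp xp x1] by blast
  have Pe: "P e" unfolding P_def using e d by (intro conjI bexI[of _ \<delta>]) (auto simp: field_simps)
  have uniq: "e2 = e" if "P e2" for e2
  proof -
    have "e2 < p \<and> (\<exists>\<delta>\<in>K. \<delta> \<noteq> 0 \<and> \<delta> ^ p = N \<and> \<sigma> \<delta> = \<xi> ^ e2 * \<delta>)"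
      using that by (simp add: P_def)
    then obtain \<delta>2 where d2: "\<delta>2 \<in> K" "\<delta>2 \<noteq> 0" "\<delta>2 ^ p = N" "\<sigma> \<delta>2 = \<xi> ^ e2 * \<delta>2" and e2: "e2 < p"
      by blast
    have "(\<delta>2 / \<delta>) ^ p = 1" using d2(3) d(3) d(2) by (simp add: power_divide)
    then obtain s where s: "\<delta>2 / \<delta> = \<xi> ^ s" using root_of_unity_eq_prim_root_power[OF pp xp x1] by blast
    then have ds: "\<delta>2 = \<xi> ^ s * \<delta>" using d(2) by (simp add: field_simps)
    have "\<sigma> \<delta>2 = \<xi> ^ s * \<sigma> \<delta>"
      unfolding ds using field_hom_on_mult[OF subfield_K field_hom_on_sigma subfield_power[OF subfield_K xi_in_K] d(1)] sigma_F[OF subfield_power[OF sfF xiF]] by simp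
    have sd: "\<sigma> \<delta> = \<xi> ^ e * \<delta>" using e(2) d(2) by (simp add: field_simps)
    have "\<sigma> \<delta>2 = \<xi> ^ s * (\<xi> ^ e * \<delta>)"
      using \<open>\<sigma> \<delta>2 = \<xi> ^ s * \<sigma> \<delta>\<close> sd by simp
    then have "\<xi> ^ e2 * \<delta>2 = \<xi> ^ s * (\<xi> ^ e * \<delta>)" using d2(4) by metis
    then have "\<xi> ^ e2 * (\<xi> ^ s * \<delta>) = \<xi> ^ s * (\<xi> ^ e * \<delta>)" unfolding ds .
    then have "\<xi> ^ e2 * (\<xi> ^ s * \<delta>) = \<xi> ^ e * (\<xi> ^ s * \<delta>)" by (simp only: mult.left_commute)
    moreover have "\<xi> ^ s * \<delta> \<noteq> 0" using xi_nonzero d(2) by simp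
    ultimately have "\<xi> ^ e2 = \<xi> ^ e" by (metis mult_cancel_right)
    then show ?thesis using prim_root_power_inj[OF pp xp x1 e2 e(1)] by simp
  qed
  have "kummer_index p \<xi> K \<sigma> \<gamma> = e"
    unfolding kummer_index_def P_def[symmetric] using Pe uniq by (rule the_equality)
  then show ?thesis using Pe unfolding P_def by simp
qed

lemma in_J_p_minus_1: "i < p \<Longrightarrow> in_J p K \<sigma> (p - 1) \<gamma>"
  unfolding in_J_def rho_iter_eq using pth_rho_pow_ge by simp


section \<open>The Galois group of L over F\<close>

abbreviation GL :: "('a \<Rightarrow> 'a) set" where "GL \<equiv> Gal L F"

lemma F_subset_L: "F \<subseteq> L" using F_subset_K K_subset_L by auto

lemma gal_out: "g \<in> GL \<Longrightarrow> x \<notin> L \<Longrightarrow> g x = x" unfolding Gal_def by simp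
lemma gal_F: "g \<in> GL \<Longrightarrow> x \<in> F \<Longrightarrow> g x = x" unfolding Gal_def is_aut_over_def by simp
lemma gal_bij_L: "g \<in> GL \<Longrightarrow> bij_betw g L L" unfolding Gal_def is_aut_over_def by simp
lemma gal_L: "g \<in> GL \<Longrightarrow> x \<in> L \<Longrightarrow> g x \<in> L" using gal_bij_L by (meson bij_betwE)
lemma field_hom_on_Gal: "g \<in> GL \<Longrightarrow> field_hom_on L g"
  unfolding field_hom_on_def using gal_F[of g 1] subfield_1[OF sfF] unfolding Gal_def is_aut_over_def by auto

lemma gal_inj: "g \<in> GL \<Longrightarrow> inj g"
proof (rule injI)
  fix x y assume g: "g \<in> GL" and e: "g x = g y"
  have iL: "inj_on g L" using gal_bij_L[OF g] bij_betw_def by blast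
  show "x = y"
  proof (cases "x \<in> L"; cases "y \<in> L")
    assume "x \<in> L" "y \<in> L" then show ?thesis using inj_onD[OF iL e] by blast
  next
    assume "x \<in> L" "y \<notin> L" then show ?thesis using e gal_L[OF g] gal_out[OF g] by metis
  next
    assume "x \<notin> L" "y \<in> L" then show ?thesis using e gal_L[OF g] gal_out[OF g] by metis
  next
    assume "x \<notin> L" "y \<notin> L" then show ?thesis using e gal_out[OF g] by metis
  qed
qed

lemma gal_surj: "g \<in> GL \<Longrightarrow> surj g"
proof -
  assume g: "g \<in> GL"
  have "y \<in> range g" for y
  proof (cases "y \<in> L")
    case True
    then have "y \<in> g ` L" using gal_bij_L[OF g] unfolding bij_betw_def by simp
    then show ?thesis by auto
  next
    case False
    then have "g y = y" using gal_out[OF g] by simp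
    then show ?thesis by (metis rangeI)
  qed
  then show ?thesis by auto
qed

lemma gal_comp: "g \<in> GL \<Longrightarrow> h \<in> GL \<Longrightarrow> g \<circ> h \<in> GL"
proof -
  assume g: "g \<in> GL" and h: "h \<in> GL"
  have "bij_betw (g \<circ> h) L L" using gal_bij_L[OF g] gal_bij_L[OF h] by (rule bij_betw_trans[rotated])
  moreover have "\<forall>x\<in>L. \<forall>y\<in>L. (g \<circ> h) (x + y) = (g \<circ> h) x + (g \<circ> h) y \<and> (g \<circ> h) (x * y) = (g \<circ> h) x * (g \<circ> h) y"
    using field_hom_on_add[OF subfield_L field_hom_on_Gal[OF g]] field_hom_on_add[OF subfield_L field_hom_on_Gal[OF h]]
      field_hom_on_mult[OF subfield_L field_hom_on_Gal[OF g]] field_hom_on_mult[OF subfield_L field_hom_on_Gal[OF h]] gal_L[OF h] by simp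
  moreover have "\<forall>x\<in>F. (g \<circ> h) x = x" using gal_F[OF g] gal_F[OF h] by simp
  moreover have "\<forall>x. x \<notin> L \<longrightarrow> (g \<circ> h) x = x" using gal_out[OF g] gal_out[OF h] by simp
  ultimately show ?thesis unfolding Gal_def is_aut_over_def by simp
qed

lemma gal_id: "id \<in> GL"
  unfolding Gal_def is_aut_over_def by (simp add: bij_betw_id)

lemma gal_pow: "g \<in> GL \<Longrightarrow> g ^^ n \<in> GL"
  by (induction n) (auto simp: gal_id gal_comp)

lemma gal_eqI:
  assumes g: "g \<in> GL" and h: "h \<in> GL" and K: "\<And>x. x \<in> K \<Longrightarrow> g x = h x"
    and B: "\<And>j. j < i \<Longrightarrow> g (beta_seq j) = h (beta_seq j)"
  shows "g = h"
proof
  fix x show "g x = h x"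
  proof (cases "x \<in> L")
    case True
    have "\<And>y. y \<in> field_gen (K \<union> beta_seq ` {..<i}) \<Longrightarrow> g y = h y"
      by (rule field_hom_on_eq_on_field_gen[OF subfield_L field_hom_on_Gal[OF g] field_hom_on_Gal[OF h]]) (use K_subset_L beta_seq_L K B in auto)
    then show ?thesis using True L_eq_field_gen by simp
  next
    case False then show ?thesis using gal_out[OF g False] gal_out[OF h False] by simp
  qed
qed

lemma gal_cancel_right:
  assumes g: "g \<in> GL" and e: "f1 \<circ> g = f2 \<circ> g" shows "f1 = f2"
proof
  fix x
  obtain y where "x = g y" using gal_surj[OF g] by (metis surjD)
  then show "f1 x = f2 x" using fun_cong[OF e, of y] by simp
qed

lemma gal_cancel_left:
  assumes g: "g \<in> GL" and e: "g \<circ> f1 = g \<circ> f2" shows "f1 = f2"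
proof
  fix x
  have "g (f1 x) = g (f2 x)" using fun_cong[OF e, of x] by simp
  then show "f1 x = f2 x" using gal_inj[OF g] by (meson injD)
qed

lemma gal_restrict:
  assumes g: "g \<in> GL"
  shows "\<exists>k<p. \<forall>x\<in>K. g x = (\<sigma> ^^ k) x"
proof -
  have aL: "\<alpha> \<in> L" using alpha_in_K K_subset_L by auto
  have "g (\<alpha> ^ p) = g \<alpha> ^ p" by (rule field_hom_on_power[OF subfield_L field_hom_on_Gal[OF g] aL])
  then have "g \<alpha> ^ p = g a" using aa by simp
  also have "\<dots> = a" using gal_F[OF g aF] .
  finally have "(g \<alpha> / \<alpha>) ^ p = 1" using aa alpha_nonzero a0 by (simp add: power_divide)
  then obtain k where k: "k < p" "g \<alpha> / \<alpha> = \<xi> ^ k"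
    using root_of_unity_eq_prim_root_power[OF pp xp x1] by blast
  then have ga: "g \<alpha> = \<xi> ^ k * \<alpha>" using alpha_nonzero by (simp add: field_simps)
  have fK: "field_hom_on K g" using field_hom_on_Gal[OF g] K_subset_L unfolding field_hom_on_def by (auto simp: subset_iff)
  have "\<And>y. y \<in> field_gen (F \<union> {\<alpha>}) \<Longrightarrow> g y = (\<sigma> ^^ k) y"
    by (rule field_hom_on_eq_on_field_gen[OF subfield_K fK field_hom_on_sigma_pow]) (use F_subset_K alpha_in_K gal_F[OF g] sigma_pow_F sigma_pow_alpha ga in auto)
  then show ?thesis using k K_def by auto
qed

lemma tower_hom_extension:
  assumes bL: "\<And>j. j < i \<Longrightarrow> b' j \<in> L"
    and bp: "\<And>j. j < i \<Longrightarrow> b' j ^ p = (\<sigma> ^^ k) (gamma_seq j)"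
  shows "t \<le> i \<Longrightarrow> \<exists>\<tau>. field_hom_on (tower t) \<tau> \<and> (\<forall>x\<in>tower t. \<tau> x \<in> L)
    \<and> (\<forall>x\<in>K. \<tau> x = (\<sigma> ^^ k) x) \<and> (\<forall>l\<in>{i - t..<i}. \<tau> (beta_seq l) = b' l)"
proof (induction t)
  case 0
  have "field_hom_on K (\<sigma> ^^ k)" by (rule field_hom_on_sigma_pow)
  moreover have "\<forall>x\<in>K. (\<sigma> ^^ k) x \<in> L" using sigma_pow_K K_subset_L by auto
  ultimately show ?case by (intro exI[of _ "\<sigma> ^^ k"]) auto
next
  case (Suc t)
  then have t: "t < i" and I: "tower_inv t" using tower_inv_holds by auto
  obtain \<tau> where \<tau>: "field_hom_on (tower t) \<tau>" "\<forall>x\<in>tower t. \<tau> x \<in> L" "\<forall>x\<in>K. \<tau> x = (\<sigma> ^^ k) x"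
    "\<forall>l\<in>{i - t..<i}. \<tau> (beta_seq l) = b' l" using Suc by auto
  define j where "j = i - 1 - t"
  interpret ks: kummer_step p \<xi> "tower t" "gamma_seq j" "beta_seq j" using kummer_step_tower[OF I t] unfolding j_def .
  have KE: "K \<subseteq> tower t" and sfE: "is_subfield (tower t)" and fgE: "tower t = field_gen (K \<union> beta_seq ` {i - t..<i})"
    using I unfolding tower_inv_def by auto
  have jt: "j < i" using t unfolding j_def by simp
  have b'p: "b' j ^ p = \<tau> (gamma_seq j)" using bp[OF jt] \<tau>(3) gamma_seq_K by simp
  define \<tau>' where "\<tau>' = ks.extend_hom \<tau> (b' j)"
  have EtS: "tower (Suc t) = adjoin (tower t) (beta_seq j)" unfolding j_def by simp
  have f': "field_hom_on (tower (Suc t)) \<tau>'" unfolding EtS \<tau>'_def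
    by (rule ks.field_hom_on_extend_hom[OF \<tau>(1) b'p])
  have into: "\<forall>x\<in>tower (Suc t). \<tau>' x \<in> L"
    unfolding EtS \<tau>'_def using ks.extend_hom_into[OF \<tau>(1) b'p subfield_L _ bL[OF jt]] \<tau>(2) by auto
  have onE: "\<tau>' x = \<tau> x" if "x \<in> tower t" for x
    unfolding \<tau>'_def using ks.extend_hom_on_E[OF \<tau>(1) b'p that] .
  have onK: "\<forall>x\<in>K. \<tau>' x = (\<sigma> ^^ k) x" using onE KE \<tau>(3) by auto
  have btE: "beta_seq l \<in> tower t" if "l \<in> {i - t..<i}" for l
    using that fgE field_gen_subset[of "K \<union> beta_seq ` {i - t..<i}"] by auto
  have onB: "\<forall>l\<in>{i - Suc t..<i}. \<tau>' (beta_seq l) = b' l"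
  proof
    fix l assume l: "l \<in> {i - Suc t..<i}"
    show "\<tau>' (beta_seq l) = b' l"
    proof (cases "l = j")
      case True then show ?thesis unfolding \<tau>'_def using ks.extend_hom_beta[OF \<tau>(1) b'p] by simp
    next
      case False
      then have "l \<in> {i - t..<i}" using l t unfolding j_def by auto
      then show ?thesis using onE btE \<tau>(4) by auto
    qed
  qed
  show ?case using f' into onK onB by blast
qed

lemma field_hom_on_L_image:
  assumes \<tau>: "field_hom_on L \<tau>" "\<forall>x\<in>L. \<tau> x \<in> L" "\<forall>x\<in>K. \<tau> x = (\<sigma> ^^ k) x"
      "\<forall>l<i. \<tau> (beta_seq l) = b' l"
    and bs: "\<And>j. j < i \<Longrightarrow> beta_seq j \<in> field_gen (K \<union> b' ` {..<i})"
  shows "\<tau> ` L = L"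
proof
  show "\<tau> ` L \<subseteq> L" using \<tau>(2) by auto
  have sfI: "is_subfield (\<tau> ` L)" by (rule subfield_image_field_hom_on[OF subfield_L \<tau>(1)])
  have "K \<subseteq> \<tau> ` L"
  proof
    fix y assume "y \<in> K"
    then obtain x where "x \<in> K" "(\<sigma> ^^ k) x = y" using sigma_pow_surj by blast
    then show "y \<in> \<tau> ` L" using \<tau>(3) K_subset_L by force
  qed
  moreover have "b' ` {..<i} \<subseteq> \<tau> ` L"
  proof
    fix y assume "y \<in> b' ` {..<i}"
    then obtain l where "l < i" "y = b' l" by auto
    then have "y = \<tau> (beta_seq l)" using \<tau>(4) by simp
    then show "y \<in> \<tau> ` L" using beta_seq_L by blast
  qed
  ultimately have "field_gen (K \<union> b' ` {..<i}) \<subseteq> \<tau> ` L" using field_gen_minimal[OF sfI] by simp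
  then have "beta_seq ` {..<i} \<subseteq> \<tau> ` L" using bs by auto
  then have "field_gen (K \<union> beta_seq ` {..<i}) \<subseteq> \<tau> ` L"
    using \<open>K \<subseteq> \<tau> ` L\<close> by (intro field_gen_minimal[OF sfI]) auto
  then show "L \<subseteq> \<tau> ` L" by (simp only: L_eq_field_gen[symmetric])
qed

lemma Gal_extend:
  assumes bL: "\<And>j. j < i \<Longrightarrow> b' j \<in> L"
    and bp: "\<And>j. j < i \<Longrightarrow> b' j ^ p = (\<sigma> ^^ k) (gamma_seq j)"
    and bs: "\<And>j. j < i \<Longrightarrow> beta_seq j \<in> field_gen (K \<union> b' ` {..<i})"
  shows "\<exists>g\<in>GL. (\<forall>x\<in>K. g x = (\<sigma> ^^ k) x) \<and> (\<forall>j<i. g (beta_seq j) = b' j)"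
proof -
  obtain \<tau> where \<tau>: "field_hom_on L \<tau>" "\<forall>x\<in>L. \<tau> x \<in> L" "\<forall>x\<in>K. \<tau> x = (\<sigma> ^^ k) x"
      "\<forall>l<i. \<tau> (beta_seq l) = b' l"
    using tower_hom_extension[OF bL bp, of i] unfolding L_def by (auto simp: atLeast0LessThan)
  define g where "g = (\<lambda>x. if x \<in> L then \<tau> x else x)"
  have "bij_betw \<tau> L L"
    unfolding bij_betw_def using field_hom_on_inj[OF subfield_L \<tau>(1)] field_hom_on_L_image[OF \<tau> bs] by simp
  then have "bij_betw g L L" unfolding g_def by (rule bij_betw_cong[THEN iffD1, rotated]) simp
  moreover have "\<forall>x\<in>L. \<forall>y\<in>L. g (x + y) = g x + g y \<and> g (x * y) = g x * g y"
    unfolding g_def using field_hom_on_add[OF subfield_L \<tau>(1)] field_hom_on_mult[OF subfield_L \<tau>(1)]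
      subfield_add[OF subfield_L] subfield_mult[OF subfield_L] by simp
  moreover have "\<forall>x\<in>F. g x = x" unfolding g_def using \<tau>(3) F_subset_K F_subset_L sigma_pow_F by auto
  ultimately have "g \<in> GL" unfolding Gal_def is_aut_over_def g_def by simp
  moreover have "\<forall>x\<in>K. g x = (\<sigma> ^^ k) x" unfolding g_def using \<tau>(3) K_subset_L by auto
  moreover have "\<forall>j<i. g (beta_seq j) = b' j" unfolding g_def using \<tau>(4) beta_seq_L by auto
  ultimately show ?thesis by blast
qed

definition kernel_aut :: "(nat \<Rightarrow> nat) \<Rightarrow> 'a \<Rightarrow> 'a" where
  "kernel_aut v = (SOME g. g \<in> GL \<and> (\<forall>x\<in>K. g x = x) \<and> (\<forall>j<i. g (beta_seq j) = \<xi> ^ v j * beta_seq j))"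

lemma kernel_aut_exists: "\<exists>g. g \<in> GL \<and> (\<forall>x\<in>K. g x = x) \<and> (\<forall>j<i. g (beta_seq j) = \<xi> ^ v j * beta_seq j)"
proof -
  have "\<exists>g\<in>GL. (\<forall>x\<in>K. g x = (\<sigma> ^^ 0) x) \<and> (\<forall>j<i. g (beta_seq j) = \<xi> ^ v j * beta_seq j)"
  proof (rule Gal_extend)
    show "\<xi> ^ v j * beta_seq j \<in> L" for j
      using subfield_mult[OF subfield_L subfield_power[OF subfield_L xi_in_L] beta_seq_L] .
    show "(\<xi> ^ v j * beta_seq j) ^ p = (\<sigma> ^^ 0) (gamma_seq j)" for j
      using beta_seq_power xp by (simp add: power_mult_distrib power_mult[symmetric] mult.commute[of _ p] power_mult)
    show "beta_seq j \<in> field_gen (K \<union> (\<lambda>j. \<xi> ^ v j * beta_seq j) ` {..<i})" if "j < i" for j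
    proof -
      have "\<xi> ^ v j * beta_seq j \<in> field_gen (K \<union> (\<lambda>j. \<xi> ^ v j * beta_seq j) ` {..<i})"
        by (rule subsetD[OF field_gen_subset]) (use that in auto)
      moreover have "\<xi> ^ v j \<in> field_gen (K \<union> (\<lambda>j. \<xi> ^ v j * beta_seq j) ` {..<i})"
        by (rule subsetD[OF field_gen_subset]) (use subfield_power[OF subfield_K xi_in_K] in auto)
      ultimately have "\<xi> ^ v j * beta_seq j / \<xi> ^ v j \<in> field_gen (K \<union> (\<lambda>j. \<xi> ^ v j * beta_seq j) ` {..<i})"
        by (rule subfield_divide[OF field_gen_subfield])
      then show ?thesis using xi_nonzero by simp
    qed
  qed
  then show ?thesis by auto
qed

lemma kernel_aut: "kernel_aut v \<in> GL" "\<And>x. x \<in> K \<Longrightarrow> kernel_aut v x = x" "\<And>j. j < i \<Longrightarrow> kernel_aut v (beta_seq j) = \<xi> ^ v j * beta_seq j"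
  using someI_ex[OF kernel_aut_exists[of v]] unfolding kernel_aut_def[symmetric] by auto

lemma kernel_aut_unique: "g \<in> GL \<Longrightarrow> (\<And>x. x \<in> K \<Longrightarrow> g x = x) \<Longrightarrow> (\<And>j. j < i \<Longrightarrow> g (beta_seq j) = \<xi> ^ v j * beta_seq j) \<Longrightarrow> g = kernel_aut v"
  by (rule gal_eqI) (auto simp: kernel_aut)

lemma kernel_aut_comp: "kernel_aut v \<circ> kernel_aut w = kernel_aut (\<lambda>j. v j + w j)"
proof (rule kernel_aut_unique)
  show "kernel_aut v \<circ> kernel_aut w \<in> GL" by (intro gal_comp kernel_aut)
  show "\<And>x. x \<in> K \<Longrightarrow> (kernel_aut v \<circ> kernel_aut w) x = x" by (simp add: kernel_aut)
  fix j assume j: "j < i"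
  have "(kernel_aut v \<circ> kernel_aut w) (beta_seq j) = kernel_aut v (\<xi> ^ w j) * kernel_aut v (beta_seq j)"
    using kernel_aut(3)[OF j, of w] field_hom_on_mult[OF subfield_L field_hom_on_Gal[OF kernel_aut(1)] subfield_power[OF subfield_L xi_in_L] beta_seq_L] by simp
  also have "\<dots> = \<xi> ^ (v j + w j) * beta_seq j"
    using kernel_aut(2) kernel_aut(3)[OF j] subfield_power[OF subfield_K xi_in_K] by (simp add: power_add)
  finally show "(kernel_aut v \<circ> kernel_aut w) (beta_seq j) = \<xi> ^ (v j + w j) * beta_seq j" .
qed

lemma kernel_aut_cong: "(\<And>j. j < i \<Longrightarrow> v j mod p = w j mod p) \<Longrightarrow> kernel_aut v = kernel_aut w"
proof (rule kernel_aut_unique)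
  fix j assume "\<And>j. j < i \<Longrightarrow> v j mod p = w j mod p" "j < i"
  then show "kernel_aut v (beta_seq j) = \<xi> ^ w j * beta_seq j"
    using kernel_aut(3) prim_root_power_eq_iff[OF pp xp x1] by metis
qed (auto simp: kernel_aut)

lemma kernel_aut_eq_id: "(\<And>j. j < i \<Longrightarrow> v j mod p = 0) \<Longrightarrow> kernel_aut v = id"
proof -
  assume h: "\<And>j. j < i \<Longrightarrow> v j mod p = 0"
  have "id = kernel_aut v"
  proof (rule kernel_aut_unique[OF gal_id])
    show "\<And>x. x \<in> K \<Longrightarrow> id x = x" by simp
    fix j assume j: "j < i"
    have "\<xi> ^ v j = 1" using prim_root_power_mod[OF pp xp x1, of "v j"] h[OF j] by simp
    then show "id (beta_seq j) = \<xi> ^ v j * beta_seq j" by simp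
  qed
  then show ?thesis by simp
qed

lemma kernel_aut_eqD: "kernel_aut v = kernel_aut w \<Longrightarrow> j < i \<Longrightarrow> v j mod p = w j mod p"
proof -
  assume e: "kernel_aut v = kernel_aut w" and j: "j < i"
  have "\<xi> ^ v j * beta_seq j = \<xi> ^ w j * beta_seq j"
    using kernel_aut(3)[OF j, of v] kernel_aut(3)[OF j, of w] e by metis
  then have "\<xi> ^ v j = \<xi> ^ w j" using beta_seq_nonzero by (metis mult_cancel_right)
  then show ?thesis using prim_root_power_eq_iff[OF pp xp x1] by simp
qed

lemma kernel_eq_kernel_aut:
  assumes g: "g \<in> GL" and gK: "\<And>x. x \<in> K \<Longrightarrow> g x = x"
  shows "\<exists>v. g = kernel_aut v"
proof -
  have "\<exists>s. j < i \<longrightarrow> g (beta_seq j) = \<xi> ^ s * beta_seq j" for j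
  proof (cases "j < i")
    case True
    have "g (beta_seq j) ^ p = g (gamma_seq j)"
      using field_hom_on_power[OF subfield_L field_hom_on_Gal[OF g] beta_seq_L] beta_seq_power by metis
    also have "\<dots> = gamma_seq j" using gK gamma_seq_K by simp
    finally have "(g (beta_seq j) / beta_seq j) ^ p = 1" using beta_seq_power beta_seq_nonzero gamma_seq_nonzero
      by (simp add: power_divide)
    then obtain s where "g (beta_seq j) / beta_seq j = \<xi> ^ s" using root_of_unity_eq_prim_root_power[OF pp xp x1]
      by blast
    then show ?thesis using beta_seq_nonzero by (intro exI[of _ s]) (simp add: field_simps)
  qed simp
  then obtain v where v: "\<And>j. j < i \<Longrightarrow> g (beta_seq j) = \<xi> ^ v j * beta_seq j" by metis
  show ?thesis using kernel_aut_unique[OF g gK v] by blast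
qed

definition mu :: "'a \<Rightarrow> 'a" where
  "mu = (SOME g. g \<in> GL \<and> (\<forall>x\<in>K. g x = sig_inv x) \<and> (\<forall>j<i. g (beta_seq j) = beta_seq j * beta_seq (Suc j)))"

lemma beta_seq_in_field_gen_products:
  "j \<le> i \<Longrightarrow> beta_seq j \<in> field_gen (K \<union> (\<lambda>j. beta_seq j * beta_seq (Suc j)) ` {..<i})"
proof (induction "i - j" arbitrary: j)
  case 0
  then have "beta_seq j \<in> K" using beta_seq_K by simp
  then show ?case by (intro subsetD[OF field_gen_subset]) simp
next
  case (Suc d)
  define S where "S = field_gen (K \<union> (\<lambda>j. beta_seq j * beta_seq (Suc j)) ` {..<i})"
  have j: "j < i" using Suc by simp
  have "beta_seq (Suc j) \<in> S" unfolding S_def using Suc j by simp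
  moreover have "beta_seq j * beta_seq (Suc j) \<in> S" unfolding S_def
    by (intro subsetD[OF field_gen_subset]) (use j in simp)
  ultimately have "beta_seq j * beta_seq (Suc j) / beta_seq (Suc j) \<in> S"
    unfolding S_def by (intro subfield_divide[OF field_gen_subfield])
  then show ?case using beta_seq_nonzero unfolding S_def by simp
qed

lemma mu_exists:
  "\<exists>g. g \<in> GL \<and> (\<forall>x\<in>K. g x = sig_inv x) \<and> (\<forall>j<i. g (beta_seq j) = beta_seq j * beta_seq (Suc j))"
proof -
  have "\<exists>g\<in>GL. (\<forall>x\<in>K. g x = (\<sigma> ^^ (p - 1)) x) \<and> (\<forall>j<i. g (beta_seq j) = beta_seq j * beta_seq (Suc j))"
  proof (rule Gal_extend)
    show "beta_seq j * beta_seq (Suc j) \<in> L" for j by (rule subfield_mult[OF subfield_L beta_seq_L beta_seq_L])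
    have "(beta_seq j * beta_seq (Suc j)) ^ p = gamma_seq j * rho_inv (gamma_seq j)" for j
      by (simp add: power_mult_distrib beta_seq_power gamma_seq_Suc)
    then show "(beta_seq j * beta_seq (Suc j)) ^ p = (\<sigma> ^^ (p - 1)) (gamma_seq j)" for j
      unfolding rho_inv_def sig_inv_def using gamma_seq_nonzero by simp
    show "beta_seq j \<in> field_gen (K \<union> (\<lambda>j. beta_seq j * beta_seq (Suc j)) ` {..<i})" if "j < i" for j
      using beta_seq_in_field_gen_products that by simp
  qed
  then show ?thesis unfolding sig_inv_def by auto
qed

lemma mu: "mu \<in> GL" "\<And>x. x \<in> K \<Longrightarrow> mu x = sig_inv x" "\<And>j. j < i \<Longrightarrow> mu (beta_seq j) = beta_seq j * beta_seq (Suc j)"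
  using someI_ex[OF mu_exists] unfolding mu_def[symmetric] by auto

lemma mu_beta_seq: "mu (beta_seq l) = beta_seq l * beta_seq (Suc l)"
proof (cases "l < i")
  case True then show ?thesis using mu(3) by simp
next
  case False
  then have l: "i \<le> l" by simp
  have "mu (beta_seq l) = sig_inv (beta_seq l)" using mu(2) beta_seq_K[OF l] by simp
  also have "\<dots> = beta_seq l * rho_inv (beta_seq l)" unfolding rho_inv_def using beta_seq_nonzero by simp
  finally show ?thesis using rho_inv_beta_seq[OF l] by simp
qed

definition shift_add :: "(nat \<Rightarrow> nat) \<Rightarrow> nat \<Rightarrow> nat" where
  "shift_add v j = v j + (if Suc j < i then v (Suc j) else 0)"

lemma kernel_aut_mu_commute: "kernel_aut v \<circ> mu = mu \<circ> kernel_aut (shift_add v)"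
proof (rule gal_eqI)
  show "kernel_aut v \<circ> mu \<in> GL" "mu \<circ> kernel_aut (shift_add v) \<in> GL" by (intro gal_comp kernel_aut mu)+
  fix x assume x: "x \<in> K"
  show "(kernel_aut v \<circ> mu) x = (mu \<circ> kernel_aut (shift_add v)) x" using x mu(2) kernel_aut(2) sig_inv_K by simp
next
  fix j assume j: "j < i"
  have xiF': "\<xi> ^ n \<in> F" for n using subfield_power[OF sfF xiF] .
  have "(kernel_aut v \<circ> mu) (beta_seq j) = kernel_aut v (beta_seq j) * kernel_aut v (beta_seq (Suc j))"
    using mu(3)[OF j] field_hom_on_mult[OF subfield_L field_hom_on_Gal[OF kernel_aut(1)] beta_seq_L beta_seq_L] by simp
  also have "\<dots> = \<xi> ^ shift_add v j * (beta_seq j * beta_seq (Suc j))"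
  proof (cases "Suc j < i")
    case True then show ?thesis using kernel_aut(3)[OF j] kernel_aut(3)[OF True]
      by (simp add: shift_add_def power_add mult_ac)
  next
    case False then show ?thesis using kernel_aut(3)[OF j] kernel_aut(2) beta_seq_K[of "Suc j"] by (simp add: shift_add_def)
  qed
  also have "\<dots> = (mu \<circ> kernel_aut (shift_add v)) (beta_seq j)"
    using kernel_aut(3)[OF j] field_hom_on_mult[OF subfield_L field_hom_on_Gal[OF mu(1)] subfield_power[OF subfield_L xi_in_L] beta_seq_L] gal_F[OF mu(1) xiF'] mu(3)[OF j]
    by simp
  finally show "(kernel_aut v \<circ> mu) (beta_seq j) = (mu \<circ> kernel_aut (shift_add v)) (beta_seq j)" .
qed


lemma mu_pow_K: "x \<in> K \<Longrightarrow> (mu ^^ n) x = (sig_inv ^^ n) x"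
proof (induction n)
  case 0 then show ?case by simp
next
  case (Suc n)
  have "(sig_inv ^^ n) x \<in> K" using sig_inv_pow_K Suc.prems by blast
  then show ?case using Suc mu(2) by simp
qed

lemma mu_pow_Gal: "mu ^^ n \<in> GL" by (rule gal_pow[OF mu(1)])

lemma mu_pow_p_in_kernel: "\<exists>w. mu ^^ p = kernel_aut w"
proof (rule kernel_eq_kernel_aut[OF mu_pow_Gal])
  fix x assume "x \<in> K"
  then show "(mu ^^ p) x = x" using mu_pow_K sig_inv_pow_p by simp
qed

definition mu_p_exp :: "nat \<Rightarrow> nat" where "mu_p_exp = (SOME w. mu ^^ p = kernel_aut w)"

lemma mu_pow_p: "mu ^^ p = kernel_aut mu_p_exp"
  unfolding mu_p_exp_def using someI_ex[OF mu_pow_p_in_kernel] .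

lemma mu_p_exp_Suc: "Suc j < i \<Longrightarrow> mu_p_exp (Suc j) mod p = 0"
proof -
  assume j: "Suc j < i"
  have "mu \<circ> mu ^^ p = mu ^^ p \<circ> mu" by (simp add: fun_eq_iff funpow_swap1)
  then have "mu \<circ> kernel_aut mu_p_exp = mu \<circ> kernel_aut (shift_add mu_p_exp)"
    unfolding mu_pow_p kernel_aut_mu_commute by simp
  then have "kernel_aut mu_p_exp = kernel_aut (shift_add mu_p_exp)" by (rule gal_cancel_left[OF mu(1)])
  then have "mu_p_exp j mod p = shift_add mu_p_exp j mod p" by (rule kernel_aut_eqD) (use j in simp)
  then have "[mu_p_exp j + 0 = mu_p_exp j + mu_p_exp (Suc j)] (mod p)" using j unfolding shift_add_def cong_def by simp
  then have "[0 = mu_p_exp (Suc j)] (mod p)" by (simp only: cong_add_lcancel_nat)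
  then show ?thesis unfolding cong_def by simp
qed

lemma sigma_pow_eigenvector: "\<delta> \<in> K \<Longrightarrow> \<sigma> \<delta> = \<xi> ^ e * \<delta> \<Longrightarrow> (\<sigma> ^^ n) \<delta> = \<xi> ^ (e * n) * \<delta>"
proof (induction n)
  case 0 then show ?case by simp
next
  case (Suc n)
  have "(\<sigma> ^^ Suc n) \<delta> = \<sigma> (\<xi> ^ (e * n) * \<delta>)" using Suc by simp
  also have "\<dots> = \<xi> ^ (e * n) * \<sigma> \<delta>"
    using field_hom_on_mult[OF subfield_K field_hom_on_sigma subfield_power[OF subfield_K xi_in_K] Suc.prems(1)] sigma_F[OF subfield_power[OF sfF xiF]] by simp
  also have "\<dots> = \<xi> ^ (e * Suc n) * \<delta>" using Suc.prems(2) by (simp add: power_add mult_ac)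
  finally show ?case .
qed

lemma prod_sig_inv_pow_eq_N: "(\<Prod>k<p. (sig_inv ^^ k) \<gamma>) = N"
proof -
  define \<phi> where "\<phi> = (\<lambda>k. ((p - 1) * k) mod p)"
  have inj: "inj_on \<phi> {..<p}"
  proof (rule inj_onI)
    fix x y assume "x \<in> {..<p}" "y \<in> {..<p}" "\<phi> x = \<phi> y"
    then have "[(p - 1) * x = (p - 1) * y] (mod p)" unfolding \<phi>_def cong_def by simp
    then have "[x = y] (mod p)" using cong_mult_lcancel_nat coprime_diff_one_left_nat p_gt_0 by blast
    then show "x = y" using \<open>x \<in> {..<p}\<close> \<open>y \<in> {..<p}\<close> cong_less_modulus_unique_nat by auto
  qed
  have sub: "\<phi> ` {..<p} \<subseteq> {..<p}" unfolding \<phi>_def using p_gt_0 by auto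
  have img: "\<phi> ` {..<p} = {..<p}" by (rule endo_inj_surj[OF _ sub inj]) simp
  have bij: "bij_betw \<phi> {..<p} {..<p}" using inj img unfolding bij_betw_def by simp
  have "(\<Prod>k<p. (sig_inv ^^ k) \<gamma>) = (\<Prod>k<p. (\<sigma> ^^ \<phi> k) \<gamma>)"
    unfolding sig_inv_pow \<phi>_def using sigma_pow_mod gK by (intro prod.cong refl) blast
  also have "\<dots> = (\<Prod>k<p. (\<sigma> ^^ k) \<gamma>)" by (rule prod.reindex_bij_betw[OF bij])
  finally show ?thesis unfolding norm_KF_def .
qed

definition mu_norm :: 'a where "mu_norm = (\<Prod>k<p. (mu ^^ k) (beta_seq 0))"

lemma mu_norm_nonzero: "mu_norm \<noteq> 0"
proof -
  have "(mu ^^ k) (beta_seq 0) \<noteq> 0" for k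
    using field_hom_on_eq_0_iff[OF subfield_L field_hom_on_Gal[OF mu_pow_Gal] beta_seq_L] beta_seq_nonzero by blast
  then show ?thesis unfolding mu_norm_def by simp
qed

lemma mu_norm_power: "mu_norm ^ p = N"
proof -
  have "mu_norm ^ p = (\<Prod>k<p. ((mu ^^ k) (beta_seq 0)) ^ p)" unfolding mu_norm_def by (simp add: prod_power_distrib)
  also have "\<dots> = (\<Prod>k<p. (sig_inv ^^ k) \<gamma>)"
  proof (intro prod.cong refl)
    fix k
    have "((mu ^^ k) (beta_seq 0)) ^ p = (mu ^^ k) (beta_seq 0 ^ p)"
      using field_hom_on_power[OF subfield_L field_hom_on_Gal[OF mu_pow_Gal] beta_seq_L] by metis
    also have "\<dots> = (mu ^^ k) \<gamma>" using beta_seq_power by (simp add: gamma_seq_def)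
    also have "\<dots> = (sig_inv ^^ k) \<gamma>" using mu_pow_K gK by simp
    finally show "((mu ^^ k) (beta_seq 0)) ^ p = (sig_inv ^^ k) \<gamma>" .
  qed
  also have "\<dots> = N" by (rule prod_sig_inv_pow_eq_N)
  finally show ?thesis .
qed

lemma mu_mu_norm: assumes i0: "0 < i" shows "mu mu_norm = \<xi> ^ mu_p_exp 0 * mu_norm"
proof -
  define f where "f = (\<lambda>k. (mu ^^ k) (beta_seq 0))"
  obtain m where m: "p = Suc m" using p_gt_0 by (cases p) auto
  have fp: "f p = \<xi> ^ mu_p_exp 0 * f 0" unfolding f_def mu_pow_p using kernel_aut(3)[OF i0] by simp
  have "mu mu_norm = (\<Prod>k<p. f (Suc k))" unfolding mu_norm_def f_def
    using field_hom_on_prod[OF subfield_L field_hom_on_Gal[OF mu(1)], of "{..<p}" "\<lambda>k. (mu ^^ k) (beta_seq 0)"]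
      gal_L[OF mu_pow_Gal beta_seq_L] by simp
  also have "\<dots> = (\<Prod>k<m. f (Suc k)) * f p" unfolding m by (rule prod.lessThan_Suc)
  also have "\<dots> = \<xi> ^ mu_p_exp 0 * (f 0 * (\<Prod>k<m. f (Suc k)))" unfolding fp by (simp add: mult_ac)
  also have "f 0 * (\<Prod>k<m. f (Suc k)) = (\<Prod>k<p. f k)"
    unfolding m by (rule prod.lessThan_Suc_shift[symmetric])
  also have "\<dots> = mu_norm" unfolding mu_norm_def f_def ..
  finally show ?thesis .
qed

text \<open>Both mu_norm and the \<delta> defining the index are p-th roots of N(\<gamma>), so they differ by a power of
  \<xi>, which \<mu> fixes; comparing the eigenvalues of \<mu> on them gives the p-th power of \<mu> on \<beta>_0.\<close>

lemma mu_p_exp_0_less_p: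
  assumes i0: "0 < i" and ip: "i < p"
  shows "\<xi> ^ mu_p_exp 0 = \<xi> ^ (kummer_index p \<xi> K \<sigma> \<gamma> * (p - 1))"
proof -
  define e where "e = kummer_index p \<xi> K \<sigma> \<gamma>"
  obtain \<delta> where d: "\<delta> \<in> K" "\<delta> \<noteq> 0" "\<delta> ^ p = N" "\<sigma> \<delta> = \<xi> ^ e * \<delta>"
    using kummer_index_spec[OF ip] unfolding e_def by blast
  have "N \<noteq> 0" using d(2,3) by (metis power_not_zero)
  then have "(mu_norm / \<delta>) ^ p = 1" using mu_norm_power d(3) by (simp add: power_divide)
  then obtain s where "mu_norm / \<delta> = \<xi> ^ s" using root_of_unity_eq_prim_root_power[OF pp xp x1] by blast
  then have Ds: "mu_norm = \<xi> ^ s * \<delta>" using d(2) by (simp add: field_simps)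
  have dL: "\<delta> \<in> L" using d(1) K_subset_L by auto
  have "mu mu_norm = \<xi> ^ s * sig_inv \<delta>"
    unfolding Ds using field_hom_on_mult[OF subfield_L field_hom_on_Gal[OF mu(1)] subfield_power[OF subfield_L xi_in_L] dL]
      gal_F[OF mu(1) subfield_power[OF sfF xiF]] mu(2)[OF d(1)] by simp
  also have "sig_inv \<delta> = \<xi> ^ (e * (p - 1)) * \<delta>" unfolding sig_inv_def
    by (rule sigma_pow_eigenvector[OF d(1) d(4)])
  finally have "mu mu_norm = \<xi> ^ (e * (p - 1)) * mu_norm" unfolding Ds by (simp add: mult_ac)
  then show ?thesis using mu_mu_norm[OF i0] mu_norm_nonzero unfolding e_def by simp
qed

lemma mu_p_exp_0_eq_p:
  assumes ip: "i = p"
  shows "mu_p_exp 0 mod p = 0"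
proof -
  have i0: "0 < i" using ip p_gt_0 by simp
  define S where "S = {x \<in> L. x \<noteq> 0}"
  have "(mu ^^ p) (beta_seq 0) = (\<Prod>l\<le>p. beta_seq (0 + l) ^ (p choose l))"
  proof (rule funpow_binomial_prod[where S = S and X = beta_seq])
    show "\<And>x y. x \<in> S \<Longrightarrow> y \<in> S \<Longrightarrow> mu (x * y) = mu x * mu y"
      unfolding S_def using field_hom_on_mult[OF subfield_L field_hom_on_Gal[OF mu(1)]] by auto
    show "\<And>x. x \<in> S \<Longrightarrow> mu x \<in> S" unfolding S_def
      using gal_L[OF mu(1)] field_hom_on_eq_0_iff[OF subfield_L field_hom_on_Gal[OF mu(1)]] by auto
    show "\<And>l. beta_seq l \<in> S" unfolding S_def using beta_seq_L beta_seq_nonzero by auto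
    show "\<And>l. mu (beta_seq l) = beta_seq l * beta_seq (Suc l)" by (rule mu_beta_seq)
  qed
  also have "\<dots> = beta_seq 0 * beta_seq p * (\<Prod>l\<in>{1..<p}. beta_seq l ^ (p choose l))"
    by (subst prod_atMost_split_ends[OF p_gt_0]) simp
  also have "(\<Prod>l\<in>{1..<p}. beta_seq l ^ (p choose l)) = (\<Prod>l\<in>{1..<p}. gamma_seq l ^ ((p choose l) div p))"
  proof (intro prod.cong refl)
    fix l assume "l \<in> {1..<p}"
    then have "p choose l = p * ((p choose l) div p)" by (intro prime_choose_eq[OF pp]) auto
    then show "beta_seq l ^ (p choose l) = gamma_seq l ^ ((p choose l) div p)"
      by (metis beta_seq_power power_mult)
  qed
  also have "beta_seq p = inverse (\<Prod>l\<in>{1..<p}. gamma_seq l ^ ((p choose l) div p))"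
    using beta_seq_i ip unfolding top_root_def by simp
  also have "beta_seq 0 * inverse (\<Prod>l\<in>{1..<p}. gamma_seq l ^ ((p choose l) div p)) * (\<Prod>l\<in>{1..<p}. gamma_seq l ^ ((p choose l) div p)) = beta_seq 0"
    using gamma_seq_nonzero by simp
  finally have "(mu ^^ p) (beta_seq 0) = beta_seq 0" by simp
  then have "\<xi> ^ mu_p_exp 0 * beta_seq 0 = \<xi> ^ 0 * beta_seq 0" unfolding mu_pow_p using kernel_aut(3)[OF i0] by simp
  then have "\<xi> ^ mu_p_exp 0 = \<xi> ^ 0" using beta_seq_nonzero by (metis mult_cancel_right)
  then have "mu_p_exp 0 mod p = 0 mod p" using prim_root_power_eq_iff[OF pp xp x1] by blast
  then show ?thesis by simp
qed

definition sigma_lift :: "'a \<Rightarrow> 'a" where "sigma_lift = mu ^^ (p - 1)"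

lemma sigma_lift_Gal: "sigma_lift \<in> GL" unfolding sigma_lift_def by (rule mu_pow_Gal)

lemma sigma_lift_pow_Gal: "sigma_lift ^^ k \<in> GL" by (rule gal_pow[OF sigma_lift_Gal])

lemma sigma_lift_K: "x \<in> K \<Longrightarrow> sigma_lift x = \<sigma> x"
proof -
  assume x: "x \<in> K"
  have "sigma_lift x = (\<sigma> ^^ ((p - 1) * (p - 1))) x" unfolding sigma_lift_def using mu_pow_K[OF x] sig_inv_pow by simp
  also have "\<dots> = (\<sigma> ^^ (((p - 1) * (p - 1)) mod p)) x" using sigma_pow_mod x by blast
  also have "((p - 1) * (p - 1)) mod p = 1"
  proof -
    have "(p * (p - 2) + 1) mod p = 1 mod p" by (rule mod_mult_self4)
    then show ?thesis unfolding p_minus_1_squared using p_gt_1 by simp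
  qed
  finally show ?thesis by simp
qed

lemma sigma_lift_pow_K: "x \<in> K \<Longrightarrow> (sigma_lift ^^ k) x = (\<sigma> ^^ k) x"
proof (induction k)
  case 0 then show ?case by simp
next
  case (Suc k)
  then show ?case using sigma_lift_K sigma_pow_K by simp
qed

lemma kernel_aut_pow: "kernel_aut w ^^ n = kernel_aut (\<lambda>j. n * w j)"
proof (induction n)
  case 0 then show ?case using kernel_aut_eq_id[of "\<lambda>j. 0"] by simp
next
  case (Suc n)
  then show ?case by (simp add: kernel_aut_comp)
qed

lemma sigma_lift_kernel_aut: "sigma_lift \<circ> kernel_aut v = kernel_aut (shift_add v) \<circ> sigma_lift"
proof (rule gal_cancel_right[OF mu(1)])
  have e1: "mu ^^ (p - 1) \<circ> mu = mu ^^ p" using p_gt_0 by (simp add: funpow_Suc_right[symmetric])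
  have "sigma_lift \<circ> kernel_aut v \<circ> mu = mu ^^ (p - 1) \<circ> (kernel_aut v \<circ> mu)"
    unfolding sigma_lift_def by (simp add: comp_assoc)
  also have "\<dots> = (mu ^^ (p - 1) \<circ> mu) \<circ> kernel_aut (shift_add v)" unfolding kernel_aut_mu_commute
    by (simp add: comp_assoc)
  also have "\<dots> = kernel_aut (\<lambda>j. mu_p_exp j + shift_add v j)" unfolding e1 mu_pow_p kernel_aut_comp ..
  also have "\<dots> = kernel_aut (\<lambda>j. shift_add v j + mu_p_exp j)" by (simp add: add.commute)
  also have "\<dots> = kernel_aut (shift_add v) \<circ> (mu ^^ (p - 1) \<circ> mu)" unfolding e1 mu_pow_p kernel_aut_comp ..
  also have "\<dots> = kernel_aut (shift_add v) \<circ> sigma_lift \<circ> mu" unfolding sigma_lift_def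
    by (simp add: comp_assoc)
  finally show "sigma_lift \<circ> kernel_aut v \<circ> mu = kernel_aut (shift_add v) \<circ> sigma_lift \<circ> mu" .
qed

lemma sigma_lift_pow_p: "sigma_lift ^^ p = kernel_aut (\<lambda>j. (p - 1) * mu_p_exp j)"
proof -
  have "sigma_lift ^^ p = mu ^^ ((p - 1) * p)" unfolding sigma_lift_def by (simp add: funpow_mult)
  also have "\<dots> = (mu ^^ p) ^^ (p - 1)" by (simp add: funpow_mult mult.commute)
  also have "\<dots> = kernel_aut (\<lambda>j. (p - 1) * mu_p_exp j)" unfolding mu_pow_p kernel_aut_pow ..
  finally show ?thesis .
qed


section \<open>The isomorphism with B_(i,e)\<close>

definition e_index :: nat where "e_index = (if i < p then kummer_index p \<xi> K \<sigma> \<gamma> else 0)"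

text \<open>The coefficient of (\<tau> - 1)^l in m \<in> A/A_i is the exponent of \<xi> by which aut_of_vec m
  multiplies \<beta>_(i-1-l); in these coordinates conjugation by \<sigma>~ is multiplication by \<tau>
  (sigma_lift_aut_of_vec), and Phi (m, k) stands for m \<sigma>~^k.\<close>

definition rev_exps :: "(nat \<Rightarrow> int) \<Rightarrow> nat \<Rightarrow> nat" where "rev_exps m j = nat (m (i - 1 - j))"
definition aut_of_vec :: "(nat \<Rightarrow> int) \<Rightarrow> 'a \<Rightarrow> 'a" where "aut_of_vec m = kernel_aut (rev_exps m)"
definition Phi :: "(nat \<Rightarrow> int) \<times> nat \<Rightarrow> 'a \<Rightarrow> 'a" where "Phi x = aut_of_vec (fst x) \<circ> sigma_lift ^^ snd x"

abbreviation "nonneg m \<equiv> (\<forall>j. 0 \<le> m j)"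

lemma aut_of_vec_Gal: "aut_of_vec m \<in> GL" unfolding aut_of_vec_def by (rule kernel_aut(1))
lemma aut_of_vec_K: "x \<in> K \<Longrightarrow> aut_of_vec m x = x" unfolding aut_of_vec_def by (rule kernel_aut(2))

lemma nonneg_A_add: "nonneg (A_add p m1 m2)" unfolding A_add_def using p_gt_0 by simp
lemma nonneg_tau: "nonneg (tau_act p i m)" unfolding tau_act_def using p_gt_0 by simp
lemma nonneg_taup: "nonneg m \<Longrightarrow> nonneg ((tau_act p i ^^ k) m)"
  by (cases k) (simp_all add: nonneg_tau)
lemma nonneg_top: "nonneg (A_top p i e)" unfolding A_top_def using p_gt_0 by simp

lemma aut_of_vec_add:
  assumes "nonneg m1" "nonneg m2"
  shows "aut_of_vec (A_add p m1 m2) = aut_of_vec m1 \<circ> aut_of_vec m2"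
  unfolding aut_of_vec_def kernel_aut_comp
  by (rule kernel_aut_cong) (simp add: rev_exps_def A_add_def nat_mod_add assms)

lemma aut_of_vec_zero: "aut_of_vec (\<lambda>_. 0) = id"
  unfolding aut_of_vec_def by (rule kernel_aut_eq_id) (simp add: rev_exps_def)

lemma sigma_lift_aut_of_vec:
  assumes m: "nonneg m"
  shows "sigma_lift \<circ> aut_of_vec m = aut_of_vec (tau_act p i m) \<circ> sigma_lift"
  unfolding aut_of_vec_def sigma_lift_kernel_aut
proof -
  have "kernel_aut (shift_add (rev_exps m)) = kernel_aut (rev_exps (tau_act p i m))"
  proof (rule kernel_aut_cong)
    fix j assume j: "j < i"
    show "shift_add (rev_exps m) j mod p = rev_exps (tau_act p i m) j mod p"
    proof (cases "Suc j < i")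
      case True
      then have "i - 1 - j \<noteq> 0" "i - 1 - j - 1 = i - 1 - Suc j" by auto
      then show ?thesis using j True m unfolding shift_add_def rev_exps_def tau_act_def by (simp add: nat_mod_add)
    next
      case False
      then have "i - 1 - j = 0" using j by simp
      then show ?thesis using j False m unfolding shift_add_def rev_exps_def tau_act_def by (simp add: nat_mod_distrib)
    qed
  qed
  then show "kernel_aut (shift_add (rev_exps m)) \<circ> sigma_lift = kernel_aut (rev_exps (tau_act p i m)) \<circ> sigma_lift" by simp
qed

lemma sigma_lift_pow_aut_of_vec:
  "nonneg m \<Longrightarrow> sigma_lift ^^ k \<circ> aut_of_vec m = aut_of_vec ((tau_act p i ^^ k) m) \<circ> sigma_lift ^^ k"
proof (induction k arbitrary: m)
  case 0 then show ?case by simp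
next
  case (Suc k)
  have "sigma_lift ^^ Suc k \<circ> aut_of_vec m = sigma_lift ^^ k \<circ> (sigma_lift \<circ> aut_of_vec m)"
    by (simp only: funpow_Suc_right comp_assoc)
  also have "\<dots> = (sigma_lift ^^ k \<circ> aut_of_vec (tau_act p i m)) \<circ> sigma_lift"
    unfolding sigma_lift_aut_of_vec[OF Suc.prems] by (simp add: comp_assoc)
  also have "\<dots> = aut_of_vec ((tau_act p i ^^ k) (tau_act p i m)) \<circ> (sigma_lift ^^ k \<circ> sigma_lift)"
    unfolding Suc.IH[OF nonneg_tau] by (simp add: comp_assoc)
  also have "\<dots> = aut_of_vec ((tau_act p i ^^ Suc k) m) \<circ> sigma_lift ^^ Suc k"
    by (simp add: funpow_Suc_right del: funpow.simps(2))
  finally show ?case .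
qed

lemma rev_exps_A_top: "j < i \<Longrightarrow> rev_exps (A_top p i e) j = (if j = 0 then e mod p else 0)"
  unfolding rev_exps_def A_top_def by (auto simp: nat_mod_distrib)

lemma sigma_lift_pow_p_eq: "sigma_lift ^^ p = aut_of_vec (A_top p i e_index)"
  unfolding sigma_lift_pow_p aut_of_vec_def
proof (rule kernel_aut_cong)
  fix j assume j: "j < i"
  show "(p - 1) * mu_p_exp j mod p = rev_exps (A_top p i e_index) j mod p"
  proof (cases "j = 0")
    case False
    then obtain j' where j': "j = Suc j'" by (cases j) auto
    have "mu_p_exp j mod p = 0" using mu_p_exp_Suc j unfolding j' by simp
    then have "(p - 1) * mu_p_exp j mod p = 0" by (metis mod_mult_right_eq mult_0_right mod_0)
    then show ?thesis using rev_exps_A_top[OF j] False by simp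
  next
    case True
    then have i0: "0 < i" using j by simp
    show ?thesis
    proof (cases "i < p")
      case True
      define e where "e = kummer_index p \<xi> K \<sigma> \<gamma>"
      have ep: "e < p" using kummer_index_spec[OF True] unfolding e_def by simp
      have "\<xi> ^ mu_p_exp 0 = \<xi> ^ (e * (p - 1))" using mu_p_exp_0_less_p[OF i0 True] unfolding e_def .
      then have w: "mu_p_exp 0 mod p = (e * (p - 1)) mod p" using prim_root_power_eq_iff[OF pp xp x1] by blast
      have "(p - 1) * mu_p_exp 0 mod p = (p - 1) * (e * (p - 1)) mod p"
        by (metis w mod_mult_right_eq)
      also have "(p - 1) * (e * (p - 1)) = e * ((p - 1) * (p - 1))" by (simp only: mult_ac)
      also have "\<dots> = e * (p * (p - 2)) + e" unfolding p_minus_1_squared by (simp add: distrib_left)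
      also have "(e * (p * (p - 2)) + e) mod p = e mod p" by (metis mod_mult_self4 mult.left_commute add.commute)
      finally show ?thesis using rev_exps_A_top[OF j] \<open>j = 0\<close> True ep unfolding e_index_def e_def by simp
    next
      case False
      then have "i = p" using i_le_p by simp
      then have "mu_p_exp 0 mod p = 0" using mu_p_exp_0_eq_p by simp
      then have "(p - 1) * mu_p_exp 0 mod p = 0" by (metis mod_mult_right_eq mult_0_right mod_0)
      then show ?thesis using rev_exps_A_top[OF j] \<open>j = 0\<close> False unfolding e_index_def by simp
    qed
  qed
qed

abbreviation B where "B \<equiv> B_grp p i e_index"

lemma carrier_B: "carrier B = Avec p i \<times> {..<p}" unfolding B_grp_def by simp

lemma mult_B: "(m1, k1) \<otimes>\<^bsub>B\<^esub> (m2, k2) =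
   (A_add p (A_add p m1 ((tau_act p i ^^ k1) m2)) (if p \<le> k1 + k2 then A_top p i e_index else (\<lambda>_. 0)),
    (k1 + k2) mod p)"
  unfolding B_grp_def by simp

lemma Avec_nonneg: "m \<in> Avec p i \<Longrightarrow> nonneg m" unfolding Avec_def by simp

lemma tau_act_pow_vanish: "j \<ge> i \<Longrightarrow> m \<in> Avec p i \<Longrightarrow> (tau_act p i ^^ k) m j = 0"
  by (cases k) (auto simp: tau_act_def Avec_def)

lemma B_mult_closed:
  assumes x: "x \<in> carrier B" and y: "y \<in> carrier B"
  shows "x \<otimes>\<^bsub>B\<^esub> y \<in> carrier B"
proof -
  obtain m1 k1 m2 k2 where xy: "x = (m1, k1)" "y = (m2, k2)" by (cases x, cases y) auto
  have m: "m1 \<in> Avec p i" "m2 \<in> Avec p i" using x y xy carrier_B by auto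
  show ?thesis unfolding xy mult_B carrier_B
  proof (intro SigmaI)
    show "(k1 + k2) mod p \<in> {..<p}" using p_gt_0 by simp
    show "A_add p (A_add p m1 ((tau_act p i ^^ k1) m2)) (if p \<le> k1 + k2 then A_top p i e_index else (\<lambda>_. 0)) \<in> Avec p i"
      unfolding Avec_def
    proof (intro CollectI allI conjI impI)
      fix j
      show "0 \<le> A_add p (A_add p m1 ((tau_act p i ^^ k1) m2)) (if p \<le> k1 + k2 then A_top p i e_index else (\<lambda>_. 0)) j"
        unfolding A_add_def using p_gt_0 by simp
      show "A_add p (A_add p m1 ((tau_act p i ^^ k1) m2)) (if p \<le> k1 + k2 then A_top p i e_index else (\<lambda>_. 0)) j < int p"
        unfolding A_add_def using p_gt_0 by simp
      assume "i \<le> j"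
      then show "A_add p (A_add p m1 ((tau_act p i ^^ k1) m2)) (if p \<le> k1 + k2 then A_top p i e_index else (\<lambda>_. 0)) j = 0"
        using m tau_act_pow_vanish[of j m2 k1] unfolding A_add_def A_top_def Avec_def by auto
    qed
  qed
qed

lemma Phi_Gal: "Phi x \<in> GL" unfolding Phi_def by (intro gal_comp aut_of_vec_Gal sigma_lift_pow_Gal)

lemma Phi_K: "z \<in> K \<Longrightarrow> Phi x z = (\<sigma> ^^ snd x) z"
  unfolding Phi_def using sigma_lift_pow_K aut_of_vec_K sigma_pow_K by simp

lemma Phi_mult:
  assumes x: "x \<in> carrier B" and y: "y \<in> carrier B"
  shows "Phi (x \<otimes>\<^bsub>B\<^esub> y) = Phi x \<circ> Phi y"
proof -
  obtain m1 k1 m2 k2 where xy: "x = (m1, k1)" "y = (m2, k2)" by (cases x, cases y) auto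
  have m: "m1 \<in> Avec p i" "m2 \<in> Avec p i" and k: "k1 < p" "k2 < p" using x y xy carrier_B by auto
  have n1: "nonneg m1" "nonneg m2" using m Avec_nonneg by auto
  define X where "X = (if p \<le> k1 + k2 then A_top p i e_index else (\<lambda>_. 0))"
  have nX: "nonneg X" unfolding X_def using nonneg_top by simp
  have split: "sigma_lift ^^ (k1 + k2) = aut_of_vec X \<circ> sigma_lift ^^ ((k1 + k2) mod p)"
  proof (cases "p \<le> k1 + k2")
    case True
    then have e: "k1 + k2 = p + (k1 + k2) mod p" using k by (simp add: le_mod_geq)
    have "sigma_lift ^^ (k1 + k2) = sigma_lift ^^ p \<circ> sigma_lift ^^ ((k1 + k2) mod p)"
      by (subst e) (simp add: funpow_add)
    then show ?thesis using True sigma_lift_pow_p_eq unfolding X_def by simp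
  next
    case False
    then show ?thesis unfolding X_def using aut_of_vec_zero by simp
  qed
  have "Phi x \<circ> Phi y = aut_of_vec m1 \<circ> (sigma_lift ^^ k1 \<circ> aut_of_vec m2) \<circ> sigma_lift ^^ k2"
    unfolding Phi_def xy by (simp add: comp_assoc)
  also have "\<dots> = aut_of_vec m1 \<circ> aut_of_vec ((tau_act p i ^^ k1) m2) \<circ> sigma_lift ^^ (k1 + k2)"
    unfolding sigma_lift_pow_aut_of_vec[OF n1(2)] by (simp add: comp_assoc funpow_add)
  also have "\<dots> = aut_of_vec m1 \<circ> aut_of_vec ((tau_act p i ^^ k1) m2) \<circ> aut_of_vec X \<circ> sigma_lift ^^ ((k1 + k2) mod p)"
    unfolding split by (simp add: comp_assoc)
  also have "\<dots> = aut_of_vec (A_add p (A_add p m1 ((tau_act p i ^^ k1) m2)) X) \<circ> sigma_lift ^^ ((k1 + k2) mod p)"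
    unfolding aut_of_vec_add[OF nonneg_A_add nX] aut_of_vec_add[OF n1(1) nonneg_taup[OF n1(2)]] by (simp add: comp_assoc)
  also have "\<dots> = Phi (x \<otimes>\<^bsub>B\<^esub> y)" unfolding Phi_def xy mult_B X_def by simp
  finally show ?thesis by simp
qed

lemma Phi_inj: "inj_on Phi (carrier B)"
proof (rule inj_onI)
  fix x y assume x: "x \<in> carrier B" and y: "y \<in> carrier B" and e: "Phi x = Phi y"
  obtain m k m' k' where xy: "x = (m, k)" "y = (m', k')" by (cases x, cases y) auto
  have m: "m \<in> Avec p i" "m' \<in> Avec p i" and k: "k < p" "k' < p" using x y xy carrier_B by auto
  have "Phi x \<alpha> = \<xi> ^ k * \<alpha>" "Phi y \<alpha> = \<xi> ^ k' * \<alpha>"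
    using Phi_K[OF alpha_in_K] sigma_pow_alpha xy by auto
  then have "\<xi> ^ k = \<xi> ^ k'" using e alpha_nonzero by (metis mult_cancel_right)
  then have kk: "k = k'" using prim_root_power_inj[OF pp xp x1 k] by simp
  have "aut_of_vec m \<circ> sigma_lift ^^ k = aut_of_vec m' \<circ> sigma_lift ^^ k" using e unfolding Phi_def xy kk by simp
  then have "aut_of_vec m = aut_of_vec m'" by (rule gal_cancel_right[OF sigma_lift_pow_Gal])
  then have R: "rev_exps m j mod p = rev_exps m' j mod p" if "j < i" for j
    using kernel_aut_eqD that unfolding aut_of_vec_def by blast
  have "m = m'"
  proof
    fix l show "m l = m' l"
    proof (cases "l < i")
      case True
      have "rev_exps m (i - 1 - l) mod p = rev_exps m' (i - 1 - l) mod p" using R True by simp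
      moreover have "i - 1 - (i - 1 - l) = l" using True by simp
      ultimately have "nat (m l) mod p = nat (m' l) mod p" unfolding rev_exps_def by simp
      moreover have "0 \<le> m l" "m l < int p" "0 \<le> m' l" "m' l < int p" using m unfolding Avec_def by auto
      ultimately show ?thesis by (simp add: nat_less_iff)
    next
      case False then show ?thesis using m unfolding Avec_def by simp
    qed
  qed
  then show "x = y" using xy kk by simp
qed

lemma sigma_lift_pow_kernel_aut_commute:
  assumes u: "shift_add u = u"
  shows "sigma_lift ^^ n \<circ> kernel_aut u = kernel_aut u \<circ> sigma_lift ^^ n"
proof (induction n)
  case 0
  then show ?case by simp
next
  case (Suc n)
  have "sigma_lift ^^ Suc n \<circ> kernel_aut u = sigma_lift ^^ n \<circ> (sigma_lift \<circ> kernel_aut u)"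
    by (simp only: funpow_Suc_right comp_assoc)
  also have "\<dots> = (sigma_lift ^^ n \<circ> kernel_aut u) \<circ> sigma_lift"
    unfolding sigma_lift_kernel_aut u by (simp only: comp_assoc)
  also have "\<dots> = kernel_aut u \<circ> sigma_lift ^^ Suc n" unfolding Suc by (simp only: comp_assoc funpow_Suc_right)
  finally show ?case .
qed

text \<open>\<sigma>~^(p k) = (\<sigma>~^p)^k lies in the kernel and has an inverse there that commutes with \<sigma>~.\<close>

lemma sigma_lift_pow_mult_p_inverse:
  obtains u where "sigma_lift ^^ (p * k) \<circ> kernel_aut u = id" "shift_add u = u"
proof -
  define Rt where "Rt = rev_exps (A_top p i e_index)"
  define u where "u = (\<lambda>j. (p - 1) * k * Rt j)"
  have "sigma_lift ^^ (p * k) = (sigma_lift ^^ p) ^^ k" by (simp add: funpow_mult)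
  then have "sigma_lift ^^ (p * k) = kernel_aut (\<lambda>j. k * Rt j)"
    using sigma_lift_pow_p_eq kernel_aut_pow unfolding aut_of_vec_def Rt_def by simp
  moreover have "kernel_aut (\<lambda>j. k * Rt j) \<circ> kernel_aut u = id"
    unfolding kernel_aut_comp u_def
  proof (rule kernel_aut_eq_id)
    fix j
    have "k * Rt j + (p - 1) * k * Rt j = p * (k * Rt j)" using p_gt_0 by (cases p) (auto simp: algebra_simps)
    then show "(k * Rt j + (p - 1) * k * Rt j) mod p = 0" by simp
  qed
  moreover have "shift_add u = u"
  proof
    fix j
    have "Suc j < i \<Longrightarrow> Rt (Suc j) = 0" unfolding Rt_def using rev_exps_A_top by simp
    then show "shift_add u j = u j" unfolding shift_add_def u_def by auto
  qed
  ultimately show ?thesis using that by simp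
qed

lemma Gal_decompose:
  assumes g: "g \<in> GL"
  obtains v k where "k < p" "g = kernel_aut v \<circ> sigma_lift ^^ k"
proof -
  obtain k where k: "k < p" "\<And>x. x \<in> K \<Longrightarrow> g x = (\<sigma> ^^ k) x" using gal_restrict[OF g] by blast
  define h where "h = g \<circ> sigma_lift ^^ ((p - 1) * k)"
  have hK: "h x = x" if "x \<in> K" for x
  proof -
    have "h x = (\<sigma> ^^ k) ((\<sigma> ^^ ((p - 1) * k)) x)"
      unfolding h_def using sigma_lift_pow_K that k(2) sigma_pow_K by simp
    also have "\<dots> = (\<sigma> ^^ (p * k)) x" unfolding funpow_apply_add using p_gt_0
      by (cases p) (auto simp: algebra_simps)
    also have "\<dots> = x" using sigma_pow_mult_p that by simp
    finally show ?thesis .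
  qed
  obtain v where hv: "h = kernel_aut v"
    using kernel_eq_kernel_aut[OF _ hK] g sigma_lift_pow_Gal unfolding h_def by (blast intro: gal_comp)
  obtain u where u: "sigma_lift ^^ (p * k) \<circ> kernel_aut u = id" "shift_add u = u"
    by (rule sigma_lift_pow_mult_p_inverse)
  have "kernel_aut v \<circ> sigma_lift ^^ k = g \<circ> sigma_lift ^^ (p * k)"
  proof -
    have "(p - 1) * k + k = p * k" using p_gt_0 by (cases p) auto
    then show ?thesis unfolding hv[symmetric] h_def by (simp add: comp_assoc funpow_add[symmetric])
  qed
  then have "g = kernel_aut v \<circ> (sigma_lift ^^ k \<circ> kernel_aut u)"
    using u(1) by (metis comp_assoc comp_id)
  also have "\<dots> = kernel_aut (\<lambda>j. v j + u j) \<circ> sigma_lift ^^ k"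
    unfolding sigma_lift_pow_kernel_aut_commute[OF u(2)] kernel_aut_comp[symmetric] by (simp add: comp_assoc)
  finally show ?thesis using that k(1) by blast
qed

lemma Phi_surj: "g \<in> GL \<Longrightarrow> \<exists>x\<in>carrier B. Phi x = g"
proof -
  assume "g \<in> GL"
  then obtain v k where k: "k < p" and g: "g = kernel_aut v \<circ> sigma_lift ^^ k" by (rule Gal_decompose)
  define m where "m = (\<lambda>l. if l < i then int (v (i - 1 - l) mod p) else 0)"
  have "aut_of_vec m = kernel_aut v"
    unfolding aut_of_vec_def
  proof (rule kernel_aut_cong)
    fix j assume j: "j < i"
    then have "i - 1 - j < i" "i - 1 - (i - 1 - j) = j" by auto
    then show "rev_exps m j mod p = v j mod p" unfolding rev_exps_def m_def by simp
  qed
  then have "Phi (m, k) = g" unfolding Phi_def g by simp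
  moreover have "m \<in> Avec p i" unfolding Avec_def m_def using p_gt_0 by auto
  ultimately show ?thesis using k carrier_B by auto
qed

lemma iso_as_extension_L: "iso_as_extension L K F \<sigma> B"
proof -
  have "Phi ` carrier B = GL"
  proof
    show "Phi ` carrier B \<subseteq> GL" using Phi_Gal by auto
    show "GL \<subseteq> Phi ` carrier B" using Phi_surj by (metis image_eqI subsetI)
  qed
  then have bij: "bij_betw Phi (carrier B) GL"
    unfolding bij_betw_def using Phi_inj by auto
  define \<phi> where "\<phi> = the_inv_into (carrier B) Phi"
  have bij\<phi>: "bij_betw \<phi> GL (carrier B)" unfolding \<phi>_def by (rule bij_betw_the_inv_into[OF bij])
  have \<phi>in: "\<phi> g \<in> carrier B" if "g \<in> GL" for g using bij_betwE[OF bij\<phi>] that by blast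
  have Phi\<phi>: "Phi (\<phi> g) = g" if "g \<in> GL" for g
    unfolding \<phi>_def using f_the_inv_into_f_bij_betw[OF bij that] .
  have \<phi>Phi: "\<phi> (Phi x) = x" if "x \<in> carrier B" for x
    unfolding \<phi>_def using the_inv_into_f_f[OF Phi_inj that] .
  have hom: "\<phi> \<in> hom (Gal_group L F) B"
    unfolding hom_def
  proof (intro CollectI conjI ballI)
    show "\<phi> \<in> carrier (Gal_group L F) \<rightarrow> carrier B" unfolding Gal_group_def using \<phi>in by auto
    fix g1 g2 assume g: "g1 \<in> carrier (Gal_group L F)" "g2 \<in> carrier (Gal_group L F)"
    then have g': "g1 \<in> GL" "g2 \<in> GL" unfolding Gal_group_def by auto
    have "Phi (\<phi> g1 \<otimes>\<^bsub>B\<^esub> \<phi> g2) = g1 \<circ> g2"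
      using Phi_mult[OF \<phi>in \<phi>in] g' Phi\<phi> by simp
    then have "\<phi> (g1 \<circ> g2) = \<phi> g1 \<otimes>\<^bsub>B\<^esub> \<phi> g2"
      using \<phi>Phi[OF B_mult_closed[OF \<phi>in \<phi>in]] g' by metis
    then show "\<phi> (g1 \<otimes>\<^bsub>Gal_group L F\<^esub> g2) = \<phi> g1 \<otimes>\<^bsub>B\<^esub> \<phi> g2"
      unfolding Gal_group_def by simp
  qed
  have "\<phi> \<in> iso (Gal_group L F) B"
    unfolding iso_def using hom bij\<phi> unfolding Gal_group_def by simp
  moreover have "\<forall>g\<in>GL. \<forall>x\<in>K. g x = (\<sigma> ^^ snd (\<phi> g)) x"
    using Phi_K Phi\<phi> by metis
  ultimately show ?thesis unfolding iso_as_extension_def by blast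
qed

end


theorem lemma3:
  fixes p :: nat and F K :: "'a::field set" and \<xi> a \<alpha> \<gamma> :: 'a and \<sigma> :: "'a \<Rightarrow> 'a"
  assumes p_prime: "prime p" and p_odd: "odd p"
    and F_field: "is_subfield F"
    and xi: "\<xi> \<in> F" "\<xi> ^ p = 1" "\<xi> \<noteq> 1"
    and a: "a \<in> F" "a \<noteq> 0" "\<alpha> ^ p = a" "\<not> (\<exists>x\<in>F. x ^ p = a)"
    and K_def: "K = field_gen (F \<union> {\<alpha>})"
    and sigma: "is_aut_over K F \<sigma>" "\<sigma> \<alpha> = \<xi> * \<alpha>"
    and roots: "\<forall>x\<in>K. \<exists>y. y ^ p = x"
    and gamma: "\<gamma> \<in> K" "\<gamma> \<noteq> 0"
  shows "(mod_length p K \<sigma> \<gamma> < p \<longrightarrow>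
            in_J p K \<sigma> (p - 1) \<gamma> \<and>
            iso_as_extension (L_M p K \<sigma> \<gamma>) K F \<sigma>
              (B_grp p (mod_length p K \<sigma> \<gamma>) (kummer_index p \<xi> K \<sigma> \<gamma>)))
       \<and> (mod_length p K \<sigma> \<gamma> = p \<longrightarrow>
            iso_as_extension (L_M p K \<sigma> \<gamma>) K F \<sigma> (B_grp p p 0))"
proof -
  interpret M: cyclic_kummer p F K \<xi> a \<alpha> \<gamma> \<sigma>
    using p_prime F_field xi a K_def sigma roots gamma by unfold_locales auto
  have ml: "mod_length p K \<sigma> \<gamma> = M.i" by (simp add: M.i_def)
  have LM: "L_M p K \<sigma> \<gamma> = M.L" by (rule M.L_M_eq_L)
  show ?thesis
  proof (intro conjI impI)
    assume "mod_length p K \<sigma> \<gamma> < p"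
    then have ip: "M.i < p" using ml by simp
    show "in_J p K \<sigma> (p - 1) \<gamma>" by (rule M.in_J_p_minus_1[OF ip])
    show "iso_as_extension (L_M p K \<sigma> \<gamma>) K F \<sigma> (B_grp p (mod_length p K \<sigma> \<gamma>) (kummer_index p \<xi> K \<sigma> \<gamma>))"
      using M.iso_as_extension_L ip unfolding LM ml M.e_index_def by simp
  next
    assume "mod_length p K \<sigma> \<gamma> = p"
    then have ip: "M.i = p" using ml by simp
    show "iso_as_extension (L_M p K \<sigma> \<gamma>) K F \<sigma> (B_grp p p 0)"
      using M.iso_as_extension_L ip unfolding LM M.e_index_def by simp
  qed
qed

end
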